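(* Let $\mathfrak g=\mathfrak d_4$ and let $\mathcal L_{\mathfrak d_4}(-2\Lambda_0)$ be the simple affine vertex algebra of $\widehat{\mathfrak d}_4$ at level $-2$. For $i\in\{1,3,4\}$, the spectral flowed module $\sigma^{\bar\Lambda_i}(\mathcal L_{\mathfrak d_4}(-2\Lambda_0))$ is isomorphic, as a $\widehat{\mathfrak d}_4$-module, to the irreducible highest weight module $\mathcal L_{\mathfrak d_4}(-2\Lambda_i)$.
   Context: $\alpha_1,\dots,\alpha_4$ are the simple roots of $\mathfrak d_4$ with $\alpha_2$ the central node, the invariant form normalized so $(\alpha|\alpha)=2$ for roots (so roots and coroots, weights and coweights are identified via the form); $\bar\Lambda_i$ are the fundamental weights of $\mathfrak d_4$ and $\Lambda_0,\dots,\Lambda_4$ the fundamental weights of $\widehat{\mathfrak d}_4$. $\mathcal L_{\mathfrak d_4}(\Lambda)$ denotes the irreducible highest weight $\widehat{\mathfrak d}_4$-module of highest weight $\Lambda$. For $\mu$ in the Cartan subalgebra $\mathfrak h$ (here $\mu=\bar\Lambda_i$ viewed in $\mathfrak h$ via the form), and a module $(M,Y_M)$ of level $k$, the spectral flowed module $\sigma^{\mu}(M)=(M,Y_M(\Delta_\mu(z)\cdot,z))$ with Li's operator $\Delta_\mu(z)=z^{\mu_{(0)}}\exp\big(\sum_{n\ge1}\frac{\mu_{(n)}}{-n}(-z)^{-n}\big)$; equivalently, $\sigma^{\mu}(M)$ is the space $M$ on which the root vector $e^\alpha_n$ acts as $e^\alpha_{n+\langle\mu,\alpha\rangle}$ and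 $h_n$ acts as $h_n+\delta_{n,0}(\mu|h)K$ ($K$ the central element acting by $k$). *)

theory Defs
  imports Complex_Main
begin

text \<open>Concrete model of d4 = so(8,C). Matrices are functions nat => nat => complex,
  only indices 0..7 matter. Basis order: e_1..e_4 (indices 0..3), e_{-1}..e_{-4} (indices 4..7);
  so(8) preserves the symmetric form S with S(e_i,e_{-i}) = 1.\<close>

type_synonym mat = "nat \<Rightarrow> nat \<Rightarrow> complex"

definition pidx :: "nat \<Rightarrow> nat" where "pidx a = (a + 4) mod 8"

definition supp8 :: "mat \<Rightarrow> bool" where
  "supp8 X \<longleftrightarrow> (\<forall>a b. (8 \<le> a \<or> 8 \<le> b) \<longrightarrow> X a b = 0)"

definition so8 :: "mat set" where
  "so8 = {X. supp8 X \<and> (\<forall>a<8. \<forall>b<8. X (pidx b) a + X (pidx a) b = 0)}"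

definition mmul :: "mat \<Rightarrow> mat \<Rightarrow> mat" where
  "mmul X Y = (\<lambda>a b. \<Sum>c<8. X a c * Y c b)"

definition bracket :: "mat \<Rightarrow> mat \<Rightarrow> mat" where
  "bracket X Y = (\<lambda>a b. mmul X Y a b - mmul Y X a b)"

text \<open>Normalized invariant form (roots have square length 2): (X|Y) = 1/2 tr(XY).\<close>
definition nform :: "mat \<Rightarrow> mat \<Rightarrow> complex" where
  "nform X Y = (\<Sum>a<8. \<Sum>b<8. X a b * Y b a) / 2"

definition cartan :: "(nat \<Rightarrow> complex) \<Rightarrow> mat" where
  "cartan x = (\<lambda>a b. if a = b \<and> a < 4 then x a
                      else if a = b \<and> 4 \<le> a \<and> a < 8 then - x (a - 4) else 0)"

definition cartan_sub :: "mat set" where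
  "cartan_sub = range cartan"

text \<open>Positive nilpotent part n_+ (positive roots e_i - e_j, e_i + e_j, i<j, for the simple
  roots alpha1 = e1-e2, alpha2 = e2-e3 (central node), alpha3 = e3-e4, alpha4 = e3+e4).\<close>
definition nplus :: "mat set" where
  "nplus = {X \<in> so8. (\<forall>a<4. \<forall>b<4. b \<le> a \<longrightarrow> X a b = 0) \<and>
                     (\<forall>a. \<forall>b. 4 \<le> a \<and> a < 8 \<and> b < 4 \<longrightarrow> X a b = 0)}"

text \<open>Fundamental weights of d4 (identified with elements of h via the form).\<close>
definition fw :: "nat \<Rightarrow> mat" where
  "fw i = cartan (if i = 1 then (\<lambda>j. if j = 0 then 1 else 0)
             else if i = 2 then (\<lambda>j. if j \<le> 1 then 1 else 0)
             else if i = 3 then (\<lambda>j. if j \<le> 2 then 1/2 else if j = 3 then -1/2 else 0)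
             else if i = 4 then (\<lambda>j. if j \<le> 3 then 1/2 else 0)
             else (\<lambda>j. 0))"

definition cvs :: "(complex \<Rightarrow> 'm::ab_group_add \<Rightarrow> 'm) \<Rightarrow> bool" where
  "cvs sc \<longleftrightarrow> (\<forall>v. sc 1 v = v) \<and> (\<forall>a b v. sc a (sc b v) = sc (a * b) v) \<and>
     (\<forall>a b v. sc (a + b) v = sc a v + sc b v) \<and> (\<forall>a v w. sc a (v + w) = sc a v + sc a w)"

text \<open>A module of level k for the affine algebra ghat = d4 (x) C[t,t^-1] + CK:
  act X n is the action of X (x) t^n, and K acts as k.\<close>
definition aff_module ::
  "(complex \<Rightarrow> 'm::ab_group_add \<Rightarrow> 'm) \<Rightarrow> (mat \<Rightarrow> int \<Rightarrow> 'm \<Rightarrow> 'm) \<Rightarrow> complex \<Rightarrow> bool" where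
  "aff_module sc act k \<longleftrightarrow> cvs sc \<and>
     (\<forall>X\<in>so8. \<forall>n v w. act X n (v + w) = act X n v + act X n w) \<and>
     (\<forall>X\<in>so8. \<forall>n c v. act X n (sc c v) = sc c (act X n v)) \<and>
     (\<forall>X\<in>so8. \<forall>Y\<in>so8. \<forall>n v. act (\<lambda>a b. X a b + Y a b) n v = act X n v + act Y n v) \<and>
     (\<forall>X\<in>so8. \<forall>c n v. act (\<lambda>a b. c * X a b) n v = sc c (act X n v)) \<and>
     (\<forall>X\<in>so8. \<forall>Y\<in>so8. \<forall>m n v.
        act X m (act Y n v) - act Y n (act X m v) =
        act (bracket X Y) (m + n) v +
          (if m + n = 0 then sc (of_int m * nform X Y * k) v else 0))"

definition csubspace :: "(complex \<Rightarrow> 'm::ab_group_add \<Rightarrow> 'm) \<Rightarrow> 'm set \<Rightarrow> bool" where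
  "csubspace sc W \<longleftrightarrow> 0 \<in> W \<and> (\<forall>v\<in>W. \<forall>w\<in>W. v + w \<in> W) \<and> (\<forall>c. \<forall>v\<in>W. sc c v \<in> W)"

definition irreducible_mod ::
  "(complex \<Rightarrow> 'm::ab_group_add \<Rightarrow> 'm) \<Rightarrow> (mat \<Rightarrow> int \<Rightarrow> 'm \<Rightarrow> 'm) \<Rightarrow> bool" where
  "irreducible_mod sc act \<longleftrightarrow> (\<exists>v::'m. v \<noteq> 0) \<and>
     (\<forall>W. csubspace sc W \<and> (\<forall>X\<in>so8. \<forall>n. \<forall>v\<in>W. act X n v \<in> W) \<longrightarrow> W = {0} \<or> W = UNIV)"

definition hw_vector ::
  "(complex \<Rightarrow> 'm::ab_group_add \<Rightarrow> 'm) \<Rightarrow> (mat \<Rightarrow> int \<Rightarrow> 'm \<Rightarrow> 'm) \<Rightarrow> mat \<Rightarrow> 'm \<Rightarrow> bool" where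
  "hw_vector sc act lam v \<longleftrightarrow> v \<noteq> 0 \<and>
     (\<forall>H\<in>cartan_sub. act H 0 v = sc (nform lam H) v) \<and>
     (\<forall>X\<in>so8. \<forall>n>0. act X n v = 0) \<and>
     (\<forall>X\<in>nplus. act X 0 v = 0)"

text \<open>(sc, act) is (a model of) the irreducible highest weight module L(Lambda) with
  Lambda = k Lambda_0 + lam (level k, finite part lam).\<close>
definition is_L ::
  "(complex \<Rightarrow> 'm::ab_group_add \<Rightarrow> 'm) \<Rightarrow> (mat \<Rightarrow> int \<Rightarrow> 'm \<Rightarrow> 'm) \<Rightarrow> complex \<Rightarrow> mat \<Rightarrow> bool" where
  "is_L sc act k lam \<longleftrightarrow> aff_module sc act k \<and> irreducible_mod sc act \<and> (\<exists>v. hw_vector sc act lam v)"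

definition adcomp :: "mat \<Rightarrow> int \<Rightarrow> mat \<Rightarrow> mat" where
  "adcomp mu j X = (\<lambda>a b. if mu a a - mu b b = of_int j then X a b else 0)"

definition ad_eigs :: "mat \<Rightarrow> int set" where
  "ad_eigs mu = {j. \<exists>a<8. \<exists>b<8. mu a a - mu b b = of_int j}"

text \<open>Spectral flow sigma^mu at level k: root vector e^alpha_n acts as e^alpha_{n+<mu,alpha>},
  h_n acts as h_n + delta_{n,0} (mu|h) k.\<close>
definition sflow :: "mat \<Rightarrow> complex \<Rightarrow> (complex \<Rightarrow> 'm::ab_group_add \<Rightarrow> 'm) \<Rightarrow>
    (mat \<Rightarrow> int \<Rightarrow> 'm \<Rightarrow> 'm) \<Rightarrow> (mat \<Rightarrow> int \<Rightarrow> 'm \<Rightarrow> 'm)" where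
  "sflow mu k sc act = (\<lambda>X n v. (\<Sum>j\<in>ad_eigs mu. act (adcomp mu j X) (n + j) v) +
       (if n = 0 then sc (nform mu X * k) v else 0))"

definition mod_iso ::
  "(complex \<Rightarrow> 'm::ab_group_add \<Rightarrow> 'm) \<Rightarrow> (mat \<Rightarrow> int \<Rightarrow> 'm \<Rightarrow> 'm) \<Rightarrow>
   (complex \<Rightarrow> 'n::ab_group_add \<Rightarrow> 'n) \<Rightarrow> (mat \<Rightarrow> int \<Rightarrow> 'n \<Rightarrow> 'n) \<Rightarrow> ('m \<Rightarrow> 'n) \<Rightarrow> bool" where
  "mod_iso sc1 act1 sc2 act2 f \<longleftrightarrow> bij f \<and>
     (\<forall>v w. f (v + w) = f v + f w) \<and> (\<forall>c v. f (sc1 c v) = sc2 c (f v)) \<and>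
     (\<forall>X\<in>so8. \<forall>n v. f (act1 X n v) = act2 X n (f v))"

end

theory Submission
  imports Defs "HOL-Library.Product_Plus"
begin

text \<open>The fundamental coweights \<open>\<mu>\<close> for \<open>i = 1, 3, 4\<close> are minuscule and dominant: every root takes
  a value in \<open>{-1, 0, 1}\<close> on \<open>\<mu>\<close>, and positive roots take a value \<open>\<ge> 0\<close>. Spectral flow by any integral
  \<open>\<mu>\<close> turns a module of level \<open>k\<close> into a module of level \<open>k\<close>, and it preserves irreducibility, because
  the new modes are re-indexed old modes up to scalars. For minuscule dominant \<open>\<mu>\<close>, the new modes
  \<open>e\<^sup>\<alpha>\<^sub>n\<close> with \<open>n > 0\<close>, or with \<open>n = 0\<close> and \<open>\<alpha> > 0\<close>, are old modes of non-negative index. So the vacuum,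
  which is killed by all of \<open>g \<otimes> \<complex>[t]\<close>, becomes a highest weight vector of weight \<open>k \<mu>\<close>. Hence
  \<open>\<sigma>\<^sup>\<mu>(L(k \<Lambda>\<^sub>0))\<close> and \<open>L(k \<Lambda>\<^sub>0 + k \<mu>)\<close> are irreducible highest weight modules with the same highest weight,
  so they are isomorphic.

  Two steps use that the level is not critical (\<open>k \<noteq> -6\<close>): the vacuum being killed by the zero
  modes, and the uniqueness of irreducible highest weight modules. Both rest on one fact: a
  highest weight vector \<open>v\<close> is never a combination of nonempty lowering words applied to \<open>v\<close>.
  A truncated Sugawara operator together with \<open>ad \<rho>\<^sup>\<or>\<close> separates such words from \<open>v\<close> by their
  total mode and total height.\<close>

section \<open>The Lie algebra so(8)\<close>

lemma pidx_less: "pidx a < 8" by (simp add: pidx_def)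

lemma less8_cases: "(a::nat) < 8 \<Longrightarrow> a = 0 \<or> a = 1 \<or> a = 2 \<or> a = 3 \<or> a = 4 \<or> a = 5 \<or> a = 6 \<or> a = 7" by arith

lemma pidx_pidx: "a < 8 \<Longrightarrow> pidx (pidx a) = a" using less8_cases[of a] by (auto simp: pidx_def)

lemma pidx_eq_iff: "a < 8 \<Longrightarrow> p < 8 \<Longrightarrow> (a = pidx p) \<longleftrightarrow> (p = pidx a)"
  using pidx_pidx by metis

lemma pidx_eq_iff2: "a < 8 \<Longrightarrow> p < 8 \<Longrightarrow> (pidx a = p) \<longleftrightarrow> (a = pidx p)"
  using pidx_pidx by metis

lemma pidx_inj: "a < 8 \<Longrightarrow> b < 8 \<Longrightarrow> (pidx a = pidx b) \<longleftrightarrow> a = b"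
  using pidx_pidx by metis

lemma pidx_upper: "4 \<le> a \<Longrightarrow> a < 8 \<Longrightarrow> pidx a = a - 4"
  using less8_cases[of a] by (auto simp: pidx_def)

lemma sum_pidx_reindex: "(\<Sum>c<8. f (pidx c)) = (\<Sum>c<8. f c :: 'a::comm_monoid_add)"
  by (rule sum.reindex_bij_witness[where i=pidx and j=pidx]) (auto simp: pidx_pidx pidx_less)

lemma sum_delta_pidx: "x < 8 \<Longrightarrow> (\<Sum>p<8. if x = pidx p then f p else 0) = (f (pidx x) :: 'a::comm_monoid_add)"
proof -
  assume x: "x < 8"
  have "(\<Sum>p<8. if x = pidx p then f p else 0) = (\<Sum>p<8. if p = pidx x then f p else 0)"
  proof (rule sum.cong[OF refl])
    fix p assume "p \<in> {..<8::nat}"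
    hence "(x = pidx p) = (p = pidx x)" using pidx_eq_iff[OF x] by simp
    thus "(if x = pidx p then f p else 0) = (if p = pidx x then f p else 0)" by simp
  qed
  also have "\<dots> = f (pidx x)" by (simp add: pidx_less)
  finally show ?thesis .
qed

lemma sum_if_const: "(\<Sum>p\<in>A. if P then f p else 0) = (if P then (\<Sum>p\<in>A. f p) else (0::'a::comm_monoid_add))"
  by simp

lemma so8_outside: "X \<in> so8 \<Longrightarrow> 8 \<le> a \<or> 8 \<le> b \<Longrightarrow> X a b = 0"
  by (auto simp: so8_def supp8_def)

lemma so8_skew: "X \<in> so8 \<Longrightarrow> a < 8 \<Longrightarrow> b < 8 \<Longrightarrow> X a b = - X (pidx b) (pidx a)"
proof -
  assume X: "X \<in> so8" and ab: "a < 8" "b < 8"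
  have "X (pidx b) (pidx a) + X (pidx (pidx a)) b = 0"
    using X ab pidx_less unfolding so8_def by blast
  thus ?thesis using ab pidx_pidx by (simp add: eq_neg_iff_add_eq_0 add.commute)
qed

lemma so8I: "supp8 X \<Longrightarrow> (\<And>a b. a < 8 \<Longrightarrow> b < 8 \<Longrightarrow> X a b = - X (pidx b) (pidx a)) \<Longrightarrow> X \<in> so8"
proof -
  assume s: "supp8 X" and k: "\<And>a b. a < 8 \<Longrightarrow> b < 8 \<Longrightarrow> X a b = - X (pidx b) (pidx a)"
  have "\<forall>a<8. \<forall>b<8. X (pidx b) a + X (pidx a) b = 0"
  proof (intro allI impI)
    fix a b :: nat assume ab: "a < 8" "b < 8"
    have "X (pidx a) b = - X (pidx b) (pidx (pidx a))" using k[of "pidx a" b] ab pidx_less by simp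
    thus "X (pidx b) a + X (pidx a) b = 0" using ab pidx_pidx by simp
  qed
  thus ?thesis using s by (simp add: so8_def)
qed

lemma so8_zero: "(\<lambda>a b. 0) \<in> so8"
  by (rule so8I) (auto simp: supp8_def)

lemma so8_add: "X \<in> so8 \<Longrightarrow> Y \<in> so8 \<Longrightarrow> (\<lambda>a b. X a b + Y a b) \<in> so8"
proof (rule so8I)
  assume X: "X \<in> so8" and Y: "Y \<in> so8"
  show "supp8 (\<lambda>a b. X a b + Y a b)" using X Y by (auto simp: supp8_def so8_outside)
  fix a b :: nat assume ab: "a < 8" "b < 8"
  show "X a b + Y a b = - (X (pidx b) (pidx a) + Y (pidx b) (pidx a))"
    using so8_skew[OF X ab] so8_skew[OF Y ab] by simp
qed

lemma so8_scale: "X \<in> so8 \<Longrightarrow> (\<lambda>a b. c * X a b) \<in> so8"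
proof (rule so8I)
  assume X: "X \<in> so8"
  show "supp8 (\<lambda>a b. c * X a b)" using X by (auto simp: supp8_def so8_outside)
  fix a b :: nat assume ab: "a < 8" "b < 8"
  show "c * X a b = - (c * X (pidx b) (pidx a))"
    using so8_skew[OF X ab] by simp
qed

lemma so8_sum: "finite I \<Longrightarrow> (\<forall>i\<in>I. X i \<in> so8) \<Longrightarrow> (\<lambda>a b. \<Sum>i\<in>I. X i a b) \<in> so8"
proof (induction I rule: finite_induct)
  case empty thus ?case using so8_zero by simp
next
  case (insert i I)
  have "(\<lambda>a b. \<Sum>i\<in>insert i I. X i a b) = (\<lambda>a b. X i a b + (\<lambda>a b. \<Sum>i\<in>I. X i a b) a b)"
    using insert by simp
  thus ?case using insert so8_add by simp
qed

lemma so8_antidiag: "X \<in> so8 \<Longrightarrow> a < 8 \<Longrightarrow> X a (pidx a) = 0"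
  using so8_skew[of X a "pidx a"] pidx_pidx[of a] pidx_less[of a] by simp

lemma so8_bracket: "X \<in> so8 \<Longrightarrow> Y \<in> so8 \<Longrightarrow> bracket X Y \<in> so8"
proof (rule so8I)
  assume X: "X \<in> so8" and Y: "Y \<in> so8"
  show "supp8 (bracket X Y)"
    unfolding supp8_def bracket_def mmul_def using X Y by (auto simp: so8_outside)
  have key: "mmul A B (pidx b) (pidx a) = mmul B A a b" if A: "A \<in> so8" and B: "B \<in> so8"
     and ab: "a < 8" "b < 8" for A B a b
  proof -
    have "mmul A B (pidx b) (pidx a) = (\<Sum>c<8. A (pidx b) (pidx c) * B (pidx c) (pidx a))"
      unfolding mmul_def by (rule sum_pidx_reindex[symmetric])
    also have "\<dots> = (\<Sum>c<8. B a c * A c b)"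
      proof (rule sum.cong[OF refl])
      fix c assume c: "c \<in> {..<8::nat}"
      have 1: "A (pidx b) (pidx c) = - A c b" using so8_skew[OF A, of c b] c ab by simp
      have 2: "B (pidx c) (pidx a) = - B a c" using so8_skew[OF B, of a c] c ab by simp
      show "A (pidx b) (pidx c) * B (pidx c) (pidx a) = B a c * A c b" using 1 2 by simp
    qed
    finally show ?thesis by (simp add: mmul_def)
  qed
  fix a b :: nat assume ab: "a < 8" "b < 8"
  show "bracket X Y a b = - bracket X Y (pidx b) (pidx a)"
    using key[OF X Y ab] key[OF Y X ab] by (simp add: bracket_def)
qed

lemma so8_trace: "Y \<in> so8 \<Longrightarrow> (\<Sum>p<8. Y p p) = 0"
proof -
  assume Y: "Y \<in> so8"
  have "(\<Sum>p<8. Y p p) = (\<Sum>p<8. Y (pidx p) (pidx p))" by (rule sum_pidx_reindex[symmetric])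
  also have "\<dots> = (\<Sum>p<8. - Y p p)"
  proof (rule sum.cong[OF refl])
    fix p assume "p \<in> {..<8::nat}"
    thus "Y (pidx p) (pidx p) = - Y p p" using so8_skew[OF Y, of p p] by simp
  qed
  finally have "(\<Sum>p<8. Y p p) = - (\<Sum>p<8. Y p p)" by (simp add: sum_negf)
  thus ?thesis by simp
qed

text \<open>The elements \<open>sogen p q = E_pq - E_(pidx q)(pidx p)\<close> span so(8); they are the image of the
  matrix units under the projection \<open>X \<mapsto> X - X\<^sup>*\<close>, so \<open>X = 1/2 \<Sum> X_pq sogen p q\<close>.\<close>

definition sogen :: "nat \<Rightarrow> nat \<Rightarrow> mat" where
  "sogen p q = (\<lambda>a b. (if a = p \<and> b = q then 1 else 0) - (if a = pidx q \<and> b = pidx p then 1 else 0))"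

lemma sogen_so8: "p < 8 \<Longrightarrow> q < 8 \<Longrightarrow> sogen p q \<in> so8"
proof (rule so8I)
  assume pq: "p < 8" "q < 8"
  show "supp8 (sogen p q)" using pq pidx_less[of p] pidx_less[of q] by (auto simp: supp8_def sogen_def)
  fix a b :: nat assume ab: "a < 8" "b < 8"
  show "sogen p q a b = - sogen p q (pidx b) (pidx a)"
  proof -
    note e1 = pidx_eq_iff2[OF ab(2) pq(1)] and e2 = pidx_eq_iff2[OF ab(1) pq(2)]
      and e3 = pidx_inj[OF ab(2) pq(2)] and e4 = pidx_inj[OF ab(1) pq(1)]
    show ?thesis unfolding sogen_def e1 e2 e3 e4 by (simp add: conj_commute)
  qed
qed

lemma sogen_expansion: assumes X: "X \<in> so8"
  shows "(\<Sum>p<8. \<Sum>q<8. X p q * sogen p q a b) = 2 * X a b"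
proof (cases "a < 8 \<and> b < 8")
  case True
  have "(\<Sum>p<8. \<Sum>q<8. X p q * sogen p q a b)
     = (\<Sum>p<8. \<Sum>q<8. (if p = a then (if q = b then X a b else 0) else 0)
          - (if p = pidx b then (if q = pidx a then X (pidx b) (pidx a) else 0) else 0))"
  proof (intro sum.cong refl)
    fix p q assume pq: "p \<in> {..<8::nat}" "q \<in> {..<8::nat}"
    have e1: "(a = pidx q) = (q = pidx a)" using pidx_eq_iff[of a q] True pq by simp
    have e2: "(b = pidx p) = (p = pidx b)" using pidx_eq_iff[of b p] True pq by simp
    show "X p q * sogen p q a b = (if p = a then (if q = b then X a b else 0) else 0)
          - (if p = pidx b then (if q = pidx a then X (pidx b) (pidx a) else 0) else 0)"
      unfolding sogen_def e1 e2 by (cases "p = a"; cases "q = b"; cases "p = pidx b"; cases "q = pidx a"; simp)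
  qed
  also have "\<dots> = X a b - X (pidx b) (pidx a)" using True by (simp add: sum_subtractf pidx_less sum_if_const)
  also have "\<dots> = 2 * X a b" using so8_skew[OF X, of a b] True by simp
  finally show ?thesis .
next
  case False
  have z: "sogen p q a b = 0" if "p < 8" "q < 8" for p q
  proof -
    have n1: "(a = p \<and> b = q) = False" using False that by auto
    have n2: "(a = pidx q \<and> b = pidx p) = False" using False pidx_less[of p] pidx_less[of q] by auto
    show ?thesis unfolding sogen_def n1 n2 by simp
  qed
  have "(\<Sum>p<8. \<Sum>q<8. X p q * sogen p q a b) = (\<Sum>p<8::nat. \<Sum>q<8::nat. 0)"
    by (intro sum.cong refl) (simp add: z)
  moreover have "8 \<le> a \<or> 8 \<le> b" using False by auto
  ultimately show ?thesis using so8_outside[OF X, of a b] by simp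
qed

lemma mmul_sogen_left: "p < 8 \<Longrightarrow> q < 8 \<Longrightarrow>
  mmul (sogen p q) Y r s = (if r = p then Y q s else 0) - (if r = pidx q then Y (pidx p) s else 0)"
proof -
  assume pq: "p < 8" "q < 8"
  have "mmul (sogen p q) Y r s = (\<Sum>c<8. (if c = q then (if r = p then Y q s else 0) else 0)
       - (if c = pidx p then (if r = pidx q then Y (pidx p) s else 0) else 0))"
    unfolding mmul_def sogen_def by (intro sum.cong refl) (simp add: left_diff_distrib)
  also have "\<dots> = (if r = p then Y q s else 0) - (if r = pidx q then Y (pidx p) s else 0)"
    using pq by (simp add: sum_subtractf pidx_less)
  finally show ?thesis .
qed

lemma mmul_sogen_right: "p < 8 \<Longrightarrow> q < 8 \<Longrightarrow>
  mmul Y (sogen p q) r s = (if s = q then Y r p else 0) - (if s = pidx p then Y r (pidx q) else 0)"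
proof -
  assume pq: "p < 8" "q < 8"
  have "mmul Y (sogen p q) r s = (\<Sum>c<8. (if c = p then (if s = q then Y r p else 0) else 0)
       - (if c = pidx q then (if s = pidx p then Y r (pidx q) else 0) else 0))"
    unfolding mmul_def sogen_def by (intro sum.cong refl) (simp add: right_diff_distrib)
  also have "\<dots> = (if s = q then Y r p else 0) - (if s = pidx p then Y r (pidx q) else 0)"
    using pq by (simp add: sum_subtractf pidx_less)
  finally show ?thesis .
qed

lemma bracket_sogen: "p < 8 \<Longrightarrow> q < 8 \<Longrightarrow> bracket (sogen p q) Y r s =
   (if r = p then Y q s else 0) - (if r = pidx q then Y (pidx p) s else 0)
   - (if s = q then Y r p else 0) + (if s = pidx p then Y r (pidx q) else 0)"
  by (simp add: bracket_def mmul_sogen_left mmul_sogen_right)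

lemma bracket_antisym: "bracket X Y a b = - bracket Y X a b"
  by (simp add: bracket_def)

lemma bracket_sogen_swap: assumes Y: "Y \<in> so8" and "p < 8" "q < 8" "r < 8" "s < 8"
  shows "bracket (sogen q p) Y r s = - bracket (sogen s r) Y p q"
proof -
  have y1: "Y (pidx q) s = - Y (pidx s) q" using so8_skew[OF Y, of "pidx q" s] assms pidx_less pidx_pidx by simp
  have y2: "Y r (pidx p) = - Y p (pidx r)" using so8_skew[OF Y, of r "pidx p"] assms pidx_less pidx_pidx by simp
  have A1: "(if r = q then Y p s else 0) = (if q = r then Y p s else 0)" by (cases "r = q") simp_all
  have A3: "(if s = p then Y r q else 0) = (if p = s then Y r q else 0)" by (cases "s = p") simp_all
  have A2: "(if r = pidx p then Y (pidx q) s else 0) = - (if p = pidx r then Y (pidx s) q else 0)"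
    using pidx_eq_iff[of r p] assms y1 by (cases "r = pidx p") simp_all
  have A4: "(if s = pidx q then Y r (pidx p) else 0) = - (if q = pidx s then Y p (pidx r) else 0)"
    using pidx_eq_iff[of s q] assms y2 by (cases "s = pidx q") simp_all
  show ?thesis unfolding bracket_sogen[OF assms(3,2)] bracket_sogen[OF assms(5,4)] A1 A2 A3 A4
    by (simp add: algebra_simps)
qed

lemma nform_commute: "nform X Y = nform Y X"
  unfolding nform_def by (subst sum.swap) (simp add: mult.commute)

lemma nform_zero_left[simp]: "nform (\<lambda>a b. 0) H = 0"
  by (simp add: nform_def)

lemma nform_sogen: assumes X: "X \<in> so8" and pq: "p < 8" "q < 8"
  shows "nform (sogen q p) X = X p q"
proof -
  have "(\<Sum>a<8. \<Sum>b<8. sogen q p a b * X b a)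
     = (\<Sum>a<8. \<Sum>b<8. (if a = q \<and> b = p then 1 else 0) * X b a)
       - (\<Sum>a<8. \<Sum>b<8. (if a = pidx p \<and> b = pidx q then 1 else 0) * X b a)"
    by (simp add: sogen_def left_diff_distrib sum_subtractf)
  also have "(\<Sum>a<8. \<Sum>b<8. (if a = q \<and> b = p then 1 else 0) * X b a)
      = (\<Sum>a<8. \<Sum>b<8. if a = q then (if b = p then X p q else 0) else 0)"
    by (intro sum.cong refl) simp
  also have "(\<Sum>a<8. \<Sum>b<8. (if a = pidx p \<and> b = pidx q then 1 else 0) * X b a)
      = (\<Sum>a<8. \<Sum>b<8. if a = pidx p then (if b = pidx q then X (pidx q) (pidx p) else 0) else 0)"
    by (intro sum.cong refl) simp
  also have "(\<Sum>a<8. \<Sum>b<8. if a = q then (if b = p then X p q else 0) else 0)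
     - (\<Sum>a<8. \<Sum>b<8. if a = pidx p then (if b = pidx q then X (pidx q) (pidx p) else 0) else 0)
     = X p q - X (pidx q) (pidx p)" using pq by (simp add: pidx_less sum_if_const)
  also have "\<dots> = 2 * X p q" using so8_skew[OF X pq] by simp
  finally show ?thesis by (simp add: nform_def)
qed

lemma bracket_addl: "bracket (\<lambda>a b. X a b + X' a b) Y = (\<lambda>a b. bracket X Y a b + bracket X' Y a b)"
  by (intro ext) (simp add: bracket_def mmul_def sum.distrib algebra_simps)

lemma bracket_addr: "bracket X (\<lambda>a b. Y a b + Y' a b) = (\<lambda>a b. bracket X Y a b + bracket X Y' a b)"
  by (intro ext) (simp add: bracket_def mmul_def sum.distrib algebra_simps)

lemma bracket_scl: "bracket (\<lambda>a b. c * X a b) Y = (\<lambda>a b. c * bracket X Y a b)"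
  by (intro ext) (simp add: bracket_def mmul_def sum_distrib_left algebra_simps)

lemma bracket_scr: "bracket X (\<lambda>a b. c * Y a b) = (\<lambda>a b. c * bracket X Y a b)"
  by (intro ext) (simp add: bracket_def mmul_def sum_distrib_left algebra_simps)

lemma nform_addl: "nform (\<lambda>a b. X a b + X' a b) Y = nform X Y + nform X' Y"
  by (simp add: nform_def sum.distrib algebra_simps add_divide_distrib)

lemma nform_addr: "nform X (\<lambda>a b. Y a b + Y' a b) = nform X Y + nform X Y'"
  by (simp add: nform_def sum.distrib algebra_simps add_divide_distrib)

lemma nform_scl: "nform (\<lambda>a b. c * X a b) Y = c * nform X Y"
  by (simp add: nform_def sum_distrib_left algebra_simps)

lemma nform_scr: "nform X (\<lambda>a b. c * Y a b) = c * nform X Y"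
  by (simp add: nform_def sum_distrib_left algebra_simps)

subsection \<open>The Casimir element\<close>

text \<open>The four double sums below are the four terms of \<open>[[sogen p q, Y], sogen q p]\<close>. The resulting
  Casimir identity \<open>casimir_adjoint\<close> is the source of the constant \<open>24 + 4k = 4 (k + h\<^sup>\<or>)\<close> in
  \<open>sugawara_comm\<close>.\<close>

lemma sum_bracket_sogen_at_q: assumes Y: "Y \<in> so8" and ab: "a < 8" "b < 8"
  shows "(\<Sum>p<8. \<Sum>q<8. if a = q then bracket (sogen p q) Y p b else 0) = 6 * Y a b"
proof -
  have "(\<Sum>p<8. \<Sum>q<8. if a = q then bracket (sogen p q) Y p b else 0)
     = (\<Sum>p<8. Y a b - (if p = pidx a then Y a b else 0) + (if b = pidx p then Y p (pidx a) else 0)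
          - (if b = a then Y p p else 0))"
  proof (rule sum.cong[OF refl])
    fix p assume p: "p \<in> {..<8::nat}"
    have "(\<Sum>q<8. if a = q then bracket (sogen p q) Y p b else 0) = bracket (sogen p a) Y p b" using ab by simp
    also have "\<dots> = Y a b - (if p = pidx a then Y a b else 0) + (if b = pidx p then Y p (pidx a) else 0)
          - (if b = a then Y p p else 0)"
      using p ab by (simp add: bracket_sogen pidx_pidx)
    finally show "(\<Sum>q<8. if a = q then bracket (sogen p q) Y p b else 0) = \<dots>" .
  qed
  also have "\<dots> = 8 * Y a b - Y a b + Y (pidx b) (pidx a)"
    using ab by (simp add: sum.distrib sum_subtractf sum_delta_pidx pidx_less so8_trace[OF Y] sum_if_const)
  also have "\<dots> = 6 * Y a b" using so8_skew[OF Y ab] by simp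
  finally show ?thesis .
qed

lemma sum_bracket_sogen_at_pidx_p: assumes Y: "Y \<in> so8" and ab: "a < 8" "b < 8"
  shows "(\<Sum>p<8. \<Sum>q<8. if a = pidx p then bracket (sogen p q) Y (pidx q) b else 0) = - 6 * Y a b"
proof -
  have "(\<Sum>p<8. \<Sum>q<8. if a = pidx p then bracket (sogen p q) Y (pidx q) b else 0)
     = (\<Sum>q<8. \<Sum>p<8. if a = pidx p then bracket (sogen p q) Y (pidx q) b else 0)"
    by (rule sum.swap)
  also have "\<dots> = (\<Sum>q<8. (if q = a then Y a b else 0) - Y a b - (if q = b then Y (pidx b) (pidx a) else 0)
       + (if b = a then Y (pidx q) (pidx q) else 0))"
  proof (rule sum.cong[OF refl])
    fix q assume q: "q \<in> {..<8::nat}"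
    have "(\<Sum>p<8. if a = pidx p then bracket (sogen p q) Y (pidx q) b else 0) = bracket (sogen (pidx a) q) Y (pidx q) b"
      by (rule sum_delta_pidx[OF ab(1)])
    also have "\<dots> = (if q = a then Y a b else 0) - Y a b - (if q = b then Y (pidx b) (pidx a) else 0)
       + (if b = a then Y (pidx q) (pidx q) else 0)"
      using q ab pidx_inj[of q a] by (simp add: bracket_sogen pidx_pidx pidx_less)
    finally show "(\<Sum>p<8. if a = pidx p then bracket (sogen p q) Y (pidx q) b else 0) = \<dots>" .
  qed
  also have "\<dots> = Y a b - 8 * Y a b - Y (pidx b) (pidx a)"
    using ab by (simp add: sum.distrib sum_subtractf sum_if_const sum_pidx_reindex[of "\<lambda>q. Y q q"] so8_trace[OF Y])
  also have "\<dots> = - 6 * Y a b" using so8_skew[OF Y ab] by simp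
  finally show ?thesis .
qed

lemma sum_bracket_sogen_at_p: assumes Y: "Y \<in> so8" and ab: "a < 8" "b < 8"
  shows "(\<Sum>p<8. \<Sum>q<8. if b = p then bracket (sogen p q) Y a q else 0) = - 6 * Y a b"
proof -
  have "(\<Sum>p<8. \<Sum>q<8. if b = p then bracket (sogen p q) Y a q else 0)
     = (\<Sum>q<8. \<Sum>p<8. if b = p then bracket (sogen p q) Y a q else 0)"
    by (rule sum.swap)
  also have "\<dots> = (\<Sum>q<8. (if a = b then Y q q else 0) - (if q = pidx a then Y (pidx b) (pidx a) else 0)
      - Y a b + (if q = pidx b then Y a b else 0))"
  proof (rule sum.cong[OF refl])
    fix q assume q: "q \<in> {..<8::nat}"
    have "(\<Sum>p<8. if b = p then bracket (sogen p q) Y a q else 0) = bracket (sogen b q) Y a q"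
      using ab by simp
    also have "\<dots> = (if a = b then Y q q else 0) - (if q = pidx a then Y (pidx b) (pidx a) else 0)
      - Y a b + (if q = pidx b then Y a b else 0)"
      using q ab pidx_eq_iff[of a q] pidx_inj[of b a] by (simp add: bracket_sogen pidx_pidx pidx_less)
    finally show "(\<Sum>p<8. if b = p then bracket (sogen p q) Y a q else 0) = \<dots>" .
  qed
  also have "\<dots> = - Y (pidx b) (pidx a) - 8 * Y a b + Y a b"
    using ab by (simp add: sum.distrib sum_subtractf sum_if_const so8_trace[OF Y] pidx_less)
  also have "\<dots> = - 6 * Y a b" using so8_skew[OF Y ab] by simp
  finally show ?thesis .
qed

lemma sum_bracket_sogen_at_pidx_q: assumes Y: "Y \<in> so8" and ab: "a < 8" "b < 8"
  shows "(\<Sum>p<8. \<Sum>q<8. if b = pidx q then bracket (sogen p q) Y a (pidx p) else 0) = 6 * Y a b"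
proof -
  have "(\<Sum>p<8. \<Sum>q<8. if b = pidx q then bracket (sogen p q) Y a (pidx p) else 0)
     = (\<Sum>p<8. (if p = a then Y (pidx b) (pidx a) else 0) - (if a = b then Y (pidx p) (pidx p) else 0)
        - (if p = b then Y a b else 0) + Y a b)"
  proof (rule sum.cong[OF refl])
    fix p assume p: "p \<in> {..<8::nat}"
    have "(\<Sum>q<8. if b = pidx q then bracket (sogen p q) Y a (pidx p) else 0) = bracket (sogen p (pidx b)) Y a (pidx p)"
      by (rule sum_delta_pidx[OF ab(2)])
    also have "\<dots> = (if p = a then Y (pidx b) (pidx a) else 0) - (if a = b then Y (pidx p) (pidx p) else 0)
        - (if p = b then Y a b else 0) + Y a b"
      using p ab pidx_inj[of p b] by (simp add: bracket_sogen pidx_pidx pidx_less)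
    finally show "(\<Sum>q<8. if b = pidx q then bracket (sogen p q) Y a (pidx p) else 0) = \<dots>" .
  qed
  also have "\<dots> = Y (pidx b) (pidx a) - Y a b + 8 * Y a b"
    using ab by (simp add: sum.distrib sum_subtractf sum_if_const sum_pidx_reindex[of "\<lambda>q. Y q q"] so8_trace[OF Y])
  also have "\<dots> = 6 * Y a b" using so8_skew[OF Y ab] by simp
  finally show ?thesis .
qed

lemma casimir_adjoint_entry: assumes Y: "Y \<in> so8" and ab: "a < 8" "b < 8"
  shows "(\<Sum>p<8. \<Sum>q<8. bracket (bracket (sogen p q) Y) (sogen q p) a b) = - 24 * Y a b"
proof -
  have "(\<Sum>p<8. \<Sum>q<8. bracket (bracket (sogen p q) Y) (sogen q p) a b)
    = (\<Sum>p<8. \<Sum>q<8. - ((if a = q then bracket (sogen p q) Y p b else 0)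
        - (if a = pidx p then bracket (sogen p q) Y (pidx q) b else 0)
        - (if b = p then bracket (sogen p q) Y a q else 0)
        + (if b = pidx q then bracket (sogen p q) Y a (pidx p) else 0)))"
  proof (intro sum.cong refl)
    fix p q assume "p \<in> {..<8::nat}" "q \<in> {..<8::nat}"
    thus "bracket (bracket (sogen p q) Y) (sogen q p) a b = - ((if a = q then bracket (sogen p q) Y p b else 0)
        - (if a = pidx p then bracket (sogen p q) Y (pidx q) b else 0)
        - (if b = p then bracket (sogen p q) Y a q else 0)
        + (if b = pidx q then bracket (sogen p q) Y a (pidx p) else 0))"
      by (subst bracket_antisym) (simp add: bracket_sogen[of q p])
  qed
  also have "\<dots> = - (6 * Y a b - (- 6 * Y a b) - (- 6 * Y a b) + 6 * Y a b)"
    by (simp only: sum_negf sum.distrib sum_subtractf sum_bracket_sogen_at_q[OF Y ab] sum_bracket_sogen_at_pidx_p[OF Y ab] sum_bracket_sogen_at_p[OF Y ab] sum_bracket_sogen_at_pidx_q[OF Y ab])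
  also have "\<dots> = - 24 * Y a b" by simp
  finally show ?thesis .
qed

lemma casimir_adjoint: assumes Y: "Y \<in> so8"
  shows "(\<Sum>p<8. \<Sum>q<8. bracket (bracket (sogen p q) Y) (sogen q p) a b) = - 24 * Y a b"
proof (cases "a < 8 \<and> b < 8")
  case True thus ?thesis using casimir_adjoint_entry[OF Y] by auto
next
  case False
  have "bracket (bracket (sogen p q) Y) (sogen q p) a b = 0" if "p < 8" "q < 8" for p q
    using so8_outside[OF so8_bracket[OF so8_bracket[OF sogen_so8[OF that] Y] sogen_so8[OF that(2,1)]]] False by auto
  moreover have "8 \<le> a \<or> 8 \<le> b" using False by auto
  ultimately show ?thesis using so8_outside[OF Y, of a b] by simp
qed

lemma casimir_nform: assumes Y: "Y \<in> so8"
  shows "(\<Sum>p<8. \<Sum>q<8. nform (bracket (sogen p q) Y) (sogen q p)) = 0"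
proof -
  have "(\<Sum>p<8. \<Sum>q<8. nform (bracket (sogen p q) Y) (sogen q p))
     = (\<Sum>p<8. \<Sum>q<8. Y q q - (if p = pidx q then Y q q else 0) - Y p p + (if q = pidx p then Y p p else 0))"
  proof (intro sum.cong refl)
    fix p q assume pq: "p \<in> {..<8::nat}" "q \<in> {..<8::nat}"
    hence "nform (bracket (sogen p q) Y) (sogen q p) = bracket (sogen p q) Y p q"
      using nform_sogen[OF so8_bracket[OF sogen_so8 Y]] by (simp add: nform_commute)
    moreover have e1: "(if p = pidx q then Y (pidx p) q else 0) = (if p = pidx q then Y q q else 0)"
      using pq pidx_pidx[of q] by (cases "p = pidx q") simp_all
    moreover have e2: "(if q = pidx p then Y p (pidx q) else 0) = (if q = pidx p then Y p p else 0)"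
      using pq pidx_pidx[of p] by (cases "q = pidx p") simp_all
    ultimately show "nform (bracket (sogen p q) Y) (sogen q p) = Y q q - (if p = pidx q then Y q q else 0) - Y p p + (if q = pidx p then Y p p else 0)"
      using pq by (simp only: bracket_sogen lessThan_iff if_True simp_thms)
  qed
  also have "\<dots> = 0"
  proof -
    have a: "(\<Sum>p<8. \<Sum>q<8. (if p = pidx q then Y q q else 0)) = 0"
      by (subst sum.swap) (simp add: pidx_less so8_trace[OF Y])
    have b: "(\<Sum>p<8. \<Sum>q<8. (if q = pidx p then Y p p else 0)) = 0"
    proof -
      have "(\<Sum>p<8. \<Sum>q<8. (if q = pidx p then Y p p else 0)) = (\<Sum>p<8. Y p p)"
        by (intro sum.cong refl) (simp add: pidx_less)
      thus ?thesis using so8_trace[OF Y] by simp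
    qed
    have c: "(\<Sum>p<8::nat. \<Sum>q<8::nat. Y q q) = 0" using so8_trace[OF Y] by simp
    have d: "(\<Sum>p<8::nat. \<Sum>q<8::nat. Y p p) = 0"
    proof -
      have "(\<Sum>p<8::nat. \<Sum>q<8::nat. Y p p) = (\<Sum>p<8::nat. 8 * Y p p)" by simp
      also have "\<dots> = 8 * (\<Sum>p<8::nat. Y p p)" by (simp add: sum_distrib_left)
      finally show ?thesis using so8_trace[OF Y] by simp
    qed
    show ?thesis by (simp only: sum.distrib sum_subtractf a b c d) simp
  qed
  finally show ?thesis .
qed

subsection \<open>The Cartan subalgebra and gradings\<close>

definition cdiag :: "(nat \<Rightarrow> complex) \<Rightarrow> nat \<Rightarrow> complex" where
  "cdiag x a = (if a < 4 then x a else if a < 8 then - x (a - 4) else 0)"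

lemma cartan_cdiag: "cartan x a c = (if a = c then cdiag x a else 0)"
  by (auto simp: cartan_def cdiag_def)

lemma cartan_diag: "cartan x a a = cdiag x a" by (simp add: cartan_cdiag)

lemma cdiag_pidx: "a < 8 \<Longrightarrow> cdiag x (pidx a) = - cdiag x a"
  using less8_cases[of a] by (auto simp: cdiag_def pidx_def)

lemma mmul_cartan_left: "mmul (cartan x) X a b = cdiag x a * X a b"
proof (cases "a < 8")
  case True
  have "mmul (cartan x) X a b = (\<Sum>c<8. if c = a then cdiag x a * X a b else 0)"
    unfolding mmul_def cartan_cdiag by (intro sum.cong refl) auto
  thus ?thesis using True by simp
next
  case False
  hence "cartan x a c = 0" for c by (simp add: cartan_cdiag cdiag_def)
  thus ?thesis using False by (simp add: mmul_def cdiag_def)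
qed

lemma mmul_cartan_right: "mmul X (cartan x) a b = X a b * cdiag x b"
proof (cases "b < 8")
  case True
  have "mmul X (cartan x) a b = (\<Sum>c<8. if c = b then X a b * cdiag x b else 0)"
    unfolding mmul_def cartan_cdiag by (intro sum.cong refl) auto
  thus ?thesis using True by simp
next
  case False
  hence "cartan x c b = 0" for c by (simp add: cartan_cdiag cdiag_def)
  thus ?thesis using False by (simp add: mmul_def cdiag_def)
qed

lemma bracket_cartan: "bracket (cartan x) X a b = (cdiag x a - cdiag x b) * X a b"
  by (simp add: bracket_def mmul_cartan_left mmul_cartan_right algebra_simps)

lemma cartan_so8: "cartan x \<in> so8"
proof (rule so8I)
  show "supp8 (cartan x)" by (auto simp: supp8_def cartan_def)
  fix a b :: nat assume ab: "a < 8" "b < 8"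
  show "cartan x a b = - cartan x (pidx b) (pidx a)"
  proof -
    have dp: "cdiag x (pidx c) = - cdiag x c" if "c < 8" for c
      using less8_cases[OF that] by (auto simp: cdiag_def pidx_def)
    show ?thesis unfolding cartan_cdiag pidx_inj[OF ab(2) ab(1)]
      by (cases "a = b") (simp_all add: dp ab)
  qed
qed

lemma nform_cartan: "nform (cartan x) Z = (\<Sum>a<8. cdiag x a * Z a a) / 2"
proof -
  have "(\<Sum>a<8. \<Sum>b<8. cartan x a b * Z b a) = (\<Sum>a<8. cdiag x a * Z a a)"
  proof (rule sum.cong[OF refl])
    fix a assume "a \<in> {..<8::nat}"
    have "(\<Sum>b<8. cartan x a b * Z b a) = (\<Sum>b<8. if b = a then cdiag x a * Z a a else 0)"
      by (intro sum.cong refl) (auto simp: cartan_cdiag)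
    thus "(\<Sum>b<8. cartan x a b * Z b a) = cdiag x a * Z a a" using \<open>a \<in> _\<close> by simp
  qed
  thus ?thesis by (simp add: nform_def)
qed

lemma nform_cartan_nplus: assumes X: "X \<in> nplus" shows "nform (cartan x) X = 0"
proof -
  have so: "X \<in> so8" using X by (simp add: nplus_def)
  have "X a a = 0" if "a < 8" for a
  proof (cases "a < 4")
    case True thus ?thesis using X by (simp add: nplus_def)
  next
    case False
    have "X a a = - X (pidx a) (pidx a)" using so8_skew[OF so that that] .
    moreover have "pidx a < 4" using False that pidx_upper[of a] by simp
    ultimately show ?thesis using X by (simp add: nplus_def)
  qed
  thus ?thesis unfolding nform_cartan by simp
qed

definition ad_eigen :: "(nat \<Rightarrow> complex) \<Rightarrow> int \<Rightarrow> mat \<Rightarrow> bool" where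
  "ad_eigen x j X \<longleftrightarrow> X \<in> so8 \<and> (\<forall>a b. X a b \<noteq> 0 \<longrightarrow> cdiag x a - cdiag x b = of_int j)"

lemma ad_eigen_bracket: assumes X: "ad_eigen x g X" and Y: "ad_eigen x h Y" shows "ad_eigen x (g + h) (bracket X Y)"
  unfolding ad_eigen_def
proof (intro conjI allI impI)
  show "bracket X Y \<in> so8" using X Y so8_bracket by (auto simp: ad_eigen_def)
  fix a b assume ne: "bracket X Y a b \<noteq> 0"
  show "cdiag x a - cdiag x b = of_int (g + h)"
  proof (rule ccontr)
    assume cc: "cdiag x a - cdiag x b \<noteq> of_int (g + h)"
    have h1: "X a c * Y c b = 0" for c
    proof (rule ccontr)
      assume "X a c * Y c b \<noteq> 0"
      hence "X a c \<noteq> 0" "Y c b \<noteq> 0" by auto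
      hence "cdiag x a - cdiag x c = of_int g" "cdiag x c - cdiag x b = of_int h" using X Y by (auto simp: ad_eigen_def)
      hence "cdiag x a - cdiag x b = of_int g + of_int h" by (simp add: algebra_simps)
      thus False using cc by simp
    qed
    have h2: "Y a c * X c b = 0" for c
    proof (rule ccontr)
      assume "Y a c * X c b \<noteq> 0"
      hence "Y a c \<noteq> 0" "X c b \<noteq> 0" by auto
      hence "cdiag x a - cdiag x c = of_int h" "cdiag x c - cdiag x b = of_int g" using X Y by (auto simp: ad_eigen_def)
      hence "cdiag x a - cdiag x b = of_int g + of_int h" by (simp add: algebra_simps)
      thus False using cc by simp
    qed
    have "bracket X Y a b = 0" by (simp add: bracket_def mmul_def h1 h2)
    thus False using ne by simp
  qed
qed

lemma ad_eigen_nform: assumes X: "ad_eigen x g X" and Y: "ad_eigen x h Y" and gh: "g + h \<noteq> 0" shows "nform X Y = 0"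
proof -
  have hh: "X a b * Y b a = 0" for a b
  proof (rule ccontr)
    assume "X a b * Y b a \<noteq> 0"
    hence "X a b \<noteq> 0" "Y b a \<noteq> 0" by auto
    hence "cdiag x a - cdiag x b = of_int g" "cdiag x b - cdiag x a = of_int h" using X Y by (auto simp: ad_eigen_def)
    hence "(of_int g + of_int h :: complex) = (cdiag x a - cdiag x b) + (cdiag x b - cdiag x a)" by simp
    hence "(of_int g + of_int h :: complex) = 0" by simp
    hence "g + h = 0" by (metis of_int_add of_int_eq_0_iff)
    thus False using gh by simp
  qed
  show ?thesis by (simp add: nform_def hh)
qed

lemma nform_cartan_bracket: assumes X: "ad_eigen x j X"
  shows "nform (cartan x) (bracket X Y) = of_int j * nform X Y"
proof -
  have "(\<Sum>a<8. cdiag x a * bracket X Y a a)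
     = (\<Sum>a<8. \<Sum>c<8. cdiag x a * (X a c * Y c a)) - (\<Sum>a<8. \<Sum>c<8. cdiag x a * (Y a c * X c a))"
    by (simp add: bracket_def mmul_def sum_distrib_left right_diff_distrib sum_subtractf)
  also have "(\<Sum>a<8. \<Sum>c<8. cdiag x a * (Y a c * X c a)) = (\<Sum>c<8. \<Sum>a<8. cdiag x a * (Y a c * X c a))"
    by (rule sum.swap)
  also have "(\<Sum>a<8. \<Sum>c<8. cdiag x a * (X a c * Y c a)) - (\<Sum>c<8. \<Sum>a<8. cdiag x a * (Y a c * X c a))
      = (\<Sum>a<8. \<Sum>c<8. of_int j * (X a c * Y c a))"
  proof -
    have "(\<Sum>a<8. \<Sum>c<8. cdiag x a * (X a c * Y c a)) - (\<Sum>a<8. \<Sum>c<8. cdiag x c * (Y c a * X a c))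
        = (\<Sum>a<8. \<Sum>c<8. (cdiag x a - cdiag x c) * (X a c * Y c a))"
      by (simp add: sum_subtractf[symmetric] algebra_simps)
    also have "\<dots> = (\<Sum>a<8. \<Sum>c<8. of_int j * (X a c * Y c a))"
      by (intro sum.cong refl) (use X in \<open>auto simp: ad_eigen_def\<close>)
    finally show ?thesis .
  qed
  finally have "(\<Sum>a<8. cdiag x a * bracket X Y a a) = of_int j * (\<Sum>a<8. \<Sum>c<8. X a c * Y c a)"
    by (simp add: sum_distrib_left)
  thus ?thesis unfolding nform_cartan by (simp add: nform_def)
qed

text \<open>\<open>(3, 2, 1, 0)\<close> are the coordinates of \<open>\<rho>\<^sup>\<or>\<close>, so \<open>ad \<rho>\<^sup>\<or>\<close> grades so(8) by the height of roots.\<close>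

definition rho :: "nat \<Rightarrow> int" where
  "rho a = (if a < 4 then 3 - int a else if a < 8 then int a - 7 else 0)"

lemma rho_pidx: "a < 8 \<Longrightarrow> rho (pidx a) = - rho a"
  using less8_cases[of a] by (auto simp: rho_def pidx_def)

lemma rho_eq_cases: "a < 8 \<Longrightarrow> b < 8 \<Longrightarrow> a \<noteq> b \<Longrightarrow> rho a = rho b \<Longrightarrow> (a = 3 \<and> b = 7) \<or> (a = 7 \<and> b = 3)"
  using less8_cases[of a] less8_cases[of b] by (auto simp: rho_def)

lemma cdiag_rho: "cdiag (\<lambda>j. of_int (rho j)) a = of_int (rho a)"
  by (auto simp: cdiag_def rho_def of_nat_diff)

definition has_height :: "int \<Rightarrow> mat \<Rightarrow> bool" where
  "has_height h X \<longleftrightarrow> ad_eigen (\<lambda>j. of_int (rho j)) h X"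

lemma has_height_iff: "has_height h X \<longleftrightarrow> X \<in> so8 \<and> (\<forall>a b. X a b \<noteq> 0 \<longrightarrow> rho a - rho b = h)"
  by (simp add: has_height_def ad_eigen_def cdiag_rho flip: of_int_diff)

lemma has_height_so8: "has_height h X \<Longrightarrow> X \<in> so8"
  by (simp add: has_height_iff)

lemma has_height_sogen: "p < 8 \<Longrightarrow> q < 8 \<Longrightarrow> has_height (rho p - rho q) (sogen p q)"
  unfolding has_height_iff using sogen_so8 rho_pidx by (auto simp: sogen_def)

lemma has_height_bracket: "has_height g X \<Longrightarrow> has_height h Y \<Longrightarrow> has_height (g + h) (bracket X Y)"
  unfolding has_height_def by (rule ad_eigen_bracket)

lemma has_height_nform: "has_height g X \<Longrightarrow> has_height h Y \<Longrightarrow> g + h \<noteq> 0 \<Longrightarrow> nform X Y = 0"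
  unfolding has_height_def by (rule ad_eigen_nform)

lemma has_height_zero_cartan: assumes X: "has_height 0 X" shows "X = cartan (\<lambda>j. X j j)"
proof (intro ext)
  fix a b
  have so: "X \<in> so8" using X by (simp add: has_height_iff)
  have off: "X a b = 0" if ab: "a < 8" "b < 8" "a \<noteq> b"
  proof (cases "rho a = rho b")
    case False thus ?thesis using X by (auto simp: has_height_iff)
  next
    case True
    have x37: "X 3 7 = 0" using so8_skew[OF so, of 3 7] by (simp add: pidx_def)
    have x73: "X 7 3 = 0" using so8_skew[OF so, of 7 3] by (simp add: pidx_def)
    show ?thesis using rho_eq_cases[OF ab True] x37 x73 by auto
  qed
  show "X a b = cartan (\<lambda>j. X j j) a b"
  proof (cases "a < 8 \<and> b < 8")
    case False
    hence "X a b = 0" using so8_outside[OF so, of a b] by auto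
    thus ?thesis using False by (auto simp: cartan_def)
  next
    case True
    show ?thesis
    proof (cases "a = b")
      case False thus ?thesis using off True by (simp add: cartan_def)
    next
      case eq: True
      show ?thesis
      proof (cases "a < 4")
        case True thus ?thesis using eq by (simp add: cartan_def)
      next
        case False
        have "X a a = - X (pidx a) (pidx a)" using so8_skew[OF so, of a a] \<open>a < 8 \<and> b < 8\<close> by simp
        thus ?thesis using eq False \<open>a < 8 \<and> b < 8\<close> pidx_upper[of a] by (simp add: cartan_def)
      qed
    qed
  qed
qed

lemma has_height_zero_cartan_sub: "has_height 0 X \<Longrightarrow> X \<in> cartan_sub"
  unfolding cartan_sub_def using has_height_zero_cartan by blast

lemma has_height_pos_nplus: assumes X: "has_height h X" and h: "h > 0" shows "X \<in> nplus"
proof -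
  have so: "X \<in> so8" using X by (simp add: has_height_iff)
  have d: "X a b \<noteq> 0 \<Longrightarrow> rho a - rho b = h" for a b using X by (simp add: has_height_iff)
  have 1: "X a b = 0" if "a < 4" "b < 4" "b \<le> a" for a b
  proof (rule ccontr)
    assume "X a b \<noteq> 0" hence "rho a - rho b = h" by (rule d)
    thus False using that h by (simp add: rho_def)
  qed
  have 2: "X a b = 0" if "4 \<le> a" "a < 8" "b < 4" for a b
  proof (rule ccontr)
    assume "X a b \<noteq> 0" hence "rho a - rho b = h" by (rule d)
    thus False using that h by (simp add: rho_def)
  qed
  show ?thesis unfolding nplus_def using so 1 2 by blast
qed

lemma nplus_rho_less: assumes X: "X \<in> nplus" and ne: "X a b \<noteq> 0" shows "rho a > rho b"
proof -
  have so: "X \<in> so8" using X by (simp add: nplus_def)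
  have "\<not> (8 \<le> a \<or> 8 \<le> b)" using so8_outside[OF so, of a b] ne by blast
  hence ab: "a < 8" "b < 8" by auto
  have c1: "X a b = 0" if "a < 4" "b < 4" "b \<le> a" for a b using X that by (simp add: nplus_def)
  have c2: "X a b = 0" if "4 \<le> a" "a < 8" "b < 4" for a b using X that by (simp add: nplus_def)
  consider "a < 4 \<and> b < 4" | "4 \<le> a \<and> b < 4" | "a < 4 \<and> 4 \<le> b" | "4 \<le> a \<and> 4 \<le> b" by linarith
  thus ?thesis
  proof cases
    case 1
    hence "a < b" using c1[of a b] ne by (cases "b \<le> a") auto
    thus ?thesis using 1 by (simp add: rho_def)
  next
    case 2 thus ?thesis using c2 ab ne by auto
  next
    case 3
    have "b \<noteq> pidx a" using so8_antidiag[OF so ab(1)] ne by auto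
    hence "\<not> (a = 3 \<and> b = 7)" by (auto simp: pidx_def)
    thus ?thesis using 3 ab by (auto simp: rho_def)
  next
    case 4
    have sk: "X a b = - X (pidx b) (pidx a)" using so8_skew[OF so ab] .
    have pa: "pidx a = a - 4" "pidx b = b - 4" using 4 ab pidx_upper by auto
    have "X (pidx b) (pidx a) \<noteq> 0" using sk ne by auto
    moreover have "pidx b < 4" "pidx a < 4" using pa 4 ab by auto
    ultimately have "\<not> (pidx a \<le> pidx b)" using c1[of "pidx b" "pidx a"] by blast
    hence "b < a" using pa 4 by auto
    thus ?thesis using 4 ab by (simp add: rho_def)
  qed
qed

definition rho_cartan :: mat where "rho_cartan = cartan (\<lambda>j. of_int (rho j))"

lemma bracket_rho_cartan: assumes X: "has_height h X" shows "bracket rho_cartan X = (\<lambda>a b. of_int h * X a b)"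
proof (intro ext)
  fix a b
  have "bracket rho_cartan X a b = of_int (rho a - rho b) * X a b"
    unfolding rho_cartan_def bracket_cartan cdiag_rho by simp
  show "bracket rho_cartan X a b = of_int h * X a b"
  proof (cases "X a b = 0")
    case True thus ?thesis using \<open>bracket rho_cartan X a b = _\<close> by simp
  next
    case False hence "rho a - rho b = h" using X by (simp add: has_height_iff)
    thus ?thesis using \<open>bracket rho_cartan X a b = _\<close> by simp
  qed
qed

lemma rho_cartan_sub: "rho_cartan \<in> cartan_sub" by (simp add: rho_cartan_def cartan_sub_def)

section \<open>Modules over the affine algebra\<close>

inductive_set cspan :: "(complex \<Rightarrow> 'm::ab_group_add \<Rightarrow> 'm) \<Rightarrow> 'm set \<Rightarrow> 'm set" for sc S where
  cspan_zero: "0 \<in> cspan sc S"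
| cspan_base: "x \<in> S \<Longrightarrow> x \<in> cspan sc S"
| cspan_add: "x \<in> cspan sc S \<Longrightarrow> y \<in> cspan sc S \<Longrightarrow> x + y \<in> cspan sc S"
| cspan_sc: "x \<in> cspan sc S \<Longrightarrow> sc c x \<in> cspan sc S"

lemma cspan_mono: "S \<subseteq> T \<Longrightarrow> cspan sc S \<subseteq> cspan sc T"
proof
  fix x assume S: "S \<subseteq> T" and x: "x \<in> cspan sc S"
  from x show "x \<in> cspan sc T" by (induction rule: cspan.induct) (use S in \<open>auto intro: cspan.intros\<close>)
qed

lemma cspan_subset: "S \<subseteq> cspan sc T \<Longrightarrow> cspan sc S \<subseteq> cspan sc T"
proof
  fix x assume S: "S \<subseteq> cspan sc T" and x: "x \<in> cspan sc S"
  from x show "x \<in> cspan sc T" by (induction rule: cspan.induct) (use S in \<open>auto intro: cspan.intros\<close>)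
qed

lemma cspan_image:
  assumes add: "\<And>x y. f (x + y) = f x + f y" and scl: "\<And>c x. f (sc c x) = sc' c (f x)" and z: "f 0 = 0"
  shows "x \<in> cspan sc S \<Longrightarrow> f x \<in> cspan sc' (f ` S)"
proof (induction rule: cspan.induct)
  case cspan_zero thus ?case using z by (simp add: cspan.cspan_zero)
next
  case (cspan_base x) thus ?case by (simp add: cspan.cspan_base)
next
  case (cspan_add x y) thus ?case using add by (simp add: cspan.cspan_add)
next
  case (cspan_sc x c) thus ?case using scl by (simp add: cspan.cspan_sc)
qed

lemma cspan_csubspace: "csubspace sc (cspan sc S)"
  unfolding csubspace_def by (auto intro: cspan.intros)

lemma csubspace_sum: assumes W: "csubspace sc W" shows "finite A \<Longrightarrow> (\<forall>i\<in>A. f i \<in> W) \<Longrightarrow> sum f A \<in> W"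
  by (induction A rule: finite_induct) (use W in \<open>auto simp: csubspace_def\<close>)

lemma cspan_sum: "finite A \<Longrightarrow> (\<forall>i\<in>A. f i \<in> cspan sc S) \<Longrightarrow> sum f A \<in> cspan sc S"
  by (rule csubspace_sum[OF cspan_csubspace])

lemma cspan_sum_list:
  assumes "x \<in> cspan sc {f z | z. P z}" and vs: "cvs sc"
  shows "\<exists>l. (\<forall>cz\<in>set l. P (snd cz)) \<and> x = sum_list (map (\<lambda>cz. sc (fst cz) (f (snd cz))) l)"
  using assms(1)
proof (induction rule: cspan.induct)
  case cspan_zero show ?case by (rule exI[of _ "[]"]) simp
next
  case (cspan_base x)
  then obtain z where "x = f z" "P z" by auto
  moreover have "sc 1 (f z) = f z" using vs by (simp add: cvs_def)
  ultimately show ?case by (intro exI[of _ "[(1, z)]"]) simp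
next
  case (cspan_add x y)
  then obtain l1 l2 where "\<forall>cz\<in>set l1. P (snd cz)" "x = sum_list (map (\<lambda>cz. sc (fst cz) (f (snd cz))) l1)"
    "\<forall>cz\<in>set l2. P (snd cz)" "y = sum_list (map (\<lambda>cz. sc (fst cz) (f (snd cz))) l2)" by blast
  thus ?case by (intro exI[of _ "l1 @ l2"]) auto
next
  case (cspan_sc x c)
  then obtain l where l: "\<forall>cz\<in>set l. P (snd cz)" "x = sum_list (map (\<lambda>cz. sc (fst cz) (f (snd cz))) l)" by blast
  have sz: "sc c 0 = 0" using vs unfolding cvs_def by (metis add_cancel_right_right)
  have "sc c (sum_list (map (\<lambda>cz. sc (fst cz) (f (snd cz))) l))
      = sum_list (map (\<lambda>cz. sc (c * fst cz) (f (snd cz))) l)"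
    by (induction l) (use vs sz in \<open>auto simp: cvs_def\<close>)
  thus ?case using l by (intro exI[of _ "map (\<lambda>cz. (c * fst cz, snd cz)) l"]) (auto simp: comp_def)
qed

lemma linear_so8_sum:
  fixes f :: "mat \<Rightarrow> 'a::comm_monoid_add"
  assumes add: "\<And>X Y. X \<in> so8 \<Longrightarrow> Y \<in> so8 \<Longrightarrow> f (\<lambda>a b. X a b + Y a b) = f X + f Y"
    and zero: "f (\<lambda>a b. 0) = 0"
  shows "finite I \<Longrightarrow> (\<forall>i\<in>I. Z i \<in> so8) \<Longrightarrow> f (\<lambda>a b. \<Sum>i\<in>I. Z i a b) = (\<Sum>i\<in>I. f (Z i))"
proof (induction I rule: finite_induct)
  case empty thus ?case using zero by simp
next
  case (insert i I)
  have "(\<lambda>a b. \<Sum>i\<in>insert i I. Z i a b) = (\<lambda>a b. Z i a b + (\<lambda>a b. \<Sum>i\<in>I. Z i a b) a b)"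
    using insert by simp
  thus ?case using add[of "Z i" "\<lambda>a b. \<Sum>i\<in>I. Z i a b"] so8_sum[of I Z] insert by simp
qed

locale affine_module =
  fixes sc :: "complex \<Rightarrow> 'm::ab_group_add \<Rightarrow> 'm" and act :: "mat \<Rightarrow> int \<Rightarrow> 'm \<Rightarrow> 'm" and k :: complex
  assumes aff: "aff_module sc act k"
begin

lemma sc_cvs: "cvs sc" using aff by (simp add: aff_module_def)

lemma sc_one[simp]: "sc 1 v = v" using sc_cvs by (simp add: cvs_def)

lemma sc_mult[simp]: "sc a (sc b v) = sc (a * b) v" using sc_cvs by (simp add: cvs_def)

lemma sc_addl: "sc (a + b) v = sc a v + sc b v" using sc_cvs by (simp add: cvs_def)

lemma sc_addr: "sc a (v + w) = sc a v + sc a w" using sc_cvs by (simp add: cvs_def)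

lemma sc_zero[simp]: "sc 0 v = 0"
proof -
  have "sc 0 v = sc 0 v + sc 0 v" using sc_addl[of 0 0 v] by simp
  thus ?thesis by simp
qed

lemma sc_zero_r[simp]: "sc c 0 = 0"
proof -
  have "sc c 0 = sc c 0 + sc c 0" using sc_addr[of c 0 0] by simp
  thus ?thesis by simp
qed

lemma sc_neg_r: "sc c (- v) = - sc c v"
proof -
  have "sc c v + sc c (- v) = 0" using sc_addr[of c v "- v"] by simp
  thus ?thesis by (simp add: eq_neg_iff_add_eq_0 add.commute)
qed

lemma sc_neg_l: "sc (- c) v = - sc c v"
proof -
  have "sc c v + sc (- c) v = 0" using sc_addl[of c "- c" v] by simp
  thus ?thesis by (simp add: eq_neg_iff_add_eq_0 add.commute)
qed

lemma sc_diff_r: "sc c (v - w) = sc c v - sc c w"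
  using sc_addr[of c v "- w"] sc_neg_r by simp

lemma sc_diff_l: "sc (a - b) v = sc a v - sc b v"
  using sc_addl[of a "- b" v] sc_neg_l by simp

lemma sc_sum_r: "sc c (sum f A) = (\<Sum>i\<in>A. sc c (f i))"
  by (induction A rule: infinite_finite_induct) (auto simp: sc_addr)

lemma sc_sum_l: "sc (sum f A) v = (\<Sum>i\<in>A. sc (f i) v)"
  by (induction A rule: infinite_finite_induct) (auto simp: sc_addl)

lemma sc_cancel: "sc c v = 0 \<Longrightarrow> c \<noteq> 0 \<Longrightarrow> v = 0"
proof -
  assume "sc c v = 0" "c \<noteq> 0"
  hence "sc (1 / c) (sc c v) = 0" by simp
  thus "v = 0" using \<open>c \<noteq> 0\<close> by simp
qed

lemma csubspace_diff: "csubspace sc W \<Longrightarrow> x \<in> W \<Longrightarrow> y \<in> W \<Longrightarrow> x - y \<in> W"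
proof -
  assume W: "csubspace sc W" and xy: "x \<in> W" "y \<in> W"
  have "sc (-1) y \<in> W" using W xy by (simp add: csubspace_def)
  hence "x + sc (-1) y \<in> W" using W xy by (simp add: csubspace_def)
  thus ?thesis using sc_neg_l[of 1 y] by simp
qed

lemma linear_sogen_expansion:
  assumes add: "\<And>X Y. X \<in> so8 \<Longrightarrow> Y \<in> so8 \<Longrightarrow> f (\<lambda>a b. X a b + Y a b) = f X + f Y"
    and scale: "\<And>X c. X \<in> so8 \<Longrightarrow> f (\<lambda>a b. c * X a b) = sc c (f X)"
    and X: "X \<in> so8"
  shows "f X = sc (1/2) (\<Sum>p<8. \<Sum>q<8. sc (X p q) (f (sogen p q)))"
proof -
  have fsum: "f (\<lambda>a b. \<Sum>i\<in>I. Z i a b) = (\<Sum>i\<in>I. f (Z i))" if "finite I" "\<forall>i\<in>I. Z i \<in> so8" for I Z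
    by (rule linear_so8_sum[OF add _ that]) (use scale[OF so8_zero, of 0] in simp_all)
  define Mpq where "Mpq p q = (\<lambda>a b. X p q * sogen p q a b)" for p q
  define Mp where "Mp p = (\<lambda>a b. \<Sum>q<8. Mpq p q a b)" for p
  have Mpq_so: "Mpq p q \<in> so8" if "p < 8" "q < 8" for p q
    unfolding Mpq_def using so8_scale[OF sogen_so8[OF that]] .
  have Mp_so: "Mp p \<in> so8" if "p < 8" for p
    unfolding Mp_def using so8_sum[of "{..<8}" "Mpq p"] Mpq_so that by simp
  have M_so: "(\<lambda>a b. \<Sum>p<8. Mp p a b) \<in> so8" using so8_sum[of "{..<8}" Mp] Mp_so by simp
  have e: "X = (\<lambda>a b. (1/2) * (\<Sum>p<8. Mp p a b))"
    using sogen_expansion[OF X] by (intro ext) (simp add: Mp_def Mpq_def)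
  have "f X = sc (1/2) (f (\<lambda>a b. \<Sum>p<8. Mp p a b))" by (subst e) (rule scale[OF M_so])
  also have "f (\<lambda>a b. \<Sum>p<8. Mp p a b) = (\<Sum>p<8. f (Mp p))"
    by (rule fsum) (simp_all add: Mp_so)
  also have "\<dots> = (\<Sum>p<8. \<Sum>q<8. f (Mpq p q))"
  proof (rule sum.cong[OF refl])
    fix p :: nat assume "p \<in> {..<8}"
    thus "f (Mp p) = (\<Sum>q<8. f (Mpq p q))" unfolding Mp_def by (intro fsum) (simp_all add: Mpq_so)
  qed
  also have "\<dots> = (\<Sum>p<8. \<Sum>q<8. sc (X p q) (f (sogen p q)))"
    by (intro sum.cong refl) (simp add: Mpq_def scale sogen_so8)
  finally show ?thesis .
qed

lemma act_add: "X \<in> so8 \<Longrightarrow> act X n (v + w) = act X n v + act X n w"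
  using aff by (simp add: aff_module_def)

lemma act_sc: "X \<in> so8 \<Longrightarrow> act X n (sc c v) = sc c (act X n v)"
  using aff by (simp add: aff_module_def)

lemma act_zero: "X \<in> so8 \<Longrightarrow> act X n 0 = 0"
  using act_sc[of X n 0 0] by simp

lemma act_neg: "X \<in> so8 \<Longrightarrow> act X n (- v) = - act X n v"
proof -
  assume X: "X \<in> so8"
  have "act X n v + act X n (- v) = 0" using act_add[OF X, of n v "- v"] act_zero[OF X] by simp
  thus ?thesis by (simp add: eq_neg_iff_add_eq_0 add.commute)
qed

lemma act_sum: "X \<in> so8 \<Longrightarrow> act X n (sum f A) = (\<Sum>i\<in>A. act X n (f i))"
  by (induction A rule: infinite_finite_induct) (auto simp: act_add act_zero)

lemma act_madd: "X \<in> so8 \<Longrightarrow> Y \<in> so8 \<Longrightarrow> act (\<lambda>a b. X a b + Y a b) n v = act X n v + act Y n v"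
  using aff by (simp add: aff_module_def)

lemma act_mscale: "X \<in> so8 \<Longrightarrow> act (\<lambda>a b. c * X a b) n v = sc c (act X n v)"
  using aff by (simp add: aff_module_def)

lemma act_mzero: "act (\<lambda>a b. 0) n v = 0"
  using act_mscale[OF so8_zero, of 0 n v] by simp

lemma act_msum: "finite I \<Longrightarrow> (\<forall>i\<in>I. X i \<in> so8) \<Longrightarrow> act (\<lambda>a b. \<Sum>i\<in>I. X i a b) n v = (\<Sum>i\<in>I. act (X i) n v)"
  by (rule linear_so8_sum[where f="\<lambda>X. act X n v"]) (simp_all add: act_madd act_mzero)

lemma act_sogen_expansion: "X \<in> so8 \<Longrightarrow> act X n v = sc (1/2) (\<Sum>p<8. \<Sum>q<8. sc (X p q) (act (sogen p q) n v))"
  by (rule linear_sogen_expansion) (simp_all add: act_madd act_mscale)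

lemma act_comm: "X \<in> so8 \<Longrightarrow> Y \<in> so8 \<Longrightarrow> act X m (act Y n v) = act Y n (act X m v) + act (bracket X Y) (m + n) v
   + (if m + n = 0 then sc (of_int m * nform X Y * k) v else 0)"
proof -
  assume X: "X \<in> so8" and Y: "Y \<in> so8"
  have "act X m (act Y n v) - act Y n (act X m v) = act (bracket X Y) (m + n) v
     + (if m + n = 0 then sc (of_int m * nform X Y * k) v else 0)"
    using aff X Y unfolding aff_module_def by blast
  hence "act X m (act Y n v) = (act (bracket X Y) (m + n) v
     + (if m + n = 0 then sc (of_int m * nform X Y * k) v else 0)) + act Y n (act X m v)"
    by (simp add: diff_eq_eq)
  thus ?thesis by (simp add: ac_simps)
qed

lemma act_cspan: "X \<in> so8 \<Longrightarrow> x \<in> cspan sc S \<Longrightarrow> act X n x \<in> cspan sc (act X n ` S)"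
  by (rule cspan_image[where f="act X n"]) (simp_all add: act_add act_sc act_zero)

lemma act_cspan_subset:
  assumes "X \<in> so8" and "act X n ` S \<subseteq> cspan sc T" and "x \<in> cspan sc S"
  shows "act X n x \<in> cspan sc T"
proof -
  have "act X n x \<in> cspan sc (act X n ` S)" by (rule act_cspan[OF assms(1,3)])
  also have "\<dots> \<subseteq> cspan sc T" by (rule cspan_subset[OF assms(2)])
  finally show ?thesis .
qed

end

definition submodule :: "(complex \<Rightarrow> 'm::ab_group_add \<Rightarrow> 'm) \<Rightarrow> (mat \<Rightarrow> int \<Rightarrow> 'm \<Rightarrow> 'm) \<Rightarrow> 'm set \<Rightarrow> bool" where
  "submodule sc act W \<longleftrightarrow> csubspace sc W \<and> (\<forall>X\<in>so8. \<forall>n. \<forall>v\<in>W. act X n v \<in> W)"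

lemma irreducible_submodule: "irreducible_mod sc act \<Longrightarrow> submodule sc act W \<Longrightarrow> W = {0} \<or> W = UNIV"
  unfolding irreducible_mod_def submodule_def by blast

section \<open>Spanning by lowering words\<close>

text \<open>A letter \<open>(X, n, h)\<close> stands for the mode \<open>X \<otimes> t\<^sup>n\<close> of an element \<open>X\<close> of height \<open>h\<close>; a word
  acts by composition, its last letter first. Lowering words are products of modes from the negative
  part \<open>t\<^sup>-\<^sup>1 g[t\<^sup>-\<^sup>1] \<oplus> n\<^sub>-\<close>, graded by total mode and total height.\<close>

type_synonym letter = "mat \<times> int \<times> int"

primrec word_act :: "(mat \<Rightarrow> int \<Rightarrow> 'm \<Rightarrow> 'm) \<Rightarrow> letter list \<Rightarrow> 'm \<Rightarrow> 'm" where
  "word_act act [] v = v"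
| "word_act act (l # w) v = act (fst l) (fst (snd l)) (word_act act w v)"

definition graded_word :: "letter list \<Rightarrow> bool" where
  "graded_word w \<longleftrightarrow> (\<forall>l\<in>set w. has_height (snd (snd l)) (fst l))"

definition lowering_word :: "letter list \<Rightarrow> bool" where
  "lowering_word w \<longleftrightarrow> (\<forall>l\<in>set w. fst (snd l) < 0 \<or> (fst (snd l) = 0 \<and> snd (snd l) < 0))"

definition word_mode :: "letter list \<Rightarrow> int" where
  "word_mode w = sum_list (map (\<lambda>l. fst (snd l)) w)"

definition word_height :: "letter list \<Rightarrow> int" where
  "word_height w = sum_list (map (\<lambda>l. snd (snd l)) w)"

lemma graded_word_simps[simp]: "graded_word []" "graded_word (l # w) \<longleftrightarrow> has_height (snd (snd l)) (fst l) \<and> graded_word w"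
  by (auto simp: graded_word_def)

lemma lowering_word_simps[simp]: "lowering_word []" "lowering_word (l # w) \<longleftrightarrow> (fst (snd l) < 0 \<or> (fst (snd l) = 0 \<and> snd (snd l) < 0)) \<and> lowering_word w"
  by (auto simp: lowering_word_def)

lemma word_mode_simps[simp]: "word_mode [] = 0" "word_mode (l # w) = fst (snd l) + word_mode w"
  by (auto simp: word_mode_def)

lemma word_height_simps[simp]: "word_height [] = 0" "word_height (l # w) = snd (snd l) + word_height w"
  by (auto simp: word_height_def)

lemma word_act_append: "word_act act (w1 @ w2) v = word_act act w1 (word_act act w2 v)"
  by (induction w1) auto

lemma graded_word_append[simp]: "graded_word (w1 @ w2) \<longleftrightarrow> graded_word w1 \<and> graded_word w2" by (auto simp: graded_word_def)

lemma lowering_word_append[simp]: "lowering_word (w1 @ w2) \<longleftrightarrow> lowering_word w1 \<and> lowering_word w2" by (auto simp: lowering_word_def)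

context affine_module begin

definition hw_set :: "'m set \<Rightarrow> bool" where
  "hw_set U \<longleftrightarrow> (\<forall>u\<in>U. \<forall>X n h. has_height h X \<longrightarrow> (0 < n \<or> (n = 0 \<and> 0 < h)) \<longrightarrow> act X n u = 0) \<and>
     (\<forall>u\<in>U. \<forall>X. has_height 0 X \<longrightarrow> act X 0 u \<in> cspan sc U)"

definition lowering_span :: "'m set \<Rightarrow> int \<Rightarrow> int \<Rightarrow> 'm set" where
  "lowering_span U m h = cspan sc {word_act act w u | w u. u \<in> U \<and> graded_word w \<and> lowering_word w \<and> word_mode w = m \<and> word_height w = h}"

lemma lowering_span_word: "u \<in> U \<Longrightarrow> graded_word w \<Longrightarrow> lowering_word w \<Longrightarrow> word_act act w u \<in> lowering_span U (word_mode w) (word_height w)"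
  unfolding lowering_span_def by (rule cspan_base) blast

lemma lowering_span_act:
  assumes X: "has_height g X" and low: "n < 0 \<or> (n = 0 \<and> g < 0)" and x: "x \<in> lowering_span U m h"
  shows "act X n x \<in> lowering_span U (n + m) (g + h)"
proof -
  have "act X n (word_act act w u) \<in> lowering_span U (n + m) (g + h)"
    if "u \<in> U" "graded_word w" "lowering_word w" "word_mode w = m" "word_height w = h" for w u
    using lowering_span_word[of u U "(X, n, g) # w"] that X low by simp
  thus ?thesis using act_cspan_subset[OF has_height_so8[OF X] _ x[unfolded lowering_span_def]]
    unfolding lowering_span_def by blast
qed

lemma lowering_span_add: "x \<in> lowering_span U m h \<Longrightarrow> y \<in> lowering_span U m h \<Longrightarrow> x + y \<in> lowering_span U m h"
  unfolding lowering_span_def by (rule cspan_add)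

lemma lowering_span_sc: "x \<in> lowering_span U m h \<Longrightarrow> sc c x \<in> lowering_span U m h"
  unfolding lowering_span_def by (rule cspan_sc)

lemma lowering_span_zero: "0 \<in> lowering_span U m h"
  unfolding lowering_span_def by (rule cspan_zero)

lemma act_hw_set_lowering_span:
  assumes U: "hw_set U" and u: "u \<in> U" and Y: "has_height g Y"
  shows "act Y m u \<in> lowering_span U m g"
proof -
  consider (lo) "m < 0 \<or> (m = 0 \<and> g < 0)" | (hi) "0 < m \<or> (m = 0 \<and> 0 < g)" | (ca) "m = 0 \<and> g = 0"
    by linarith
  thus ?thesis
  proof cases
    case lo
    thus ?thesis using lowering_span_word[OF u, of "[(Y, m, g)]"] Y by simp
  next
    case hi
    have "act Y m u = 0" using U u Y hi unfolding hw_set_def by blast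
    thus ?thesis by (simp add: lowering_span_zero)
  next
    case ca
    have "act Y 0 u \<in> cspan sc U" using U u Y ca unfolding hw_set_def by auto
    moreover have "cspan sc U \<subseteq> lowering_span U 0 0"
      unfolding lowering_span_def by (rule cspan_mono) (force intro: exI[of _ "[]"])
    ultimately show ?thesis using ca by auto
  qed
qed

lemma act_word_lowering_span:
  assumes U: "hw_set U"
  shows "graded_word w \<Longrightarrow> lowering_word w \<Longrightarrow> u \<in> U \<Longrightarrow> has_height g Y \<Longrightarrow>
    act Y m (word_act act w u) \<in> lowering_span U (m + word_mode w) (g + word_height w)"
proof (induction w arbitrary: Y m g)
  case Nil thus ?case using act_hw_set_lowering_span[OF U] by simp
next
  case (Cons x w)
  obtain X n h where x: "x = (X, n, h)" by (cases x) auto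
  have Xh: "has_height h X" and xlow: "n < 0 \<or> (n = 0 \<and> h < 0)" and hw: "graded_word w" and lw: "lowering_word w"
    using Cons.prems x by auto
  have Yh: "has_height g Y" using Cons.prems by simp
  define z where "z = word_act act w u"
  show ?case
  proof (cases "m < 0 \<or> (m = 0 \<and> g < 0)")
    case True
    thus ?thesis using lowering_span_word[of u U "(Y, m, g) # x # w"] Cons.prems by simp
  next
    case False
    have t1: "act X n (act Y m z) \<in> lowering_span U (m + word_mode (x # w)) (g + word_height (x # w))"
      using lowering_span_act[OF Xh xlow Cons.IH[OF hw lw Cons.prems(3) Yh]] x by (simp add: z_def ac_simps)
    have t2: "act (bracket Y X) (m + n) z \<in> lowering_span U (m + word_mode (x # w)) (g + word_height (x # w))"
      using Cons.IH[OF hw lw Cons.prems(3) has_height_bracket[OF Yh Xh], where m="m + n"] x by (simp add: z_def ac_simps)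
    have t3: "(if m + n = 0 then sc (of_int m * nform Y X * k) z else 0)
        \<in> lowering_span U (m + word_mode (x # w)) (g + word_height (x # w))"
    proof (cases "m + n = 0 \<and> g + h = 0")
      case True
      have "sc (of_int m * nform Y X * k) z \<in> lowering_span U (word_mode w) (word_height w)"
        unfolding z_def by (rule lowering_span_sc[OF lowering_span_word[OF Cons.prems(3) hw lw]])
      moreover have e1: "m + word_mode (x # w) = word_mode w" and e2: "g + word_height (x # w) = word_height w"
        using True x by simp_all
      ultimately show ?thesis using True unfolding e1 e2 by simp
    next
      case False
      thus ?thesis using has_height_nform[OF Yh Xh] by (auto simp: lowering_span_zero)
    qed
    have "act Y m (word_act act (x # w) u) = act X n (act Y m z) + act (bracket Y X) (m + n) z
       + (if m + n = 0 then sc (of_int m * nform Y X * k) z else 0)"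
      using act_comm[OF has_height_so8[OF Yh] has_height_so8[OF Xh]] x by (simp add: z_def)
    thus ?thesis using t1 t2 t3 by (simp add: lowering_span_add)
  qed
qed

lemma word_lowering_span:
  assumes U: "hw_set U"
  shows "graded_word w \<Longrightarrow> u \<in> U \<Longrightarrow> word_act act w u \<in> lowering_span U (word_mode w) (word_height w)"
proof (induction w)
  case Nil thus ?case using lowering_span_word[OF Nil(2), of "[]"] by simp
next
  case (Cons x w)
  obtain Y m g where x: "x = (Y, m, g)" by (cases x) auto
  have Yh: "has_height g Y" and hw: "graded_word w" using Cons.prems x by auto
  have "act Y m (word_act act w' u') \<in> lowering_span U (m + word_mode w) (g + word_height w)"
    if "u' \<in> U" "graded_word w'" "lowering_word w'" "word_mode w' = word_mode w" "word_height w' = word_height w"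
    for w' u'
    using act_word_lowering_span[OF U that(2,3,1) Yh, of m] that(4,5) by simp
  hence "act Y m (word_act act w u) \<in> lowering_span U (m + word_mode w) (g + word_height w)"
    using act_cspan_subset[OF has_height_so8[OF Yh] _ Cons.IH[OF hw Cons.prems(2), unfolded lowering_span_def]]
    unfolding lowering_span_def by blast
  thus ?case using x by simp
qed

end

context affine_module begin

definition generated :: "'m set \<Rightarrow> 'm set" where
  "generated U = cspan sc {word_act act w u | w u. u \<in> U \<and> graded_word w}"

lemma generated_act: assumes x: "x \<in> generated U" and Y: "Y \<in> so8" shows "act Y n x \<in> generated U"
proof -
  have F: "act (sogen p q) n x \<in> generated U" if pq: "p < 8" "q < 8" for p q
  proof -
    have "act (sogen p q) n x \<in> cspan sc (act (sogen p q) n ` {word_act act w u | w u. u \<in> U \<and> graded_word w})"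
      using act_cspan[OF sogen_so8[OF pq]] x unfolding generated_def by blast
    also have "\<dots> \<subseteq> generated U" unfolding generated_def
    proof (rule cspan_mono, rule subsetI)
      fix y assume "y \<in> act (sogen p q) n ` {word_act act w u | w u. u \<in> U \<and> graded_word w}"
      then obtain w u where wu: "u \<in> U" "graded_word w" "y = act (sogen p q) n (word_act act w u)" by blast
      hence "y = word_act act ((sogen p q, n, rho p - rho q) # w) u \<and> graded_word ((sogen p q, n, rho p - rho q) # w)"
        using has_height_sogen[OF pq] by simp
      thus "y \<in> {word_act act w u | w u. u \<in> U \<and> graded_word w}" using wu by blast
    qed
    finally show ?thesis .
  qed
  have "act Y n x = sc (1/2) (\<Sum>p<8. \<Sum>q<8. sc (Y p q) (act (sogen p q) n x))" by (rule act_sogen_expansion[OF Y])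
  also have "\<dots> \<in> generated U" unfolding generated_def
    by (intro cspan_sc cspan_sum ballI finite_lessThan) (use F in \<open>auto simp: generated_def intro: cspan_sc\<close>)
  finally show ?thesis .
qed

lemma submodule_generated: "submodule sc act (generated U)"
  unfolding submodule_def generated_def using cspan_csubspace generated_act[unfolded generated_def] by blast

lemma generated_UNIV:
  assumes "irreducible_mod sc act" and "x \<in> generated U" and "x \<noteq> 0"
  shows "generated U = UNIV"
  using irreducible_submodule[OF assms(1) submodule_generated] assms(2,3) by auto

lemma generated_lowering:
  assumes U: "hw_set U"
  shows "generated U \<subseteq> cspan sc {word_act act w u | w u. u \<in> U \<and> graded_word w \<and> lowering_word w}"
  unfolding generated_def
proof (rule cspan_subset, rule subsetI)
  fix y assume "y \<in> {word_act act w u | w u. u \<in> U \<and> graded_word w}"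
  then obtain w u where wu: "u \<in> U" "graded_word w" "y = word_act act w u" by blast
  have "y \<in> lowering_span U (word_mode w) (word_height w)" using word_lowering_span[OF U wu(2,1)] wu(3) by simp
  also have "\<dots> \<subseteq> cspan sc {word_act act w u | w u. u \<in> U \<and> graded_word w \<and> lowering_word w}"
    unfolding lowering_span_def by (rule cspan_mono) blast
  finally show "y \<in> cspan sc {word_act act w u | w u. u \<in> U \<and> graded_word w \<and> lowering_word w}" .
qed

end
section \<open>A truncated Sugawara operator\<close>

lemma sum_telescope_shift: "(\<Sum>i<L. g i - g (i + d)) = (\<Sum>i<d. g i) - (\<Sum>i<d. g (L + i))"
  for g :: "nat \<Rightarrow> 'a::ab_group_add"
proof -
  define h where "h i = (\<Sum>j<d. g (i + j))" for i
  have hh: "g i - g (i + d) = h i - h (Suc i)" for i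
  proof (cases d)
    case 0 thus ?thesis by (simp add: h_def)
  next
    case (Suc d')
    have "h i = g i + (\<Sum>j<d'. g (Suc i + j))" unfolding h_def Suc by (subst sum.lessThan_Suc_shift) simp
    moreover have "h (Suc i) = (\<Sum>j<d'. g (Suc i + j)) + g (Suc i + d')" unfolding h_def Suc by simp
    ultimately show ?thesis using Suc by (simp add: algebra_simps)
  qed
  have "(\<Sum>i<L. g i - g (i + d)) = (\<Sum>i<L. h i - h (Suc i))" by (simp add: hh)
  also have "\<dots> = h 0 - h L" by (rule sum_lessThan_telescope')
  finally show ?thesis by (simp add: h_def)
qed

lemma sum_swap_blocks: "(\<Sum>p<8::nat. \<Sum>q<8::nat. \<Sum>r<8::nat. \<Sum>s<8::nat. f p q r s)
   = (\<Sum>r<8::nat. \<Sum>s<8::nat. \<Sum>p<8::nat. \<Sum>q<8::nat. f p q r s)"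
proof -
  have 1: "(\<Sum>p<8::nat. \<Sum>q<8::nat. \<Sum>r<8::nat. \<Sum>s<8::nat. f p q r s)
     = (\<Sum>p<8::nat. \<Sum>r<8::nat. \<Sum>q<8::nat. \<Sum>s<8::nat. f p q r s)"
    by (rule sum.cong[OF refl], rule sum.swap)
  have 2: "(\<Sum>p<8::nat. \<Sum>r<8::nat. \<Sum>q<8::nat. \<Sum>s<8::nat. f p q r s)
     = (\<Sum>r<8::nat. \<Sum>p<8::nat. \<Sum>q<8::nat. \<Sum>s<8::nat. f p q r s)"
    by (rule sum.swap)
  have 3: "(\<Sum>r<8::nat. \<Sum>p<8::nat. \<Sum>q<8::nat. \<Sum>s<8::nat. f p q r s)
     = (\<Sum>r<8::nat. \<Sum>p<8::nat. \<Sum>s<8::nat. \<Sum>q<8::nat. f p q r s)"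
    by (rule sum.cong[OF refl], rule sum.cong[OF refl], rule sum.swap)
  have 4: "(\<Sum>r<8::nat. \<Sum>p<8::nat. \<Sum>s<8::nat. \<Sum>q<8::nat. f p q r s)
     = (\<Sum>r<8::nat. \<Sum>s<8::nat. \<Sum>p<8::nat. \<Sum>q<8::nat. f p q r s)"
    by (rule sum.cong[OF refl], rule sum.swap)
  show ?thesis using 1 2 3 4 by simp
qed

context affine_module begin

lemma act_double_sum: "(\<And>(p::nat) (q::nat). p < 8 \<Longrightarrow> q < 8 \<Longrightarrow> Z p q \<in> so8) \<Longrightarrow>
  act (\<lambda>a b. \<Sum>p<8. \<Sum>q<8. Z p q a b) n v = (\<Sum>p<8. \<Sum>q<8. act (Z p q) n v)"
proof -
  assume Z: "\<And>p q. p < 8 \<Longrightarrow> q < 8 \<Longrightarrow> Z p q \<in> so8"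
  define Mp where "Mp p = (\<lambda>a b. \<Sum>q<8. Z p q a b)" for p
  have Mp_so: "Mp p \<in> so8" if "p < 8" for p
    unfolding Mp_def using so8_sum[of "{..<8}" "Z p"] Z that by simp
  have "act (\<lambda>a b. \<Sum>p<8. \<Sum>q<8. Z p q a b) n v = act (\<lambda>a b. \<Sum>p<8. Mp p a b) n v"
    by (simp add: Mp_def)
  also have "\<dots> = (\<Sum>p<8. act (Mp p) n v)" by (rule act_msum) (simp_all add: Mp_so)
  also have "\<dots> = (\<Sum>p<8. \<Sum>q<8. act (Z p q) n v)"
  proof (rule sum.cong[OF refl])
    fix p assume "p \<in> {..<8::nat}"
    thus "act (Mp p) n v = (\<Sum>q<8. act (Z p q) n v)"
      unfolding Mp_def by (intro act_msum) (simp_all add: Z)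
  qed
  finally show ?thesis .
qed

lemma sum_act_sogen: "X \<in> so8 \<Longrightarrow> (\<Sum>p<8. \<Sum>q<8. sc (X p q) (act (sogen p q) n v)) = sc 2 (act X n v)"
  using act_sogen_expansion[of X n v] by simp

text \<open>\<open>sugawara N\<close> is the Sugawara element \<open>\<Sum>\<^sub>n \<Sum>\<^sub>p\<^sub>q :F\<^sub>p\<^sub>q(-n) F\<^sub>q\<^sub>p(n):\<close> with the sum over modes truncated
  to \<open>|n| \<le> N\<close>. On vectors killed by all modes \<open>\<ge> N\<^sub>0\<close> the truncation is harmless for \<open>N\<close> large, and
  the operator commutes with \<open>Y\<^sub>m\<close> up to \<open>-4(k + 6) m Y\<^sub>m\<close> (lemma \<open>sugawara_comm\<close>), so it measures the
  total mode of a vector whenever \<open>k\<close> is not critical.\<close>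

definition sug_mode :: "int \<Rightarrow> 'm \<Rightarrow> 'm" where
  "sug_mode n x = (\<Sum>p<8. \<Sum>q<8. act (sogen p q) (- n) (act (sogen q p) n x))"

definition sugawara :: "nat \<Rightarrow> 'm \<Rightarrow> 'm" where
  "sugawara N x = (\<Sum>i<2 * N + 1. sug_mode (int i - int N) x)"

definition killed_from :: "int \<Rightarrow> 'm \<Rightarrow> bool" where
  "killed_from N x \<longleftrightarrow> (\<forall>n\<ge>N. \<forall>X\<in>so8. act X n x = 0)"

definition casimir_const :: complex where
  "casimir_const = (\<Sum>p<8. \<Sum>q<8. nform (sogen p q) (sogen q p))"

definition sug_cross :: "mat \<Rightarrow> int \<Rightarrow> int \<Rightarrow> 'm \<Rightarrow> 'm" where
  "sug_cross Y m j x = (\<Sum>p<8. \<Sum>q<8. act (bracket (sogen p q) Y) (m - j) (act (sogen q p) j x))"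

lemma sum_act_bracket_sogen_dual: "(\<Sum>p<8. \<Sum>q<8. act (bracket (sogen p q) (sogen q p)) 0 x) = 0"
proof -
  let ?S = "(\<Sum>p<8. \<Sum>q<8. act (bracket (sogen p q) (sogen q p)) 0 x)"
  have "?S = (\<Sum>p<8. \<Sum>q<8. act (bracket (sogen q p) (sogen p q)) 0 x)" by (rule sum.swap)
  also have "\<dots> = (\<Sum>p<8. \<Sum>q<8. - act (bracket (sogen p q) (sogen q p)) 0 x)"
  proof (intro sum.cong refl)
    fix p q assume pq: "p \<in> {..<8::nat}" "q \<in> {..<8::nat}"
    have "bracket (sogen q p) (sogen p q) = (\<lambda>a b. (-1) * bracket (sogen p q) (sogen q p) a b)"
      by (intro ext) (simp add: bracket_antisym[of "sogen q p"])
    hence "act (bracket (sogen q p) (sogen p q)) 0 x = act (\<lambda>a b. (-1) * bracket (sogen p q) (sogen q p) a b) 0 x"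
      by (simp only:)
    also have "\<dots> = sc (-1) (act (bracket (sogen p q) (sogen q p)) 0 x)"
      by (rule act_mscale[OF so8_bracket[OF sogen_so8 sogen_so8]]) (use pq in auto)
    finally have "act (bracket (sogen q p) (sogen p q)) 0 x = sc (-1) (act (bracket (sogen p q) (sogen q p)) 0 x)" .
    thus "act (bracket (sogen q p) (sogen p q)) 0 x = - act (bracket (sogen p q) (sogen q p)) 0 x"
      using sc_neg_l[of 1] by simp
  qed
  also have "\<dots> = - ?S" by (simp add: sum_negf)
  finally have "?S + ?S = 0" by (simp add: eq_neg_iff_add_eq_0)
  hence "sc 2 ?S = 0" using sc_addl[of 1 1 ?S] by simp
  thus ?thesis using sc_cancel by auto
qed

lemma sug_mode_neg: "sug_mode (- n) x = sug_mode n x + sc (of_int n * k * casimir_const) x"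
proof -
  have "sug_mode (- n) x = (\<Sum>p<8. \<Sum>q<8. act (sogen q p) (- n) (act (sogen p q) n x)
      + act (bracket (sogen p q) (sogen q p)) 0 x + sc (of_int n * nform (sogen p q) (sogen q p) * k) x)"
    unfolding sug_mode_def
  proof (intro sum.cong refl)
    fix p q assume pq: "p \<in> {..<8::nat}" "q \<in> {..<8::nat}"
    show "act (sogen p q) (- (- n)) (act (sogen q p) (- n) x) = act (sogen q p) (- n) (act (sogen p q) n x)
      + act (bracket (sogen p q) (sogen q p)) 0 x + sc (of_int n * nform (sogen p q) (sogen q p) * k) x"
      using act_comm[OF sogen_so8 sogen_so8, of p q q p n "- n" x] pq by simp
  qed
  also have "\<dots> = sug_mode n x + 0 + sc (of_int n * k * casimir_const) x"
  proof -
    have 1: "(\<Sum>p<8. \<Sum>q<8. act (sogen q p) (- n) (act (sogen p q) n x)) = sug_mode n x"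
      unfolding sug_mode_def by (rule sum.swap)
    have 3: "(\<Sum>p<8. \<Sum>q<8. sc (of_int n * nform (sogen p q) (sogen q p) * k) x) = sc (of_int n * k * casimir_const) x"
      by (simp add: sc_sum_l casimir_const_def sum_distrib_left sum_distrib_right algebra_simps)
    show ?thesis using 1 3 sum_act_bracket_sogen_dual by (simp add: sum.distrib)
  qed
  finally show ?thesis by simp
qed

lemma sum_bracket_sogen_transfer: assumes Y: "Y \<in> so8"
  shows "(\<Sum>p<8. \<Sum>q<8. act (bracket (sogen p q) Y) a (act (sogen q p) b x))
     = - (\<Sum>p<8. \<Sum>q<8. act (sogen p q) a (act (bracket (sogen q p) Y) b x))"
proof -
  have inner: "(\<Sum>p<8. \<Sum>q<8. sc (bracket (sogen p q) Y r s) (act (sogen q p) b x))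
      = - sc 2 (act (bracket (sogen s r) Y) b x)" if rs: "r < 8" "s < 8" for r s
  proof -
    have "(\<Sum>p<8. \<Sum>q<8. sc (bracket (sogen p q) Y r s) (act (sogen q p) b x))
        = (\<Sum>p<8. \<Sum>q<8. - sc (bracket (sogen s r) Y q p) (act (sogen q p) b x))"
    proof (intro sum.cong refl)
      fix p q assume pq: "p \<in> {..<8::nat}" "q \<in> {..<8::nat}"
      have "bracket (sogen p q) Y r s = - bracket (sogen s r) Y q p"
        using bracket_sogen_swap[OF Y, of q p r s] pq rs by simp
      thus "sc (bracket (sogen p q) Y r s) (act (sogen q p) b x) = - sc (bracket (sogen s r) Y q p) (act (sogen q p) b x)"
        by (simp add: sc_neg_l)
    qed
    also have "\<dots> = - (\<Sum>p<8. \<Sum>q<8. sc (bracket (sogen s r) Y q p) (act (sogen q p) b x))"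
      by (simp add: sum_negf)
    also have "(\<Sum>p<8. \<Sum>q<8. sc (bracket (sogen s r) Y q p) (act (sogen q p) b x))
        = (\<Sum>p<8. \<Sum>q<8. sc (bracket (sogen s r) Y p q) (act (sogen p q) b x))"
      by (rule sum.swap)
    also have "\<dots> = sc 2 (act (bracket (sogen s r) Y) b x)"
      using sum_act_sogen[OF so8_bracket[OF sogen_so8 Y]] rs by simp
    finally show ?thesis .
  qed
  have "(\<Sum>p<8. \<Sum>q<8. act (bracket (sogen p q) Y) a (act (sogen q p) b x))
     = (\<Sum>p<8. \<Sum>q<8. sc (1/2) (\<Sum>r<8. \<Sum>s<8. sc (bracket (sogen p q) Y r s) (act (sogen r s) a (act (sogen q p) b x))))"
    by (intro sum.cong refl) (simp add: act_sogen_expansion[OF so8_bracket[OF sogen_so8 Y]])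
  also have "\<dots> = sc (1/2) (\<Sum>p<8. \<Sum>q<8. \<Sum>r<8. \<Sum>s<8. sc (bracket (sogen p q) Y r s) (act (sogen r s) a (act (sogen q p) b x)))"
    by (simp add: sc_sum_r)
  also have "(\<Sum>p<8. \<Sum>q<8. \<Sum>r<8. \<Sum>s<8. sc (bracket (sogen p q) Y r s) (act (sogen r s) a (act (sogen q p) b x)))
     = (\<Sum>r<8. \<Sum>s<8. \<Sum>p<8. \<Sum>q<8. sc (bracket (sogen p q) Y r s) (act (sogen r s) a (act (sogen q p) b x)))"
    by (rule sum_swap_blocks)
  also have "\<dots> = (\<Sum>r<8. \<Sum>s<8. act (sogen r s) a (\<Sum>p<8. \<Sum>q<8. sc (bracket (sogen p q) Y r s) (act (sogen q p) b x)))"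
    by (intro sum.cong refl) (simp add: act_sum act_sc sogen_so8)
  also have "\<dots> = (\<Sum>r<8. \<Sum>s<8. act (sogen r s) a (- sc 2 (act (bracket (sogen s r) Y) b x)))"
    by (intro sum.cong refl) (simp add: inner)
  also have "\<dots> = - sc 2 (\<Sum>r<8. \<Sum>s<8. act (sogen r s) a (act (bracket (sogen s r) Y) b x))"
    by (simp add: act_neg act_sc sogen_so8 sc_sum_r sum_negf)
  finally show ?thesis by (simp add: sc_neg_r)
qed

lemma sogen_pair_comm: assumes Y: "Y \<in> so8" and pq: "p < 8" "q < 8"
  shows "act (sogen p q) (- n) (act (sogen q p) n (act Y m x))
   = act Y m (act (sogen p q) (- n) (act (sogen q p) n x)) + act (bracket (sogen p q) Y) (m - n) (act (sogen q p) n x)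
     + act (sogen p q) (- n) (act (bracket (sogen q p) Y) (n + m) x)
     + (if n + m = 0 then sc (of_int n * nform (sogen q p) Y * k) (act (sogen p q) (- n) x) else 0)
     + (if m = n then sc (of_int (- n) * nform (sogen p q) Y * k) (act (sogen q p) n x) else 0)"
proof -
  have Fpq: "sogen p q \<in> so8" and Fqp: "sogen q p \<in> so8" using sogen_so8 pq by auto
  have c1: "act (sogen q p) n (act Y m x) = act Y m (act (sogen q p) n x) + act (bracket (sogen q p) Y) (n + m) x
     + (if n + m = 0 then sc (of_int n * nform (sogen q p) Y * k) x else 0)"
    by (rule act_comm[OF Fqp Y])
  have c2: "act (sogen p q) (- n) (act Y m (act (sogen q p) n x)) = act Y m (act (sogen p q) (- n) (act (sogen q p) n x))
     + act (bracket (sogen p q) Y) (- n + m) (act (sogen q p) n x)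
     + (if - n + m = 0 then sc (of_int (- n) * nform (sogen p q) Y * k) (act (sogen q p) n x) else 0)"
    by (rule act_comm[OF Fpq Y])
  have c3: "act (sogen p q) (- n) (if n + m = 0 then sc (of_int n * nform (sogen q p) Y * k) x else 0)
     = (if n + m = 0 then sc (of_int n * nform (sogen q p) Y * k) (act (sogen p q) (- n) x) else 0)"
    by (simp add: act_sc[OF Fpq] act_zero[OF Fpq])
  have e: "- n + m = m - n" "(- n + m = 0) = (m = n)" by auto
  show ?thesis unfolding c1 act_add[OF Fpq] c2 c3 e by (simp add: ac_simps)
qed

lemma sum_nform_sogen_act:
  assumes Y: "Y \<in> so8"
  shows "(\<Sum>p<8. \<Sum>q<8. sc (c * nform (sogen q p) Y) (act (sogen p q) n x)) = sc (2 * c) (act Y n x)"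
proof -
  have "(\<Sum>p<8. \<Sum>q<8. sc (c * nform (sogen q p) Y) (act (sogen p q) n x))
      = (\<Sum>p<8. \<Sum>q<8. sc c (sc (Y p q) (act (sogen p q) n x)))"
    by (intro sum.cong refl) (simp add: nform_sogen[OF Y])
  also have "\<dots> = sc c (sc 2 (act Y n x))"
    by (simp only: sc_sum_r[symmetric] sum_act_sogen[OF Y])
  finally show ?thesis by (simp add: mult.commute)
qed

lemma sug_mode_comm: assumes Y: "Y \<in> so8"
  shows "sug_mode n (act Y m x) = act Y m (sug_mode n x) + sug_cross Y m n x - sug_cross Y m (n + m) x
     + (if n + m = 0 then sc (2 * of_int n * k) (act Y m x) else 0)
     + (if m = n then sc (- 2 * of_int n * k) (act Y m x) else 0)"
proof -
  have "sug_mode n (act Y m x) = (\<Sum>p<8. \<Sum>q<8.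
      act Y m (act (sogen p q) (- n) (act (sogen q p) n x)) + act (bracket (sogen p q) Y) (m - n) (act (sogen q p) n x)
     + act (sogen p q) (- n) (act (bracket (sogen q p) Y) (n + m) x)
     + (if n + m = 0 then sc (of_int n * nform (sogen q p) Y * k) (act (sogen p q) (- n) x) else 0)
     + (if m = n then sc (of_int (- n) * nform (sogen p q) Y * k) (act (sogen q p) n x) else 0))"
    unfolding sug_mode_def by (intro sum.cong refl) (simp add: sogen_pair_comm[OF Y])
  also have "\<dots> = act Y m (sug_mode n x) + sug_cross Y m n x + (- sug_cross Y m (n + m) x)
     + (if n + m = 0 then sc (2 * of_int n * k) (act Y m x) else 0)
     + (if m = n then sc (- 2 * of_int n * k) (act Y m x) else 0)"
  proof -
    have s1: "(\<Sum>p<8. \<Sum>q<8. act Y m (act (sogen p q) (- n) (act (sogen q p) n x))) = act Y m (sug_mode n x)"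
      unfolding sug_mode_def by (simp add: act_sum[OF Y])
    have s2: "(\<Sum>p<8. \<Sum>q<8. act (bracket (sogen p q) Y) (m - n) (act (sogen q p) n x)) = sug_cross Y m n x"
      unfolding sug_cross_def ..
    have s3: "(\<Sum>p<8. \<Sum>q<8. act (sogen p q) (- n) (act (bracket (sogen q p) Y) (n + m) x)) = - sug_cross Y m (n + m) x"
      unfolding sug_cross_def using sum_bracket_sogen_transfer[OF Y, of "- n" "n + m" x] by simp
    have s4: "(\<Sum>p<8. \<Sum>q<8. (if n + m = 0 then sc (of_int n * nform (sogen q p) Y * k) (act (sogen p q) (- n) x) else 0))
        = (if n + m = 0 then sc (2 * of_int n * k) (act Y m x) else 0)"
    proof (cases "n + m = 0")
      case True
      thus ?thesis using sum_nform_sogen_act[OF Y, of "of_int n * k" "- n" x]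
        by (simp add: ac_simps eq_neg_iff_add_eq_0[symmetric])
    qed simp
    have s5: "(\<Sum>p<8. \<Sum>q<8. (if m = n then sc (of_int (- n) * nform (sogen p q) Y * k) (act (sogen q p) n x) else 0))
        = (if m = n then sc (- 2 * of_int n * k) (act Y m x) else 0)"
    proof (cases "m = n")
      case True
      have "(\<Sum>p<8. \<Sum>q<8. sc (of_int (- n) * nform (sogen p q) Y * k) (act (sogen q p) n x))
          = (\<Sum>p<8. \<Sum>q<8. sc (of_int (- n) * k * nform (sogen q p) Y) (act (sogen p q) n x))"
        by (subst sum.swap) (simp add: ac_simps)
      thus ?thesis using True sum_nform_sogen_act[OF Y, of "of_int (- n) * k" n x] by (simp add: mult.assoc)
    qed simp
    show ?thesis using s1 s2 s3 s4 s5 by (simp add: sum.distrib)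
  qed
  finally show ?thesis by simp
qed

lemma killed_from_act: assumes x: "killed_from N x" and N: "N \<ge> 1" and Y: "Y \<in> so8" shows "killed_from (N + \<bar>m\<bar>) (act Y m x)"
  unfolding killed_from_def
proof (intro allI impI ballI)
  fix n X assume n: "n \<ge> N + \<bar>m\<bar>" and X: "X \<in> so8"
  have 1: "act X n x = 0" using x n X unfolding killed_from_def by auto
  have 2: "act (bracket X Y) (n + m) x = 0" using x n so8_bracket[OF X Y] unfolding killed_from_def by auto
  have 3: "n + m \<noteq> 0" using n N by auto
  show "act X n (act Y m x) = 0" using act_comm[OF X Y, of n m x] 1 2 3 act_zero[OF Y] by simp
qed

lemma sug_cross_high: assumes "killed_from N0 x" "j \<ge> N0" "Y \<in> so8" shows "sug_cross Y m j x = 0"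
proof -
  have "act (sogen q p) j x = 0" if "p < 8" "q < 8" for p q
    using assms sogen_so8[OF that(2,1)] unfolding killed_from_def by auto
  thus ?thesis unfolding sug_cross_def using act_zero so8_bracket[OF sogen_so8 assms(3)] by simp
qed

lemma sug_cross_low: assumes x: "killed_from N0 x" and j: "m - j \<ge> N0" and Y: "Y \<in> so8"
  shows "sug_cross Y m j x = sc (-24) (act Y m x)"
proof -
  have pt: "act (bracket (sogen p q) Y) (m - j) (act (sogen q p) j x)
     = act (bracket (bracket (sogen p q) Y) (sogen q p)) m x
       + (if m = 0 then sc (of_int (m - j) * k * nform (bracket (sogen p q) Y) (sogen q p)) x else 0)"
    if pq: "p < 8" "q < 8" for p q
  proof -
    have B: "bracket (sogen p q) Y \<in> so8" using so8_bracket[OF sogen_so8[OF pq] Y] .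
    have "act (bracket (sogen p q) Y) (m - j) x = 0" using x j B unfolding killed_from_def by auto
    thus ?thesis using act_comm[OF B sogen_so8[OF pq(2,1)], of "m - j" j x] act_zero[OF sogen_so8[OF pq(2,1)]]
      by (simp add: ac_simps)
  qed
  have "sug_cross Y m j x = (\<Sum>p<8. \<Sum>q<8. act (bracket (bracket (sogen p q) Y) (sogen q p)) m x
       + (if m = 0 then sc (of_int (m - j) * k * nform (bracket (sogen p q) Y) (sogen q p)) x else 0))"
    unfolding sug_cross_def by (intro sum.cong refl) (simp add: pt)
  also have "\<dots> = (\<Sum>p<8. \<Sum>q<8. act (bracket (bracket (sogen p q) Y) (sogen q p)) m x)
      + (if m = 0 then sc (of_int (m - j) * k * (\<Sum>p<8. \<Sum>q<8. nform (bracket (sogen p q) Y) (sogen q p))) x else 0)"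
    by (simp add: sum.distrib sc_sum_l sum_distrib_left)
  also have "(\<Sum>p<8. \<Sum>q<8. act (bracket (bracket (sogen p q) Y) (sogen q p)) m x)
      = act (\<lambda>a b. \<Sum>p<8. \<Sum>q<8. bracket (bracket (sogen p q) Y) (sogen q p) a b) m x"
    by (rule act_double_sum[symmetric]) (simp add: so8_bracket sogen_so8 Y)
  also have "(\<lambda>a b. \<Sum>p<8. \<Sum>q<8. bracket (bracket (sogen p q) Y) (sogen q p) a b) = (\<lambda>a b. (-24) * Y a b)"
    using casimir_adjoint[OF Y] by (intro ext) simp
  also have "act (\<lambda>a b. (-24) * Y a b) m x = sc (-24) (act Y m x)" by (rule act_mscale[OF Y])
  finally show ?thesis using casimir_nform[OF Y] by simp
qed

lemma sum_shift_diff: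
  fixes g :: "int \<Rightarrow> 'm" and m B :: int and N :: nat
  assumes low: "\<And>n. n \<le> m - B \<Longrightarrow> g n = sc a y" and high: "\<And>n. B \<le> n \<Longrightarrow> g n = 0"
    and N: "B + \<bar>m\<bar> \<le> int N"
  shows "(\<Sum>i<2 * N + 1. g (int i - int N) - g (int i - int N + m)) = sc (of_int m * a) y"
proof (cases "m \<ge> 0")
  case True
  define d where "d = nat m"
  define h where "h i = g (int i - int N)" for i
  have "(\<Sum>i<2 * N + 1. g (int i - int N) - g (int i - int N + m)) = (\<Sum>i<2 * N + 1. h i - h (i + d))"
    unfolding h_def d_def using True by (intro sum.cong refl) (simp add: algebra_simps)
  also have "\<dots> = (\<Sum>i<d. h i) - (\<Sum>i<d. h (2 * N + 1 + i))" by (rule sum_telescope_shift)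
  also have "(\<Sum>i<d. h i) = (\<Sum>i<d. sc a y)"
  proof (intro sum.cong refl)
    fix i assume "i \<in> {..<d}"
    thus "h i = sc a y" unfolding h_def using N True by (intro low) (auto simp: d_def)
  qed
  also have "(\<Sum>i<d. h (2 * N + 1 + i)) = 0"
    by (intro sum.neutral ballI) (use N in \<open>auto simp: h_def intro: high\<close>)
  finally show ?thesis using True by (simp add: sc_sum_l[symmetric] d_def mult.commute)
next
  case False
  define d where "d = nat (- m)"
  define h where "h i = g (int i - int N - int d)" for i
  have "(\<Sum>i<2 * N + 1. g (int i - int N) - g (int i - int N + m)) = - (\<Sum>i<2 * N + 1. h i - h (i + d))"
    unfolding h_def d_def using False by (simp add: sum_negf[symmetric])
  also have "(\<Sum>i<2 * N + 1. h i - h (i + d)) = (\<Sum>i<d. h i) - (\<Sum>i<d. h (2 * N + 1 + i))"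
    by (rule sum_telescope_shift)
  also have "(\<Sum>i<d. h i) = (\<Sum>i<d. sc a y)"
  proof (intro sum.cong refl)
    fix i assume "i \<in> {..<d}"
    thus "h i = sc a y" unfolding h_def using N False by (intro low) (auto simp: d_def)
  qed
  also have "(\<Sum>i<d. h (2 * N + 1 + i)) = 0"
    by (intro sum.neutral ballI) (use N False in \<open>auto simp: h_def d_def intro: high\<close>)
  finally show ?thesis using False by (simp add: sc_sum_l[symmetric] sc_neg_l[symmetric] d_def mult.commute)
qed

lemma sugawara_comm:
  assumes Y: "Y \<in> so8" and x: "killed_from N0 x" and N0_nonneg: "0 \<le> N0" and N: "N0 + \<bar>m\<bar> \<le> int N"
  shows "sugawara N (act Y m x) = act Y m (sugawara N x) + sc (- (24 + 4 * k) * of_int m) (act Y m x)"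
proof -
  define L where "L = 2 * N + 1"
  define j where "j i = int i - int N" for i
  have "sugawara N (act Y m x) = (\<Sum>i<L. act Y m (sug_mode (j i) x)
      + sug_cross Y m (j i) x - sug_cross Y m (j i + m) x
      + (if i = nat (int N - m) then sc (2 * of_int (j i) * k) (act Y m x) else 0)
      + (if i = nat (int N + m) then sc (- 2 * of_int (j i) * k) (act Y m x) else 0))"
    unfolding sugawara_def L_def j_def[symmetric]
  proof (intro sum.cong refl)
    fix i
    have "(j i + m = 0) = (i = nat (int N - m))" "(m = j i) = (i = nat (int N + m))"
      using N N0_nonneg by (auto simp: j_def)
    thus "sug_mode (j i) (act Y m x) = act Y m (sug_mode (j i) x)
      + sug_cross Y m (j i) x - sug_cross Y m (j i + m) x
      + (if i = nat (int N - m) then sc (2 * of_int (j i) * k) (act Y m x) else 0)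
      + (if i = nat (int N + m) then sc (- 2 * of_int (j i) * k) (act Y m x) else 0)"
      using sug_mode_comm[OF Y, of "j i" m x] by simp
  qed
  also have "\<dots> = act Y m (sugawara N x) + sc (of_int m * (- 24)) (act Y m x)
      + sc (2 * of_int (- m) * k) (act Y m x) + sc (- 2 * of_int m * k) (act Y m x)"
  proof -
    have "(\<Sum>i<L. act Y m (sug_mode (j i) x)) = act Y m (sugawara N x)"
      unfolding sugawara_def L_def j_def by (rule act_sum[OF Y, symmetric])
    moreover have "(\<Sum>i<L. sug_cross Y m (j i) x - sug_cross Y m (j i + m) x) = sc (of_int m * (- 24)) (act Y m x)"
      unfolding L_def j_def using N
      by (intro sum_shift_diff[where B=N0]) (auto intro: sug_cross_low[OF x _ Y] sug_cross_high[OF x _ Y])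
    moreover have "nat (int N - m) < L" "nat (int N + m) < L" "j (nat (int N - m)) = - m" "j (nat (int N + m)) = m"
      using N N0_nonneg by (auto simp: L_def j_def)
    ultimately show ?thesis by (simp add: sum.distrib sum_subtractf)
  qed
  finally show ?thesis by (simp add: sc_addl[symmetric] algebra_simps)
qed

end
section \<open>Separating weights by a grading operator\<close>

definition word_abs_mode :: "letter list \<Rightarrow> int" where
  "word_abs_mode w = sum_list (map (\<lambda>l. \<bar>fst (snd l)\<bar>) w)"

lemma word_abs_mode_simps[simp]: "word_abs_mode [] = 0" "word_abs_mode (l # w) = \<bar>fst (snd l)\<bar> + word_abs_mode w"
  by (auto simp: word_abs_mode_def)

lemma word_abs_mode_nonneg: "word_abs_mode w \<ge> 0"
  by (induction w) auto

lemma lowering_word_neg: "lowering_word w \<Longrightarrow> w \<noteq> [] \<Longrightarrow> word_mode w < 0 \<or> (word_mode w = 0 \<and> word_height w < 0)"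
proof (induction w)
  case Nil thus ?case by simp
next
  case (Cons l w)
  have ms: "word_mode w \<le> 0" using Cons.prems(1) by (induction w) auto
  show ?case
  proof (cases "w = []")
    case True thus ?thesis using Cons.prems by auto
  next
    case False thus ?thesis using Cons.IH Cons.prems ms by auto
  qed
qed

context affine_module begin

lemma sum_multiples: "finite A \<Longrightarrow> (\<And>i. i \<in> A \<Longrightarrow> \<exists>c. f i = sc c v) \<Longrightarrow> \<exists>c. sum f A = sc c v"
proof (induction A rule: finite_induct)
  case empty show ?case by (intro exI[of _ 0]) simp
next
  case (insert i A)
  then obtain c c' where "f i = sc c v" "sum f A = sc c' v" by blast
  thus ?case using insert(1,2) by (intro exI[of _ "c + c'"]) (simp add: sc_addl)
qed

definition rho_op :: "'m \<Rightarrow> 'm" where "rho_op x = act rho_cartan 0 x"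

lemma sum_list_eigen_shift: assumes Aadd: "\<And>x y. A (x + y) = A x + A y" and Asc: "\<And>c x. A (sc c x) = sc c (A x)"
  shows "(\<forall>cx\<in>set l. A (fst (snd cx)) = sc (snd (snd cx)) (fst (snd cx))) \<Longrightarrow>
    A (sum_list (map (\<lambda>cx. sc (fst cx) (fst (snd cx))) l)) - sc b (sum_list (map (\<lambda>cx. sc (fst cx) (fst (snd cx))) l))
    = sum_list (map (\<lambda>cx. sc (fst cx) (fst (snd cx))) (map (\<lambda>cx. (fst cx * (snd (snd cx) - b), snd cx)) l))"
proof (induction l)
  case Nil
  have "A 0 = 0" using Asc[of 0 0] by simp
  thus ?case by simp
next
  case (Cons cx l)
  obtain c y mu where cx: "cx = (c, y, mu)" by (cases cx) auto
  have Ay: "A y = sc mu y" using Cons.prems cx by auto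
  have "A (sc c y) - sc b (sc c y) = sc (c * (mu - b)) y"
    using Ay by (simp add: Asc sc_diff_l[symmetric] algebra_simps)
  thus ?case using Cons cx by (simp add: Aadd sc_addr algebra_simps)
qed

lemma eigen_sum_list_zero: assumes Aadd: "\<And>x y. A (x + y) = A x + A y" and Asc: "\<And>c x. A (sc c x) = sc c (A x)"
  shows "(\<forall>cx\<in>set l. A (fst (snd cx)) = sc (snd (snd cx)) (fst (snd cx)) \<and> snd (snd cx) \<noteq> a) \<Longrightarrow>
    u = sum_list (map (\<lambda>cx. sc (fst cx) (fst (snd cx))) l) \<Longrightarrow> A u = sc a u \<Longrightarrow> u = 0"
proof (induction "length l" arbitrary: l u)
  case 0 thus ?case by simp
next
  case (Suc n)
  obtain cx l0 where lc: "l = cx # l0" using Suc.hyps(2) by (cases l) auto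
  obtain c y mu where cx: "cx = (c, y, mu)" by (cases cx) auto
  have len: "n = length l0" using Suc.hyps(2) lc by simp
  define u' where "u' = sum_list (map (\<lambda>cx. sc (fst cx) (fst (snd cx))) l0)"
  have u: "u = sc c y + u'" using Suc.prems(2) lc cx u'_def by simp
  have Ay: "A y = sc mu y" and ne: "mu \<noteq> a" using Suc.prems(1) lc cx by auto
  have P0: "\<forall>cx\<in>set l0. A (fst (snd cx)) = sc (snd (snd cx)) (fst (snd cx)) \<and> snd (snd cx) \<noteq> a"
    using Suc.prems(1) lc by simp
  define l' where "l' = map (\<lambda>cx. (fst cx * (snd (snd cx) - mu), snd cx)) l0"
  have h1: "A u' - sc mu u' = sum_list (map (\<lambda>cx. sc (fst cx) (fst (snd cx))) l')"
    unfolding u'_def l'_def by (rule sum_list_eigen_shift[OF Aadd Asc]) (use P0 in blast)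
  have h2: "A (sc c y) - sc mu (sc c y) = 0" using Ay by (simp add: Asc mult.commute)
  have Au: "A u = sc a u" by (rule Suc.prems(3))
  have "sc (a - mu) u = A u - sc mu u" unfolding Au by (simp add: sc_diff_l)
  also have "\<dots> = (A (sc c y) - sc mu (sc c y)) + (A u' - sc mu u')"
    unfolding u Aadd sc_addr by (simp add: algebra_simps)
  also have "\<dots> = sum_list (map (\<lambda>cx. sc (fst cx) (fst (snd cx))) l')" using h1 h2 by simp
  finally have u2: "sc (a - mu) u = sum_list (map (\<lambda>cx. sc (fst cx) (fst (snd cx))) l')" .
  have Au2: "A (sc (a - mu) u) = sc a (sc (a - mu) u)" unfolding Asc Au by (simp add: mult.commute)
  have P': "\<forall>cx\<in>set l'. A (fst (snd cx)) = sc (snd (snd cx)) (fst (snd cx)) \<and> snd (snd cx) \<noteq> a"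
    using P0 unfolding l'_def by simp
  have len': "n = length l'" using len l'_def by simp
  have "sc (a - mu) u = 0" by (rule Suc.hyps(1)[OF len' P' u2 Au2])
  thus "u = 0" using ne sc_cancel by auto
qed

lemma sug_mode_add: "sug_mode n (x + y) = sug_mode n x + sug_mode n y"
  unfolding sug_mode_def by (simp add: act_add sogen_so8 sum.distrib)
lemma sug_mode_sc: "sug_mode n (sc c x) = sc c (sug_mode n x)"
  unfolding sug_mode_def by (simp add: act_sc sogen_so8 sc_sum_r)
lemma sugawara_add: "sugawara N (x + y) = sugawara N x + sugawara N y"
  unfolding sugawara_def by (simp add: sug_mode_add sum.distrib)
lemma sugawara_sc: "sugawara N (sc c x) = sc c (sugawara N x)"
  unfolding sugawara_def by (simp only: sug_mode_sc sc_sum_r)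
lemma rho_op_add: "rho_op (x + y) = rho_op x + rho_op y"
  unfolding rho_op_def rho_cartan_def by (simp add: act_add cartan_so8)
lemma rho_op_sc: "rho_op (sc c x) = sc c (rho_op x)"
  unfolding rho_op_def rho_cartan_def by (simp add: act_sc cartan_so8)

lemma killed_from_word_act: "killed_from 1 v \<Longrightarrow> graded_word w \<Longrightarrow> killed_from (1 + word_abs_mode w) (word_act act w v)"
proof (induction w)
  case Nil thus ?case by simp
next
  case (Cons l w)
  obtain Y m g where l: "l = (Y, m, g)" by (cases l) auto
  have Y: "Y \<in> so8" using Cons.prems l by (simp add: has_height_iff)
  have "killed_from (1 + word_abs_mode w + \<bar>m\<bar>) (act Y m (word_act act w v))"
    by (rule killed_from_act[OF Cons.IH[OF Cons.prems(1)] _ Y]) (use Cons.prems word_abs_mode_nonneg[of w] in auto)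
  thus ?case using l by (simp add: ac_simps)
qed

lemma rho_op_comm: assumes Y: "has_height g Y" shows "rho_op (act Y m y) = act Y m (rho_op y) + sc (of_int g) (act Y m y)"
proof -
  have so: "Y \<in> so8" using Y by (simp add: has_height_iff)
  have rs: "rho_cartan \<in> so8" unfolding rho_cartan_def by (rule cartan_so8)
  have "act rho_cartan 0 (act Y m y) = act Y m (act rho_cartan 0 y) + act (bracket rho_cartan Y) m y"
    using act_comm[OF rs so, of 0 m y] by simp
  also have "act (bracket rho_cartan Y) m y = sc (of_int g) (act Y m y)"
    unfolding bracket_rho_cartan[OF Y] by (rule act_mscale[OF so])
  finally show ?thesis unfolding rho_op_def .
qed

lemma sogen_pair_zero_hw:
  assumes hw: "hw_vector sc act lam v" and pq: "p < 8" "q < 8"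
  shows "\<exists>\<beta>. act (sogen p q) 0 (act (sogen q p) 0 v) = sc \<beta> v"
proof -
  have np: "act X 0 v = 0" if "X \<in> nplus" for X using hw that by (auto simp: hw_vector_def)
  have ca: "act H 0 v = sc (nform lam H) v" if "H \<in> cartan_sub" for H using hw that by (auto simp: hw_vector_def)
  have hqp: "has_height (rho q - rho p) (sogen q p)" and hpq: "has_height (rho p - rho q) (sogen p q)"
    using has_height_sogen pq by auto
  consider "rho q - rho p > 0" | "rho q - rho p = 0" | "rho q - rho p < 0" by linarith
  thus ?thesis
  proof cases
    case 1
    hence "act (sogen q p) 0 v = 0" using np has_height_pos_nplus[OF hqp] by auto
    thus ?thesis using act_zero[OF sogen_so8[OF pq]] by (intro exI[of _ 0]) simp
  next
    case 2
    have "act (sogen q p) 0 v = sc (nform lam (sogen q p)) v" "act (sogen p q) 0 v = sc (nform lam (sogen p q)) v"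
      using ca has_height_zero_cartan_sub hqp hpq 2 by auto
    thus ?thesis using act_sc[OF sogen_so8[OF pq]] by auto
  next
    case 3
    have z: "act (sogen p q) 0 v = 0" using np has_height_pos_nplus[OF hpq] 3 by auto
    have "has_height ((rho p - rho q) + (rho q - rho p)) (bracket (sogen p q) (sogen q p))"
      by (rule has_height_bracket[OF hpq hqp])
    hence c: "act (bracket (sogen p q) (sogen q p)) 0 v = sc (nform lam (bracket (sogen p q) (sogen q p))) v"
      using ca has_height_zero_cartan_sub by simp
    have "act (sogen p q) 0 (act (sogen q p) 0 v) = act (sogen q p) 0 (act (sogen p q) 0 v)
        + act (bracket (sogen p q) (sogen q p)) 0 v"
      using act_comm[OF sogen_so8[OF pq] sogen_so8[OF pq(2,1)], of 0 0 v] by simp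
    thus ?thesis using z c act_zero[OF sogen_so8[OF pq(2,1)]] by auto
  qed
qed

lemma sug_mode_hw: assumes hw: "hw_vector sc act lam v" shows "\<exists>\<beta>. sug_mode n v = sc \<beta> v"
proof -
  have act_pos: "act X n v = 0" if "X \<in> so8" "n > 0" for X n using hw that by (auto simp: hw_vector_def)
  have pos: "sug_mode n v = 0" if "n > 0" for n
    unfolding sug_mode_def using act_pos[OF sogen_so8 that] act_zero[OF sogen_so8] by simp
  consider "n > 0" | "n < 0" | "n = 0" by linarith
  thus ?thesis
  proof cases
    case 1 thus ?thesis using pos by (intro exI[of _ 0]) simp
  next
    case 2
    thus ?thesis using sug_mode_neg[of "- n" v] pos[of "- n"] by auto
  next
    case 3
    thus ?thesis unfolding sug_mode_def
      by (intro sum_multiples) (auto intro: sogen_pair_zero_hw[OF hw])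
  qed
qed

lemma sugawara_hw: "hw_vector sc act lam v \<Longrightarrow> \<exists>\<sigma>. sugawara N v = sc \<sigma> v"
  unfolding sugawara_def by (intro sum_multiples sug_mode_hw) auto

lemma word_act_eigen: assumes S: "sugawara N v = sc \<sigma> v" and R: "rho_op v = sc r v" and g: "killed_from 1 v"
  shows "graded_word w \<Longrightarrow> int N \<ge> 1 + word_abs_mode w \<Longrightarrow> sugawara N (word_act act w v) = sc (\<sigma> - (24 + 4 * k) * of_int (word_mode w)) (word_act act w v)
     \<and> rho_op (word_act act w v) = sc (r + of_int (word_height w)) (word_act act w v)"
proof (induction w)
  case Nil thus ?case using S R by simp
next
  case (Cons l w)
  obtain Y m h where l: "l = (Y, m, h)" by (cases l) auto
  have Yh: "has_height h Y" and hw: "graded_word w" using Cons.prems l by auto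
  have Y: "Y \<in> so8" using Yh by (simp add: has_height_iff)
  have Nw: "int N \<ge> 1 + word_abs_mode w" using Cons.prems l by simp
  have IH: "sugawara N (word_act act w v) = sc (\<sigma> - (24 + 4 * k) * of_int (word_mode w)) (word_act act w v)"
     "rho_op (word_act act w v) = sc (r + of_int (word_height w)) (word_act act w v)" using Cons.IH[OF hw Nw] by auto
  have gw: "killed_from (1 + word_abs_mode w) (word_act act w v)" by (rule killed_from_word_act[OF g hw])
  have "sugawara N (act Y m (word_act act w v)) = act Y m (sugawara N (word_act act w v)) + sc (- (24 + 4 * k) * of_int m) (act Y m (word_act act w v))"
    by (rule sugawara_comm[OF Y gw]) (use Cons.prems l word_abs_mode_nonneg[of w] in auto)
  also have "\<dots> = sc (\<sigma> - (24 + 4 * k) * of_int (word_mode w) - (24 + 4 * k) * of_int m) (act Y m (word_act act w v))"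
    unfolding IH by (simp add: act_sc[OF Y] sc_addl[symmetric] algebra_simps)
  finally have 1: "sugawara N (act Y m (word_act act w v)) = sc (\<sigma> - (24 + 4 * k) * of_int (word_mode w) - (24 + 4 * k) * of_int m) (act Y m (word_act act w v))" .
  have "rho_op (act Y m (word_act act w v)) = act Y m (rho_op (word_act act w v)) + sc (of_int h) (act Y m (word_act act w v))"
    by (rule rho_op_comm[OF Yh])
  also have "\<dots> = sc (r + of_int (word_height w) + of_int h) (act Y m (word_act act w v))"
    unfolding IH by (simp add: act_sc[OF Y] act_add[OF Y] sc_addl)
  finally have 2: "rho_op (act Y m (word_act act w v)) = sc (r + of_int (word_height w) + of_int h) (act Y m (word_act act w v))" .
  show ?case using 1 2 l by (simp add: algebra_simps)
qed

definition grading :: "nat \<Rightarrow> 'm \<Rightarrow> 'm" where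
  "grading N x = sugawara N x + sc ((24 + 4 * k) * \<i>) (rho_op x)"

lemma grading_add: "grading N (x + y) = grading N x + grading N y"
  unfolding grading_def by (simp add: sugawara_add rho_op_add sc_addr ac_simps)

lemma grading_sc: "grading N (sc c x) = sc c (grading N x)"
  unfolding grading_def by (simp add: sugawara_sc rho_op_sc sc_addr mult.commute)

lemma grading_word_act:
  assumes hw: "hw_vector sc act lam v"
  obtains a where "\<And>w. graded_word w \<Longrightarrow> 1 + word_abs_mode w \<le> int N \<Longrightarrow>
    grading N (word_act act w v)
      = sc (a - (24 + 4 * k) * (of_int (word_mode w) - \<i> * of_int (word_height w))) (word_act act w v)"
proof -
  obtain \<sigma> where S: "sugawara N v = sc \<sigma> v" using sugawara_hw[OF hw] by blast
  define r where "r = nform lam rho_cartan"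
  have R: "rho_op v = sc r v" unfolding rho_op_def r_def using hw rho_cartan_sub by (simp add: hw_vector_def)
  have g: "killed_from 1 v" using hw unfolding killed_from_def hw_vector_def by auto
  have "grading N (word_act act w v)
      = sc ((\<sigma> + (24 + 4 * k) * \<i> * r) - (24 + 4 * k) * (of_int (word_mode w) - \<i> * of_int (word_height w)))
          (word_act act w v)"
    if "graded_word w" "1 + word_abs_mode w \<le> int N" for w
  proof -
    from word_act_eigen[OF S R g that]
    have e1: "sugawara N (word_act act w v) = sc (\<sigma> - (24 + 4 * k) * of_int (word_mode w)) (word_act act w v)"
      and e2: "rho_op (word_act act w v) = sc (r + of_int (word_height w)) (word_act act w v)" by auto
    show ?thesis unfolding grading_def e1 e2 sc_mult sc_addl[symmetric]
      by (rule arg_cong[where f="\<lambda>z. sc z (word_act act w v)"]) (simp add: algebra_simps)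
  qed
  thus thesis by (rule that)
qed

end

locale noncritical_module = affine_module sc act k for sc :: "complex \<Rightarrow> 'm::ab_group_add \<Rightarrow> 'm" and act k +
  assumes noncritical: "k \<noteq> -6"
begin

text \<open>On a word of total mode \<open>m\<close> and total height \<open>h\<close> applied to \<open>v\<close>, the eigenvalue of \<open>grading N\<close>
  differs from that of \<open>v\<close> by \<open>(24 + 4k)(\<i> h - m)\<close>, and \<open>(m, h) \<noteq> (0, 0)\<close> for nonempty lowering words.
  This is where non-criticality of the level is used.\<close>

lemma hw_coefficient:
  assumes hw: "hw_vector sc act lam v"
    and l: "\<forall>cw\<in>set l. graded_word (snd cw) \<and> lowering_word (snd cw)"
    and eq: "sum_list (map (\<lambda>cw. sc (fst cw) (word_act act (snd cw) v)) l) = sc d v"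
  shows "d = sum_list (map fst (filter (\<lambda>cw. snd cw = []) l))"
proof -
  define N where "N = Suc (sum_list (map (\<lambda>cw. nat (word_abs_mode (snd cw))) l))"
  have Nge: "1 + word_abs_mode (snd cw) \<le> int N" if "cw \<in> set l" for cw
  proof -
    have "nat (word_abs_mode (snd cw)) \<le> sum_list (map (\<lambda>cw. nat (word_abs_mode (snd cw))) l)"
      using that by (intro member_le_sum_list) auto
    thus ?thesis unfolding N_def using word_abs_mode_nonneg[of "snd cw"] by linarith
  qed
  obtain a where A: "\<And>w. graded_word w \<Longrightarrow> 1 + word_abs_mode w \<le> int N \<Longrightarrow>
      grading N (word_act act w v)
        = sc (a - (24 + 4 * k) * (of_int (word_mode w) - \<i> * of_int (word_height w))) (word_act act w v)"
    using grading_word_act[OF hw, where N=N] by blast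
  define mu where "mu w = a - (24 + 4 * k) * (of_int (word_mode w) - \<i> * of_int (word_height w))" for w
  have mu_ne: "mu w \<noteq> a" if "lowering_word w" "w \<noteq> []" for w
  proof
    assume "mu w = a"
    moreover have "24 + 4 * k \<noteq> 0" using noncritical by (auto simp: add_eq_0_iff)
    ultimately have "of_int (word_mode w) - \<i> * of_int (word_height w) = (0::complex)"
      unfolding mu_def by simp
    hence "word_mode w = 0" "word_height w = 0"
      using arg_cong[where f=Re] arg_cong[where f=Im] by fastforce+
    thus False using lowering_word_neg[OF that] by simp
  qed
  define l0 where "l0 = filter (\<lambda>cw. snd cw = []) l"
  define l1 where "l1 = filter (\<lambda>cw. snd cw \<noteq> []) l"
  have "sum_list (map (\<lambda>cw. sc (fst cw) (word_act act (snd cw) v)) l0) = sc (sum_list (map fst l0)) v"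
    unfolding l0_def by (induction l) (auto simp: sc_addl)
  moreover have "sum_list (map (\<lambda>cw. sc (fst cw) (word_act act (snd cw) v)) l)
     = sum_list (map (\<lambda>cw. sc (fst cw) (word_act act (snd cw) v)) l0)
       + sum_list (map (\<lambda>cw. sc (fst cw) (word_act act (snd cw) v)) l1)"
    unfolding l0_def l1_def by (induction l) (auto simp: ac_simps)
  ultimately have u: "sc (d - sum_list (map fst l0)) v
      = sum_list (map (\<lambda>cx. sc (fst cx) (fst (snd cx))) (map (\<lambda>cw. (fst cw, word_act act (snd cw) v, mu (snd cw))) l1))"
    using eq by (simp add: sc_diff_l comp_def algebra_simps)
  have "sc (d - sum_list (map fst l0)) v = 0"
  proof (rule eigen_sum_list_zero[OF grading_add grading_sc _ u])
    show "\<forall>cx\<in>set (map (\<lambda>cw. (fst cw, word_act act (snd cw) v, mu (snd cw))) l1).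
        grading N (fst (snd cx)) = sc (snd (snd cx)) (fst (snd cx)) \<and> snd (snd cx) \<noteq> a"
      using A[folded mu_def] mu_ne l Nge unfolding l1_def by auto
    show "grading N (sc (d - sum_list (map fst l0)) v) = sc a (sc (d - sum_list (map fst l0)) v)"
      using A[of "[]"] by (simp add: grading_sc mult.commute N_def)
  qed
  thus ?thesis using hw sc_cancel unfolding l0_def hw_vector_def by fastforce
qed

lemma hw_not_in_lowering_span:
  assumes hw: "hw_vector sc act lam v"
  shows "v \<notin> cspan sc {word_act act w v | w. graded_word w \<and> lowering_word w \<and> w \<noteq> []}"
proof
  assume "v \<in> cspan sc {word_act act w v | w. graded_word w \<and> lowering_word w \<and> w \<noteq> []}"
  then obtain l where l: "\<forall>cz\<in>set l. graded_word (snd cz) \<and> lowering_word (snd cz) \<and> snd cz \<noteq> []"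
    "v = sum_list (map (\<lambda>cz. sc (fst cz) (word_act act (snd cz) v)) l)"
    using cspan_sum_list[where f="\<lambda>w. word_act act w v" and P="\<lambda>w. graded_word w \<and> lowering_word w \<and> w \<noteq> []", OF _ sc_cvs]
    by blast
  have "1 = sum_list (map fst (filter (\<lambda>cw. snd cw = []) l))"
    by (rule hw_coefficient[OF hw]) (use l in auto)
  also have "filter (\<lambda>cw. snd cw = []) l = []" using l(1) by (simp add: filter_empty_conv)
  finally show False by simp
qed

end
section \<open>Invariance of the vacuum\<close>

context affine_module begin

lemma hw_set_zero_modes:
  assumes hw: "hw_vector sc act (\<lambda>a b. 0) v"
    and higher: "\<And>g Z. h < g \<Longrightarrow> g < 0 \<Longrightarrow> has_height g Z \<Longrightarrow> act Z 0 v = 0"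
  shows "hw_set {act X 0 v | X. has_height h X}"
  unfolding hw_set_def
proof (intro conjI ballI allI impI)
  have pos: "act Z n v = 0" if "Z \<in> so8" "n > 0" for Z n using hw that by (auto simp: hw_vector_def)
  have np: "act Z 0 v = 0" if "Z \<in> nplus" for Z using hw that by (auto simp: hw_vector_def)
  have ca: "act H 0 v = 0" if "H \<in> cartan_sub" for H using hw that by (auto simp: hw_vector_def)
  fix u assume "u \<in> {act X 0 v | X. has_height h X}"
  then obtain X where X: "has_height h X" and u: "u = act X 0 v" by blast
  have soX: "X \<in> so8" using X by (rule has_height_so8)
  fix Z and n g :: int assume Z: "has_height g Z" and r: "0 < n \<or> (n = 0 \<and> 0 < g)"
  have soZ: "Z \<in> so8" using Z by (rule has_height_so8)
  have Zv: "act Z n v = 0" using r pos[OF soZ] np has_height_pos_nplus[OF Z] by auto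
  have B: "act (bracket Z X) n v = 0"
  proof (cases "n > 0")
    case True thus ?thesis using pos so8_bracket[OF soZ soX] by simp
  next
    case False
    hence n0: "n = 0" and g0: "g > 0" using r by auto
    have hb: "has_height (g + h) (bracket Z X)" by (rule has_height_bracket[OF Z X])
    consider "g + h > 0" | "g + h = 0" | "g + h < 0" by linarith
    thus ?thesis
    proof cases
      case 1 thus ?thesis using np has_height_pos_nplus[OF hb] n0 by auto
    next
      case 2 thus ?thesis using ca has_height_zero_cartan_sub hb n0 by auto
    next
      case 3 thus ?thesis using higher[OF _ 3 hb] g0 n0 by simp
    qed
  qed
  show "act Z n u = 0"
    using act_comm[OF soZ soX, of n 0 v] u Zv B act_zero[OF soX] by simp
next
  fix u assume "u \<in> {act X 0 v | X. has_height h X}"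
  then obtain X where X: "has_height h X" and u: "u = act X 0 v" by blast
  fix H assume H: "has_height 0 H"
  have "act H 0 v = 0" using hw has_height_zero_cartan_sub[OF H] by (simp add: hw_vector_def)
  hence "act H 0 u = act (bracket H X) 0 v"
    using act_comm[OF has_height_so8[OF H] has_height_so8[OF X], of 0 0 v] u act_zero[OF has_height_so8[OF X]]
    by simp
  moreover have "has_height h (bracket H X)" using has_height_bracket[OF H X] by simp
  ultimately show "act H 0 u \<in> cspan sc {act X 0 v | X. has_height h X}" by (blast intro: cspan_base)
qed

end

context noncritical_module begin

text \<open>Induction on the depth \<open>-h\<close>: the vectors \<open>X\<^sub>0 v\<close> with \<open>X\<close> of height \<open>h\<close> are then singular, so a nonzero
  one would generate the irreducible module, putting \<open>v\<close> into the span of nonempty lowering words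
  applied to \<open>v\<close>.\<close>

lemma vacuum_neg_height:
  assumes hw: "hw_vector sc act (\<lambda>a b. 0) v" and irr: "irreducible_mod sc act"
  shows "h < 0 \<Longrightarrow> has_height h X \<Longrightarrow> act X 0 v = 0"
proof (induction "nat (- h)" arbitrary: h X rule: less_induct)
  case less
  define U where "U = {act X0 0 v | X0. has_height h X0}"
  have U: "hw_set U" unfolding U_def
    by (rule hw_set_zero_modes[OF hw]) (rule less.hyps, auto)
  show ?case
  proof (rule ccontr)
    assume ne: "act X 0 v \<noteq> 0"
    have "act X 0 v \<in> generated U" unfolding generated_def
      by (rule cspan_base) (use less.prems in \<open>force simp: U_def intro: exI[of _ "[]"]\<close>)
    hence "v \<in> cspan sc {word_act act w u | w u. u \<in> U \<and> graded_word w \<and> lowering_word w}"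
      using generated_UNIV[OF irr] ne generated_lowering[OF U] by blast
    also have "\<dots> \<subseteq> cspan sc {word_act act z v | z. graded_word z \<and> lowering_word z \<and> z \<noteq> []}"
    proof (rule cspan_mono, rule subsetI)
      fix y assume "y \<in> {word_act act w u | w u. u \<in> U \<and> graded_word w \<and> lowering_word w}"
      then obtain w X' where wX: "has_height h X'" "graded_word w" "lowering_word w" "y = word_act act w (act X' 0 v)"
        unfolding U_def by blast
      hence "y = word_act act (w @ [(X', 0, h)]) v \<and> graded_word (w @ [(X', 0, h)])
          \<and> lowering_word (w @ [(X', 0, h)]) \<and> w @ [(X', 0, h)] \<noteq> []"
        using less.prems by (simp add: word_act_append)
      thus "y \<in> {word_act act z v | z. graded_word z \<and> lowering_word z \<and> z \<noteq> []}" by blast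
    qed
    finally show False using hw_not_in_lowering_span[OF hw] by blast
  qed
qed

lemma vacuum_invariant: assumes hw: "hw_vector sc act (\<lambda>a b. 0) v" and irr: "irreducible_mod sc act"
  shows "X \<in> so8 \<Longrightarrow> act X 0 v = 0"
proof -
  assume X: "X \<in> so8"
  have np: "act Z 0 v = 0" if "Z \<in> nplus" for Z using hw that by (auto simp: hw_vector_def)
  have ca: "act H 0 v = 0" if "H \<in> cartan_sub" for H using hw that by (auto simp: hw_vector_def)
  have F: "act (sogen p q) 0 v = 0" if pq: "p < 8" "q < 8" for p q
  proof -
    have h: "has_height (rho p - rho q) (sogen p q)" by (rule has_height_sogen[OF pq])
    consider "rho p - rho q > 0" | "rho p - rho q = 0" | "rho p - rho q < 0" by linarith
    thus ?thesis
    proof cases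
      case 1 thus ?thesis using np has_height_pos_nplus[OF h] by auto
    next
      case 2 thus ?thesis using ca has_height_zero_cartan_sub h by auto
    next
      case 3 show ?thesis by (rule vacuum_neg_height[OF hw irr 3 h])
    qed
  qed
  have "act X 0 v = sc (1/2) (\<Sum>p<8. \<Sum>q<8. sc (X p q) (act (sogen p q) 0 v))" by (rule act_sogen_expansion[OF X])
  thus ?thesis using F by simp
qed

end

section \<open>Spectral flow\<close>

definition integral_cartan :: "(nat \<Rightarrow> complex) \<Rightarrow> bool" where
  "integral_cartan x \<longleftrightarrow> (\<forall>a<8. \<forall>b<8. \<exists>j::int. cdiag x a - cdiag x b = of_int j)"

lemma adcomp_cartan: "adcomp (cartan x) j X a b = (if cdiag x a - cdiag x b = of_int j then X a b else 0)"
  by (simp add: adcomp_def cartan_diag)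

lemma ad_eigs_cartan: "ad_eigs (cartan x) = {j. \<exists>a<8. \<exists>b<8. cdiag x a - cdiag x b = of_int j}"
  by (simp add: ad_eigs_def cartan_diag)

lemma ad_eigs_finite: "finite (ad_eigs (cartan x))"
proof -
  let ?f = "\<lambda>ab. (THE j::int. cdiag x (fst ab) - cdiag x (snd ab) = of_int j)"
  have "ad_eigs (cartan x) \<subseteq> ?f ` ({..<8} \<times> {..<8})"
  proof
    fix j assume "j \<in> ad_eigs (cartan x)"
    then obtain a b where ab: "a < 8" "b < 8" "cdiag x a - cdiag x b = of_int j" by (auto simp: ad_eigs_cartan)
    have "?f (a, b) = j" by (simp, rule the_equality) (use ab(3) in auto)
    thus "j \<in> ?f ` ({..<8} \<times> {..<8})" using ab by force
  qed
  thus ?thesis by (rule finite_subset) simp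
qed

lemma adcomp_so8: assumes X: "X \<in> so8" shows "adcomp (cartan x) j X \<in> so8"
proof (rule so8I)
  show "supp8 (adcomp (cartan x) j X)" using X by (auto simp: supp8_def adcomp_cartan so8_outside)
  fix a b :: nat assume ab: "a < 8" "b < 8"
  have e: "cdiag x (pidx b) - cdiag x (pidx a) = cdiag x a - cdiag x b" using cdiag_pidx ab by simp
  show "adcomp (cartan x) j X a b = - adcomp (cartan x) j X (pidx b) (pidx a)"
    unfolding adcomp_cartan e using so8_skew[OF X ab] by simp
qed

lemma adcomp_ad_eigen: "X \<in> so8 \<Longrightarrow> ad_eigen x j (adcomp (cartan x) j X)"
  unfolding ad_eigen_def using adcomp_so8 by (auto simp: adcomp_cartan split: if_splits)

lemma adcomp_zero: "(\<And>a b. X a b \<noteq> 0 \<Longrightarrow> cdiag x a - cdiag x b \<noteq> of_int j) \<Longrightarrow> adcomp (cartan x) j X = (\<lambda>a b. 0)"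
  by (intro ext) (auto simp: adcomp_cartan)

lemma adcomp_sum: assumes X: "X \<in> so8" and I: "integral_cartan x"
  shows "(\<Sum>j\<in>ad_eigs (cartan x). adcomp (cartan x) j X a b) = X a b"
proof (cases "a < 8 \<and> b < 8")
  case True
  then obtain j0 where j0: "cdiag x a - cdiag x b = of_int j0" using I unfolding integral_cartan_def by blast
  have j0E: "j0 \<in> ad_eigs (cartan x)" using True j0 by (auto simp: ad_eigs_cartan)
  have "(\<Sum>j\<in>ad_eigs (cartan x). adcomp (cartan x) j X a b) = (\<Sum>j\<in>ad_eigs (cartan x). if j = j0 then X a b else 0)"
    by (intro sum.cong refl) (auto simp: adcomp_cartan j0)
  also have "\<dots> = X a b" using j0E ad_eigs_finite by simp
  finally show ?thesis .
next
  case False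
  hence z: "X a b = 0" using so8_outside[OF X, of a b] by auto
  have "adcomp (cartan x) j X a b = 0" for j by (simp add: adcomp_cartan z)
  thus ?thesis using z by simp
qed

lemma ad_eigen_sogen: assumes I: "integral_cartan x" and pq: "p < 8" "q < 8" shows "\<exists>j. ad_eigen x j (sogen p q)"
proof -
  obtain j where j: "cdiag x p - cdiag x q = of_int j" using I pq unfolding integral_cartan_def by blast
  have "ad_eigen x j (sogen p q)" unfolding ad_eigen_def
  proof (intro conjI allI impI)
    show "sogen p q \<in> so8" using sogen_so8[OF pq] .
    fix a b assume "sogen p q a b \<noteq> 0"
    hence "(a = p \<and> b = q) \<or> (a = pidx q \<and> b = pidx p)" by (auto simp: sogen_def split: if_splits)
    thus "cdiag x a - cdiag x b = of_int j" using j cdiag_pidx pq by auto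
  qed
  thus ?thesis by blast
qed

lemma adcomp_add: "adcomp mu j (\<lambda>a b. X a b + Y a b) = (\<lambda>a b. adcomp mu j X a b + adcomp mu j Y a b)"
  by (intro ext) (simp add: adcomp_def)
lemma adcomp_sc: "adcomp mu j (\<lambda>a b. c * X a b) = (\<lambda>a b. c * adcomp mu j X a b)"
  by (intro ext) (simp add: adcomp_def)

context affine_module begin

lemma sflow_add: "X \<in> so8 \<Longrightarrow> sflow (cartan x) k sc act X n (v + w) = sflow (cartan x) k sc act X n v + sflow (cartan x) k sc act X n w"
  unfolding sflow_def by (simp add: act_add adcomp_so8 sum.distrib sc_addr algebra_simps)

lemma sflow_sc: "X \<in> so8 \<Longrightarrow> sflow (cartan x) k sc act X n (sc c v) = sc c (sflow (cartan x) k sc act X n v)"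
  unfolding sflow_def by (simp add: act_sc adcomp_so8 sc_sum_r sc_addr mult.commute)

lemma sflow_madd: "X \<in> so8 \<Longrightarrow> Y \<in> so8 \<Longrightarrow> sflow (cartan x) k sc act (\<lambda>a b. X a b + Y a b) n v
   = sflow (cartan x) k sc act X n v + sflow (cartan x) k sc act Y n v"
  unfolding sflow_def adcomp_add nform_addr
  by (simp add: act_madd adcomp_so8 sum.distrib sc_addl distrib_right algebra_simps)

lemma sflow_mscale: "X \<in> so8 \<Longrightarrow> sflow (cartan x) k sc act (\<lambda>a b. c * X a b) n v = sc c (sflow (cartan x) k sc act X n v)"
  unfolding sflow_def adcomp_sc nform_scr
  by (simp add: act_mscale adcomp_so8 sc_sum_r sc_addr algebra_simps)

lemma sflow_ad_eigen: assumes X: "ad_eigen x j X"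
  shows "sflow (cartan x) k sc act X n v = act X (n + j) v + (if n = 0 then sc (nform (cartan x) X * k) v else 0)"
proof -
  have so: "X \<in> so8" using X by (simp add: ad_eigen_def)
  have ad: "adcomp (cartan x) j' X = (if j' = j then X else (\<lambda>a b. 0))" for j'
  proof (intro ext)
    fix a b
    show "adcomp (cartan x) j' X a b = (if j' = j then X else (\<lambda>a b. 0)) a b"
    proof (cases "X a b = 0")
      case True thus ?thesis by (simp add: adcomp_cartan)
    next
      case False
      hence "cdiag x a - cdiag x b = of_int j" using X by (simp add: ad_eigen_def)
      thus ?thesis by (auto simp: adcomp_cartan)
    qed
  qed
  have "(\<Sum>j'\<in>ad_eigs (cartan x). act (adcomp (cartan x) j' X) (n + j') v)
      = (\<Sum>j'\<in>ad_eigs (cartan x). if j' = j then act X (n + j) v else 0)"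
    by (intro sum.cong refl) (simp add: ad act_mzero)
  also have "\<dots> = (if j \<in> ad_eigs (cartan x) then act X (n + j) v else 0)"
    using ad_eigs_finite by simp
  also have "\<dots> = act X (n + j) v"
  proof (cases "j \<in> ad_eigs (cartan x)")
    case False
    have "X a b = 0" for a b
    proof (rule ccontr)
      assume ne: "X a b \<noteq> 0"
      have "\<not> (8 \<le> a \<or> 8 \<le> b)" using so8_outside[OF so, of a b] ne by blast
      hence "a < 8" "b < 8" by auto
      moreover have "cdiag x a - cdiag x b = of_int j" using ne X by (simp add: ad_eigen_def)
      ultimately have "j \<in> ad_eigs (cartan x)" by (auto simp: ad_eigs_cartan)
      thus False using False by simp
    qed
    hence "X = (\<lambda>a b. 0)" by (intro ext) simp
    thus ?thesis using False act_mzero by simp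
  qed simp
  finally show ?thesis unfolding sflow_def by simp
qed

lemma sflow_comm_ad_eigen: assumes X: "ad_eigen x j X" and Y: "ad_eigen x l Y"
  shows "sflow (cartan x) k sc act X m (sflow (cartan x) k sc act Y n v)
    = sflow (cartan x) k sc act Y n (sflow (cartan x) k sc act X m v)
      + sflow (cartan x) k sc act (bracket X Y) (m + n) v
      + (if m + n = 0 then sc (of_int m * nform X Y * k) v else 0)"
proof -
  have soX: "X \<in> so8" and soY: "Y \<in> so8" using X Y by (auto simp: ad_eigen_def)
  define c where "c = nform (cartan x) X * k"
  define c' where "c' = nform (cartan x) Y * k"
  have AX: "sflow (cartan x) k sc act X m w = act X (m + j) w + (if m = 0 then sc c w else 0)" for w
    unfolding c_def by (rule sflow_ad_eigen[OF X])
  have AY: "sflow (cartan x) k sc act Y n w = act Y (n + l) w + (if n = 0 then sc c' w else 0)" for w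
    unfolding c'_def by (rule sflow_ad_eigen[OF Y])
  have AB: "sflow (cartan x) k sc act (bracket X Y) (m + n) w = act (bracket X Y) (m + n + (j + l)) w
       + (if m + n = 0 then sc (nform (cartan x) (bracket X Y) * k) w else 0)" for w
    by (rule sflow_ad_eigen[OF ad_eigen_bracket[OF X Y]])
  have cm: "act X (m + j) (act Y (n + l) v) = act Y (n + l) (act X (m + j) v) + act (bracket X Y) (m + j + (n + l)) v
     + (if m + j + (n + l) = 0 then sc (of_int (m + j) * nform X Y * k) v else 0)"
    by (rule act_comm[OF soX soY])
  have nb: "nform (cartan x) (bracket X Y) = of_int j * nform X Y" by (rule nform_cartan_bracket[OF X])
  have cen: "(if m + j + (n + l) = 0 then sc (of_int (m + j) * nform X Y * k) v else 0)
     = (if m + n = 0 then sc (nform (cartan x) (bracket X Y) * k) v else 0)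
       + (if m + n = 0 then sc (of_int m * nform X Y * k) v else 0)"
  proof (cases "nform X Y = 0")
    case True thus ?thesis using nb by simp
  next
    case False
    hence jl: "j + l = 0" using ad_eigen_nform[OF X Y] by auto
    hence e: "(m + j + (n + l) = 0) = (m + n = 0)" by auto
    show ?thesis unfolding e nb by (simp add: sc_addl[symmetric] algebra_simps)
  qed
  have e2: "m + j + (n + l) = m + n + (j + l)" by simp
  show ?thesis
    unfolding AX AY AB act_add[OF soX] act_add[OF soY]
    using cm cen unfolding e2
    by (simp add: act_sc[OF soX] act_sc[OF soY] act_zero[OF soX] act_zero[OF soY] sc_addr ac_simps)
qed

lemma bilinear_eq_on_sogen:
  assumes P1: "\<And>X X' Y. X \<in> so8 \<Longrightarrow> X' \<in> so8 \<Longrightarrow> Y \<in> so8 \<Longrightarrow> P (\<lambda>a b. X a b + X' a b) Y = P X Y + P X' Y"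
    and P2: "\<And>X c Y. X \<in> so8 \<Longrightarrow> Y \<in> so8 \<Longrightarrow> P (\<lambda>a b. c * X a b) Y = sc c (P X Y)"
    and P3: "\<And>X Y Y'. X \<in> so8 \<Longrightarrow> Y \<in> so8 \<Longrightarrow> Y' \<in> so8 \<Longrightarrow> P X (\<lambda>a b. Y a b + Y' a b) = P X Y + P X Y'"
    and P4: "\<And>X c Y. X \<in> so8 \<Longrightarrow> Y \<in> so8 \<Longrightarrow> P X (\<lambda>a b. c * Y a b) = sc c (P X Y)"
    and Q1: "\<And>X X' Y. X \<in> so8 \<Longrightarrow> X' \<in> so8 \<Longrightarrow> Y \<in> so8 \<Longrightarrow> Q (\<lambda>a b. X a b + X' a b) Y = Q X Y + Q X' Y"
    and Q2: "\<And>X c Y. X \<in> so8 \<Longrightarrow> Y \<in> so8 \<Longrightarrow> Q (\<lambda>a b. c * X a b) Y = sc c (Q X Y)"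
    and Q3: "\<And>X Y Y'. X \<in> so8 \<Longrightarrow> Y \<in> so8 \<Longrightarrow> Y' \<in> so8 \<Longrightarrow> Q X (\<lambda>a b. Y a b + Y' a b) = Q X Y + Q X Y'"
    and Q4: "\<And>X c Y. X \<in> so8 \<Longrightarrow> Y \<in> so8 \<Longrightarrow> Q X (\<lambda>a b. c * Y a b) = sc c (Q X Y)"
    and B: "\<And>p q r s. p < 8 \<Longrightarrow> q < 8 \<Longrightarrow> r < 8 \<Longrightarrow> s < 8 \<Longrightarrow> P (sogen p q) (sogen r s) = Q (sogen p q) (sogen r s)"
    and X: "X \<in> so8" and Y: "Y \<in> so8"
  shows "P X Y = Q X Y"
proof -
  have a: "P (sogen p q) Y = Q (sogen p q) Y" if pq: "p < 8" "q < 8" for p q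
  proof -
    have "P (sogen p q) Y = sc (1/2) (\<Sum>r<8. \<Sum>s<8. sc (Y r s) (P (sogen p q) (sogen r s)))"
      by (rule linear_sogen_expansion[where f="P (sogen p q)"]) (use P3 P4 sogen_so8[OF pq] Y in auto)
    also have "\<dots> = sc (1/2) (\<Sum>r<8. \<Sum>s<8. sc (Y r s) (Q (sogen p q) (sogen r s)))"
      using B pq by simp
    also have "\<dots> = Q (sogen p q) Y"
      by (rule linear_sogen_expansion[where f="Q (sogen p q)", symmetric]) (use Q3 Q4 sogen_so8[OF pq] Y in auto)
    finally show ?thesis .
  qed
  have "P X Y = sc (1/2) (\<Sum>p<8. \<Sum>q<8. sc (X p q) (P (sogen p q) Y))"
    by (rule linear_sogen_expansion[where f="\<lambda>X. P X Y"]) (use P1 P2 X Y in auto)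
  also have "\<dots> = sc (1/2) (\<Sum>p<8. \<Sum>q<8. sc (X p q) (Q (sogen p q) Y))"
    using a by simp
  also have "\<dots> = Q X Y"
    by (rule linear_sogen_expansion[where f="\<lambda>X. Q X Y", symmetric]) (use Q1 Q2 X Y in auto)
  finally show ?thesis .
qed

lemma sflow_comm:
  assumes I: "integral_cartan x" and X: "X \<in> so8" and Y: "Y \<in> so8"
  shows "sflow (cartan x) k sc act X m (sflow (cartan x) k sc act Y n v)
      - sflow (cartan x) k sc act Y n (sflow (cartan x) k sc act X m v)
    = sflow (cartan x) k sc act (bracket X Y) (m + n) v + (if m + n = 0 then sc (of_int m * nform X Y * k) v else 0)"
proof -
  let ?A = "sflow (cartan x) k sc act"
  show ?thesis
  proof (rule bilinear_eq_on_sogen[where P="\<lambda>X Y. ?A X m (?A Y n v) - ?A Y n (?A X m v)"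
      and Q="\<lambda>X Y. ?A (bracket X Y) (m + n) v + (if m + n = 0 then sc (of_int m * nform X Y * k) v else 0)", OF _ _ _ _ _ _ _ _ _ X Y])
    fix X X' Y assume a: "X \<in> so8" "X' \<in> so8" "Y \<in> so8"
    show "?A (\<lambda>a b. X a b + X' a b) m (?A Y n v) - ?A Y n (?A (\<lambda>a b. X a b + X' a b) m v)
       = (?A X m (?A Y n v) - ?A Y n (?A X m v)) + (?A X' m (?A Y n v) - ?A Y n (?A X' m v))"
      using a by (simp add: sflow_madd sflow_add)
    show "?A (bracket (\<lambda>a b. X a b + X' a b) Y) (m + n) v + (if m + n = 0 then sc (of_int m * nform (\<lambda>a b. X a b + X' a b) Y * k) v else 0)
       = (?A (bracket X Y) (m + n) v + (if m + n = 0 then sc (of_int m * nform X Y * k) v else 0))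
       + (?A (bracket X' Y) (m + n) v + (if m + n = 0 then sc (of_int m * nform X' Y * k) v else 0))"
      using a by (simp add: bracket_addl nform_addl sflow_madd so8_bracket sc_addl distrib_left distrib_right)
  next
    fix X c Y assume a: "X \<in> so8" "Y \<in> so8"
    show "?A (\<lambda>a b. c * X a b) m (?A Y n v) - ?A Y n (?A (\<lambda>a b. c * X a b) m v)
       = sc c (?A X m (?A Y n v) - ?A Y n (?A X m v))"
      using a by (simp add: sflow_mscale sflow_sc sc_diff_r)
    show "?A (bracket (\<lambda>a b. c * X a b) Y) (m + n) v + (if m + n = 0 then sc (of_int m * nform (\<lambda>a b. c * X a b) Y * k) v else 0)
       = sc c (?A (bracket X Y) (m + n) v + (if m + n = 0 then sc (of_int m * nform X Y * k) v else 0))"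
      using a by (simp add: bracket_scl nform_scl sflow_mscale so8_bracket sc_addr algebra_simps)
  next
    fix X Y Y' assume a: "X \<in> so8" "Y \<in> so8" "Y' \<in> so8"
    show "?A X m (?A (\<lambda>a b. Y a b + Y' a b) n v) - ?A (\<lambda>a b. Y a b + Y' a b) n (?A X m v)
       = (?A X m (?A Y n v) - ?A Y n (?A X m v)) + (?A X m (?A Y' n v) - ?A Y' n (?A X m v))"
      using a by (simp add: sflow_madd sflow_add)
    show "?A (bracket X (\<lambda>a b. Y a b + Y' a b)) (m + n) v + (if m + n = 0 then sc (of_int m * nform X (\<lambda>a b. Y a b + Y' a b) * k) v else 0)
       = (?A (bracket X Y) (m + n) v + (if m + n = 0 then sc (of_int m * nform X Y * k) v else 0))
       + (?A (bracket X Y') (m + n) v + (if m + n = 0 then sc (of_int m * nform X Y' * k) v else 0))"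
      using a by (simp add: bracket_addr nform_addr sflow_madd so8_bracket sc_addl distrib_left distrib_right)
  next
    fix X c Y assume a: "X \<in> so8" "Y \<in> so8"
    show "?A X m (?A (\<lambda>a b. c * Y a b) n v) - ?A (\<lambda>a b. c * Y a b) n (?A X m v)
       = sc c (?A X m (?A Y n v) - ?A Y n (?A X m v))"
      using a by (simp add: sflow_mscale sflow_sc sc_diff_r)
    show "?A (bracket X (\<lambda>a b. c * Y a b)) (m + n) v + (if m + n = 0 then sc (of_int m * nform X (\<lambda>a b. c * Y a b) * k) v else 0)
       = sc c (?A (bracket X Y) (m + n) v + (if m + n = 0 then sc (of_int m * nform X Y * k) v else 0))"
      using a by (simp add: bracket_scr nform_scr sflow_mscale so8_bracket sc_addr algebra_simps)
  next
    fix p q r s :: nat assume pq: "p < 8" "q < 8" "r < 8" "s < 8"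
    obtain j where j: "ad_eigen x j (sogen p q)" using ad_eigen_sogen[OF I pq(1,2)] by blast
    obtain l where l: "ad_eigen x l (sogen r s)" using ad_eigen_sogen[OF I pq(3,4)] by blast
    show "?A (sogen p q) m (?A (sogen r s) n v) - ?A (sogen r s) n (?A (sogen p q) m v)
       = ?A (bracket (sogen p q) (sogen r s)) (m + n) v + (if m + n = 0 then sc (of_int m * nform (sogen p q) (sogen r s) * k) v else 0)"
      using sflow_comm_ad_eigen[OF j l, of m n v] by (simp add: diff_eq_eq ac_simps)
  qed
qed

lemma aff_module_sflow: assumes I: "integral_cartan x" shows "aff_module sc (sflow (cartan x) k sc act) k"
  unfolding aff_module_def
  by (intro conjI ballI allI) (simp_all add: sc_cvs sflow_add sflow_sc sflow_madd sflow_mscale sflow_comm[OF I])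

end

context affine_module begin

lemma irreducible_sflow: assumes I: "integral_cartan x" and irr: "irreducible_mod sc act"
  shows "irreducible_mod sc (sflow (cartan x) k sc act)"
  unfolding irreducible_mod_def
proof (intro conjI allI impI)
  show "\<exists>v::'m. v \<noteq> 0" using irr unfolding irreducible_mod_def by blast
  fix W assume a: "csubspace sc W \<and> (\<forall>X\<in>so8. \<forall>n. \<forall>v\<in>W. sflow (cartan x) k sc act X n v \<in> W)"
  hence W: "csubspace sc W" and inv: "\<And>X n v. X \<in> so8 \<Longrightarrow> v \<in> W \<Longrightarrow> sflow (cartan x) k sc act X n v \<in> W" by auto
  have "\<forall>X\<in>so8. \<forall>n. \<forall>v\<in>W. act X n v \<in> W"
  proof (intro ballI allI)
    fix X n v assume X: "X \<in> so8" and v: "v \<in> W"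
    have e: "X = (\<lambda>a b. \<Sum>j\<in>ad_eigs (cartan x). adcomp (cartan x) j X a b)"
      using adcomp_sum[OF X I] by (intro ext) simp
    have "act X n v = (\<Sum>j\<in>ad_eigs (cartan x). act (adcomp (cartan x) j X) n v)"
      by (subst e, rule act_msum) (simp_all add: ad_eigs_finite adcomp_so8[OF X])
    also have "\<dots> \<in> W"
    proof (rule csubspace_sum[OF W ad_eigs_finite], rule ballI)
      fix j
      have mhj: "ad_eigen x j (adcomp (cartan x) j X)" by (rule adcomp_ad_eigen[OF X])
      have "sflow (cartan x) k sc act (adcomp (cartan x) j X) (n - j) v = act (adcomp (cartan x) j X) n v
          + (if n - j = 0 then sc (nform (cartan x) (adcomp (cartan x) j X) * k) v else 0)"
        using sflow_ad_eigen[OF mhj, of "n - j" v] by simp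
      hence "act (adcomp (cartan x) j X) n v = sflow (cartan x) k sc act (adcomp (cartan x) j X) (n - j) v
          - (if n - j = 0 then sc (nform (cartan x) (adcomp (cartan x) j X) * k) v else 0)" by simp
      moreover have "sflow (cartan x) k sc act (adcomp (cartan x) j X) (n - j) v \<in> W"
        using inv adcomp_so8[OF X] v by blast
      moreover have "(if n - j = 0 then sc (nform (cartan x) (adcomp (cartan x) j X) * k) v else 0) \<in> W"
        using W v by (auto simp: csubspace_def)
      ultimately show "act (adcomp (cartan x) j X) n v \<in> W" using csubspace_diff[OF W] by simp
    qed
    finally show "act X n v \<in> W" .
  qed
  thus "W = {0} \<or> W = UNIV" using irr W unfolding irreducible_mod_def by blast
qed

lemma hw_vector_sflow_invariant:
  assumes I: "integral_cartan x"
    and minuscule: "\<And>X a b j. X \<in> so8 \<Longrightarrow> X a b \<noteq> 0 \<Longrightarrow> cdiag x a - cdiag x b = of_int j \<Longrightarrow> -1 \<le> j"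
    and dominant: "\<And>X a b j. X \<in> nplus \<Longrightarrow> X a b \<noteq> 0 \<Longrightarrow> cdiag x a - cdiag x b = of_int j \<Longrightarrow> 0 \<le> j"
    and u0: "u \<noteq> 0" and inv: "\<And>X n. X \<in> so8 \<Longrightarrow> 0 \<le> n \<Longrightarrow> act X n u = 0"
  shows "hw_vector sc (sflow (cartan x) k sc act) (\<lambda>a b. k * cartan x a b) u"
proof -
  have H: "sflow (cartan x) k sc act H 0 u = sc (nform (\<lambda>a b. k * cartan x a b) H) u" if Hc: "H \<in> cartan_sub" for H
  proof -
    obtain y where y: "H = cartan y" using Hc by (auto simp: cartan_sub_def)
    have "ad_eigen x 0 H" unfolding ad_eigen_def y using cartan_so8 by (auto simp: cartan_cdiag split: if_splits)
    thus ?thesis using sflow_ad_eigen[of x 0 H 0 u] inv[of H 0] cartan_so8 y by (simp add: nform_scl mult.commute)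
  qed
  have P: "sflow (cartan x) k sc act X n u = 0" if X: "X \<in> so8" and n: "n > 0" for X n
  proof -
    have "act (adcomp (cartan x) j X) (n + j) u = 0" for j
    proof (cases "n + j \<ge> 0")
      case True thus ?thesis using inv[OF adcomp_so8[OF X]] by simp
    next
      case False
      hence "adcomp (cartan x) j X = (\<lambda>a b. 0)" using minuscule[OF X] n by (intro adcomp_zero) force
      thus ?thesis using act_mzero by simp
    qed
    thus ?thesis using n unfolding sflow_def by simp
  qed
  have NP: "sflow (cartan x) k sc act X 0 u = 0" if X: "X \<in> nplus" for X
  proof -
    have so: "X \<in> so8" using X by (simp add: nplus_def)
    have "act (adcomp (cartan x) j X) (0 + j) u = 0" for j
    proof (cases "j \<ge> 0")
      case True thus ?thesis using inv[OF adcomp_so8[OF so]] by simp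
    next
      case False
      hence "adcomp (cartan x) j X = (\<lambda>a b. 0)" using dominant[OF X] by (intro adcomp_zero) force
      thus ?thesis using act_mzero by simp
    qed
    thus ?thesis using nform_cartan_nplus[OF X] unfolding sflow_def by simp
  qed
  show ?thesis unfolding hw_vector_def using u0 H P NP by auto
qed

end

context noncritical_module begin

lemma hw_vector_sflow_vacuum:
  assumes I: "integral_cartan x"
    and minuscule: "\<And>X a b j. X \<in> so8 \<Longrightarrow> X a b \<noteq> 0 \<Longrightarrow> cdiag x a - cdiag x b = of_int j \<Longrightarrow> -1 \<le> j"
    and dominant: "\<And>X a b j. X \<in> nplus \<Longrightarrow> X a b \<noteq> 0 \<Longrightarrow> cdiag x a - cdiag x b = of_int j \<Longrightarrow> 0 \<le> j"
    and hw: "hw_vector sc act (\<lambda>a b. 0) u" and irr: "irreducible_mod sc act"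
  shows "hw_vector sc (sflow (cartan x) k sc act) (\<lambda>a b. k * cartan x a b) u"
proof (rule hw_vector_sflow_invariant[OF I minuscule dominant])
  show "u \<noteq> 0" using hw by (simp add: hw_vector_def)
  show "act X n u = 0" if "X \<in> so8" "0 \<le> n" for X n
    using that hw vacuum_invariant[OF hw irr that(1)] by (cases "n = 0") (auto simp: hw_vector_def)
qed

end

section \<open>The minuscule fundamental coweights of d4\<close>

definition fw_coords :: "nat \<Rightarrow> nat \<Rightarrow> complex" where
  "fw_coords i = (if i = 1 then (\<lambda>j. if j = 0 then 1 else 0)
             else if i = 2 then (\<lambda>j. if j \<le> 1 then 1 else 0)
             else if i = 3 then (\<lambda>j. if j \<le> 2 then 1/2 else if j = 3 then -1/2 else 0)
             else if i = 4 then (\<lambda>j. if j \<le> 3 then 1/2 else 0)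
             else (\<lambda>j. 0))"

lemma fw_cartan: "fw i = cartan (fw_coords i)"
  by (simp add: fw_def fw_coords_def)

definition fw_twice :: "nat \<Rightarrow> nat \<Rightarrow> int" where
  "fw_twice i a = (if i = 1 then [2,0,0,0,-2,0,0,0] ! a
     else if i = 3 then [1,1,1,-1,-1,-1,-1,1] ! a else [1,1,1,1,-1,-1,-1,-1] ! a)"

lemma cdiag_fw: assumes i: "i \<in> {1,3,4}" and a: "a < 8" shows "cdiag (fw_coords i) a = of_int (fw_twice i a) / 2"
  using i less8_cases[OF a] by (auto simp: cdiag_def fw_coords_def fw_twice_def)

lemma fw_twice_diff_even: assumes i: "i \<in> {1,3,4}" and a: "a < 8" and b: "b < 8"
  shows "fw_twice i a - fw_twice i b = 2 * ((fw_twice i a - fw_twice i b) div 2)"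
  using i less8_cases[OF a] less8_cases[OF b] by (auto simp: fw_twice_def)

lemma cdiag_fw_diff: assumes i: "i \<in> {1,3,4}" and a: "a < 8" and b: "b < 8"
  shows "cdiag (fw_coords i) a - cdiag (fw_coords i) b = of_int ((fw_twice i a - fw_twice i b) div 2)"
proof -
  have "cdiag (fw_coords i) a - cdiag (fw_coords i) b = of_int (fw_twice i a - fw_twice i b) / 2"
    unfolding cdiag_fw[OF i a] cdiag_fw[OF i b] by (simp add: diff_divide_distrib)
  also have "\<dots> = of_int (2 * ((fw_twice i a - fw_twice i b) div 2)) / 2" using fw_twice_diff_even[OF i a b] by simp
  also have "\<dots> = of_int ((fw_twice i a - fw_twice i b) div 2)" by simp
  finally show ?thesis .
qed

lemma integral_fw: "i \<in> {1,3,4} \<Longrightarrow> integral_cartan (fw_coords i)"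
  unfolding integral_cartan_def using cdiag_fw_diff by blast

lemma cdiag_fw_diff_eq: assumes i: "i \<in> {1,3,4}" and a: "a < 8" and b: "b < 8" and j: "cdiag (fw_coords i) a - cdiag (fw_coords i) b = of_int j"
  shows "2 * j = fw_twice i a - fw_twice i b"
proof -
  have "(of_int j :: complex) = of_int ((fw_twice i a - fw_twice i b) div 2)" using j cdiag_fw_diff[OF i a b] by simp
  hence "j = (fw_twice i a - fw_twice i b) div 2" by (simp only: of_int_eq_iff)
  thus ?thesis using fw_twice_diff_even[OF i a b] by simp
qed

lemma fw_twice_diff_ge: assumes i: "i \<in> {1,3,4}" and a: "a < 8" and b: "b < 8" and nb: "b \<noteq> pidx a"
  shows "fw_twice i a - fw_twice i b \<ge> -2"
  using i less8_cases[OF a] less8_cases[OF b] nb by (auto simp: fw_twice_def pidx_def)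

lemma fw_twice_mono: assumes i: "i \<in> {1,3,4}" and a: "a < 8" and b: "b < 8" and r: "rho a > rho b"
  shows "fw_twice i a \<ge> fw_twice i b"
  using i less8_cases[OF a] less8_cases[OF b] r by (auto simp: fw_twice_def rho_def)

lemma fw_ad_eigenvalue_ge: assumes i: "i \<in> {1,3,4}" and X: "X \<in> so8" and ne: "X a b \<noteq> 0"
  and j: "cdiag (fw_coords i) a - cdiag (fw_coords i) b = of_int j" shows "-1 \<le> j"
proof -
  have "\<not> (8 \<le> a \<or> 8 \<le> b)" using so8_outside[OF X, of a b] ne by blast
  hence ab: "a < 8" "b < 8" by auto
  have "b \<noteq> pidx a" using so8_antidiag[OF X ab(1)] ne by auto
  thus ?thesis using fw_twice_diff_ge[OF i ab] cdiag_fw_diff_eq[OF i ab j] by simp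
qed

lemma fw_ad_eigenvalue_nplus: assumes i: "i \<in> {1,3,4}" and X: "X \<in> nplus" and ne: "X a b \<noteq> 0"
  and j: "cdiag (fw_coords i) a - cdiag (fw_coords i) b = of_int j" shows "0 \<le> j"
proof -
  have so: "X \<in> so8" using X by (simp add: nplus_def)
  have "\<not> (8 \<le> a \<or> 8 \<le> b)" using so8_outside[OF so, of a b] ne by blast
  hence ab: "a < 8" "b < 8" by auto
  thus ?thesis using fw_twice_mono[OF i ab nplus_rho_less[OF X ne]] cdiag_fw_diff_eq[OF i ab j] by simp
qed

lemma is_L_sflow_fw:
  assumes noncritical: "k \<noteq> -6" and i: "i \<in> {1, 3, 4}" and L: "is_L sc act k (\<lambda>a b. 0)"
  shows "is_L sc (sflow (fw i) k sc act) k (\<lambda>a b. k * fw i a b)"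
proof -
  obtain u where hw: "hw_vector sc act (\<lambda>a b. 0) u" using L by (auto simp: is_L_def)
  have aff: "aff_module sc act k" and irr: "irreducible_mod sc act" using L by (auto simp: is_L_def)
  interpret M: noncritical_module sc act k by unfold_locales (simp_all add: aff noncritical)
  have I: "integral_cartan (fw_coords i)" by (rule integral_fw[OF i])
  have "hw_vector sc (sflow (cartan (fw_coords i)) k sc act) (\<lambda>a b. k * cartan (fw_coords i) a b) u"
    by (rule M.hw_vector_sflow_vacuum[OF I fw_ad_eigenvalue_ge[OF i] fw_ad_eigenvalue_nplus[OF i] hw irr])
  thus ?thesis using M.aff_module_sflow[OF I] M.irreducible_sflow[OF I irr] unfolding is_L_def fw_cartan by blast
qed
section \<open>Uniqueness of irreducible highest weight modules\<close>

definition prod_sc ::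
  "(complex \<Rightarrow> 'm::ab_group_add \<Rightarrow> 'm) \<Rightarrow> (complex \<Rightarrow> 'n::ab_group_add \<Rightarrow> 'n) \<Rightarrow> complex \<Rightarrow> 'm \<times> 'n \<Rightarrow> 'm \<times> 'n" where
  "prod_sc sc1 sc2 c z = (sc1 c (fst z), sc2 c (snd z))"

definition prod_act ::
  "(mat \<Rightarrow> int \<Rightarrow> 'm \<Rightarrow> 'm) \<Rightarrow> (mat \<Rightarrow> int \<Rightarrow> 'n \<Rightarrow> 'n) \<Rightarrow> mat \<Rightarrow> int \<Rightarrow> 'm \<times> 'n \<Rightarrow> 'm \<times> 'n" where
  "prod_act A1 A2 X n z = (A1 X n (fst z), A2 X n (snd z))"

lemma prod_sc_Pair[simp]: "prod_sc sc1 sc2 c (x, y) = (sc1 c x, sc2 c y)"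
  by (simp add: prod_sc_def)

lemma prod_act_Pair[simp]: "prod_act A1 A2 X n (x, y) = (A1 X n x, A2 X n y)"
  by (simp add: prod_act_def)

lemma word_act_prod: "word_act (prod_act A1 A2) w (x, y) = (word_act A1 w x, word_act A2 w y)"
  by (induction w) auto

lemma fst_sum_list: "fst (sum_list (map f l)) = sum_list (map (\<lambda>x. fst (f x)) l)"
  by (induction l) auto

lemma snd_sum_list: "snd (sum_list (map f l)) = sum_list (map (\<lambda>x. snd (f x)) l)"
  by (induction l) auto

lemma aff_module_prod:
  fixes sc1 :: "complex \<Rightarrow> 'm::ab_group_add \<Rightarrow> 'm" and sc2 :: "complex \<Rightarrow> 'n::ab_group_add \<Rightarrow> 'n"
  assumes a1: "aff_module sc1 A1 k" and a2: "aff_module sc2 A2 k"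
  shows "aff_module (prod_sc sc1 sc2) (prod_act A1 A2) k"
proof -
  interpret M1: affine_module sc1 A1 k by unfold_locales (rule a1)
  interpret M2: affine_module sc2 A2 k by unfold_locales (rule a2)
  show ?thesis unfolding aff_module_def cvs_def prod_sc_def prod_act_def
  proof (intro conjI ballI allI)
    fix v :: "'m \<times> 'n" show "(sc1 1 (fst v), sc2 1 (snd v)) = v" by simp
  next
    fix a b and v :: "'m \<times> 'n"
    show "(sc1 a (fst (sc1 b (fst v), sc2 b (snd v))), sc2 a (snd (sc1 b (fst v), sc2 b (snd v)))) = (sc1 (a * b) (fst v), sc2 (a * b) (snd v))"
      by simp
    show "(sc1 (a + b) (fst v), sc2 (a + b) (snd v)) = (sc1 a (fst v), sc2 a (snd v)) + (sc1 b (fst v), sc2 b (snd v))"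
      by (simp add: M1.sc_addl M2.sc_addl)
  next
    fix a and v w :: "'m \<times> 'n"
    show "(sc1 a (fst (v + w)), sc2 a (snd (v + w))) = (sc1 a (fst v), sc2 a (snd v)) + (sc1 a (fst w), sc2 a (snd w))"
      by (simp add: M1.sc_addr M2.sc_addr)
  next
    fix X n and v w :: "'m \<times> 'n" assume X: "X \<in> so8"
    show "(A1 X n (fst (v + w)), A2 X n (snd (v + w))) = (A1 X n (fst v), A2 X n (snd v)) + (A1 X n (fst w), A2 X n (snd w))"
      using X by (simp add: M1.act_add M2.act_add)
  next
    fix X n c and v :: "'m \<times> 'n" assume X: "X \<in> so8"
    show "(A1 X n (fst (sc1 c (fst v), sc2 c (snd v))), A2 X n (snd (sc1 c (fst v), sc2 c (snd v))))
        = (sc1 c (fst (A1 X n (fst v), A2 X n (snd v))), sc2 c (snd (A1 X n (fst v), A2 X n (snd v))))"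
      using X by (simp add: M1.act_sc M2.act_sc)
  next
    fix X Y n and v :: "'m \<times> 'n" assume X: "X \<in> so8" and Y: "Y \<in> so8"
    show "(A1 (\<lambda>a b. X a b + Y a b) n (fst v), A2 (\<lambda>a b. X a b + Y a b) n (snd v)) = (A1 X n (fst v), A2 X n (snd v)) + (A1 Y n (fst v), A2 Y n (snd v))"
      using X Y by (simp add: M1.act_madd M2.act_madd)
  next
    fix X c n and v :: "'m \<times> 'n" assume X: "X \<in> so8"
    show "(A1 (\<lambda>a b. c * X a b) n (fst v), A2 (\<lambda>a b. c * X a b) n (snd v)) = (sc1 c (fst (A1 X n (fst v), A2 X n (snd v))), sc2 c (snd (A1 X n (fst v), A2 X n (snd v))))"
      using X by (simp add: M1.act_mscale M2.act_mscale)
  next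
    fix X Y m n and v :: "'m \<times> 'n" assume X: "X \<in> so8" and Y: "Y \<in> so8"
    show "(A1 X m (fst (A1 Y n (fst v), A2 Y n (snd v))), A2 X m (snd (A1 Y n (fst v), A2 Y n (snd v))))
        - (A1 Y n (fst (A1 X m (fst v), A2 X m (snd v))), A2 Y n (snd (A1 X m (fst v), A2 X m (snd v))))
        = (A1 (bracket X Y) (m + n) (fst v), A2 (bracket X Y) (m + n) (snd v))
          + (if m + n = 0 then (sc1 (of_int m * nform X Y * k) (fst v), sc2 (of_int m * nform X Y * k) (snd v)) else 0)"
      using M1.act_comm[OF X Y, of m n "fst v"] M2.act_comm[OF X Y, of m n "snd v"] by simp
  qed
qed

lemma graph_mod_iso:
  assumes N: "submodule (prod_sc sc1 sc2) (prod_act A1 A2) N"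
    and fst_N: "\<And>x. \<exists>y. (x, y) \<in> N" and snd_N: "\<And>y. \<exists>x. (x, y) \<in> N"
    and diff_N: "\<And>z z'. z \<in> N \<Longrightarrow> z' \<in> N \<Longrightarrow> z - z' \<in> N"
    and ker1: "\<And>x. (x, 0) \<in> N \<Longrightarrow> x = 0" and ker2: "\<And>y. (0, y) \<in> N \<Longrightarrow> y = 0"
  shows "\<exists>f. mod_iso sc1 A1 sc2 A2 f"
proof -
  have N_add: "z + z' \<in> N" if "z \<in> N" "z' \<in> N" for z z' using N that by (simp add: submodule_def csubspace_def)
  have N_sc: "prod_sc sc1 sc2 c z \<in> N" if "z \<in> N" for c z using N that by (simp add: submodule_def csubspace_def)
  have N_act: "prod_act A1 A2 X n z \<in> N" if "X \<in> so8" "z \<in> N" for X n z using N that by (simp add: submodule_def)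
  have uniq2: "y = y'" if "(x, y) \<in> N" "(x, y') \<in> N" for x y y'
    using ker2[of "y - y'"] diff_N[OF that] by simp
  have uniq1: "x = x'" if "(x, y) \<in> N" "(x', y) \<in> N" for x x' y
    using ker1[of "x - x'"] diff_N[OF that] by simp
  define f where "f x = (THE y. (x, y) \<in> N)" for x
  have fN: "(x, f x) \<in> N" for x
    unfolding f_def using fst_N[of x] uniq2 by (metis theI)
  have fe: "f x = y" if "(x, y) \<in> N" for x y using uniq2[OF fN that] .
  have "mod_iso sc1 A1 sc2 A2 f" unfolding mod_iso_def
  proof (intro conjI allI ballI)
    show "bij f"
    proof (rule bijI)
      show "inj f"
      proof (rule injI)
        fix x x' assume "f x = f x'"
        thus "x = x'" using uniq1[OF fN[of x]] fN[of x'] by simp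
      qed
      have "y \<in> range f" for y using snd_N[of y] fe by blast
      thus "surj f" by blast
    qed
  next
    fix v w show "f (v + w) = f v + f w" using fe N_add[OF fN[of v] fN[of w]] by simp
  next
    fix c v show "f (sc1 c v) = sc2 c (f v)" using fe N_sc[OF fN[of v], of c] by simp
  next
    fix X n v assume X: "X \<in> so8"
    show "f (A1 X n v) = A2 X n (f v)" using fe N_act[OF X fN[of v], of n] by simp
  qed
  thus ?thesis by blast
qed

lemma submodule_prod_kernels:
  assumes a1: "aff_module sc1 A1 k" and a2: "aff_module sc2 A2 k"
    and N: "submodule (prod_sc sc1 sc2) (prod_act A1 A2) N"
  shows "submodule sc1 A1 {x. (x, 0) \<in> N}" and "submodule sc2 A2 {y. (0, y) \<in> N}"
proof -
  interpret M1: affine_module sc1 A1 k by unfold_locales (rule a1)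
  interpret M2: affine_module sc2 A2 k by unfold_locales (rule a2)
  have N0: "(0, 0) \<in> N" using N by (simp add: submodule_def csubspace_def zero_prod_def)
  have N_add: "z + z' \<in> N" if "z \<in> N" "z' \<in> N" for z z' using N that by (simp add: submodule_def csubspace_def)
  have N_sc: "prod_sc sc1 sc2 c z \<in> N" if "z \<in> N" for c z using N that by (simp add: submodule_def csubspace_def)
  have N_act: "prod_act A1 A2 X n z \<in> N" if "X \<in> so8" "z \<in> N" for X n z using N that by (simp add: submodule_def)
  show "submodule sc1 A1 {x. (x, 0) \<in> N}"
    unfolding submodule_def csubspace_def
    using N0 N_add[of "(_, 0)" "(_, 0)"] N_sc[of "(_, 0)"] N_act[of _ "(_, 0)"] M2.act_zero by auto
  show "submodule sc2 A2 {y. (0, y) \<in> N}"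
    unfolding submodule_def csubspace_def
    using N0 N_add[of "(0, _)" "(0, _)"] N_sc[of "(0, _)"] N_act[of _ "(0, _)"] M1.act_zero by auto
qed

lemma submodule_prod_projections:
  assumes N: "submodule (prod_sc sc1 sc2) (prod_act A1 A2) N"
  shows "submodule sc1 A1 (fst ` N)" and "submodule sc2 A2 (snd ` N)"
proof -
  have N0: "0 \<in> N" using N by (simp add: submodule_def csubspace_def)
  have N_add: "z + z' \<in> N" if "z \<in> N" "z' \<in> N" for z z' using N that by (simp add: submodule_def csubspace_def)
  have N_sc: "prod_sc sc1 sc2 c z \<in> N" if "z \<in> N" for c z using N that by (simp add: submodule_def csubspace_def)
  have N_act: "prod_act A1 A2 X n z \<in> N" if "X \<in> so8" "z \<in> N" for X n z using N that by (simp add: submodule_def)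
  have "0 \<in> fst ` N" "0 \<in> snd ` N" using N0 by force+
  moreover have "fst z + fst z' = fst (z + z')" "snd z + snd z' = snd (z + z')"
    "sc1 c (fst z) = fst (prod_sc sc1 sc2 c z)" "sc2 c (snd z) = snd (prod_sc sc1 sc2 c z)"
    "A1 X n (fst z) = fst (prod_act A1 A2 X n z)" "A2 X n (snd z) = snd (prod_act A1 A2 X n z)" for z z' c X n
    by (simp_all add: prod_sc_def prod_act_def)
  ultimately show "submodule sc1 A1 (fst ` N)" "submodule sc2 A2 (snd ` N)"
    unfolding submodule_def csubspace_def using N_add N_sc N_act by (auto simp del: fst_add snd_add)
qed

text \<open>Goursat's argument: the kernels and the projections of \<open>N\<close> are submodules of the irreducible
  factors.\<close>

lemma irreducible_graph_mod_iso:
  assumes a1: "aff_module sc1 A1 k" and a2: "aff_module sc2 A2 k"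
    and i1: "irreducible_mod sc1 A1" and i2: "irreducible_mod sc2 A2"
    and N: "submodule (prod_sc sc1 sc2) (prod_act A1 A2) N"
    and u: "(u1, u2) \<in> N" "u1 \<noteq> 0" "u2 \<noteq> 0" and not1: "(u1, 0) \<notin> N" and not2: "(0, u2) \<notin> N"
  shows "\<exists>f. mod_iso sc1 A1 sc2 A2 f"
proof (rule graph_mod_iso[OF N])
  interpret P: affine_module "prod_sc sc1 sc2" "prod_act A1 A2" k by unfold_locales (rule aff_module_prod[OF a1 a2])
  show "z - z' \<in> N" if "z \<in> N" "z' \<in> N" for z z'
    using P.csubspace_diff N that by (simp add: submodule_def)
  have "{x. (x, 0) \<in> N} = {0}" using irreducible_submodule[OF i1 submodule_prod_kernels(1)[OF a1 a2 N]] not1 by auto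
  thus "x = 0" if "(x, 0) \<in> N" for x using that by auto
  have "{y. (0, y) \<in> N} = {0}" using irreducible_submodule[OF i2 submodule_prod_kernels(2)[OF a1 a2 N]] not2 by auto
  thus "y = 0" if "(0, y) \<in> N" for y using that by auto
  have "u1 \<in> fst ` N" "u2 \<in> snd ` N" using u(1) by force+
  hence "fst ` N = UNIV" "snd ` N = UNIV"
    using irreducible_submodule[OF i1 submodule_prod_projections(1)[OF N]]
      irreducible_submodule[OF i2 submodule_prod_projections(2)[OF N]] u(2,3) by auto
  thus "\<exists>y. (x, y) \<in> N" "\<exists>x. (x, y) \<in> N" for x y by (force, force)
qed

text \<open>Both coefficients are read off by \<open>hw_coefficient\<close> from one and the same expansion into lowering
  words.\<close>

lemma hw_pair_coefficients:
  fixes sc1 :: "complex \<Rightarrow> 'm::ab_group_add \<Rightarrow> 'm" and sc2 :: "complex \<Rightarrow> 'n::ab_group_add \<Rightarrow> 'n"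
  assumes noncritical: "k \<noteq> -6" and a1: "aff_module sc1 A1 k" and a2: "aff_module sc2 A2 k"
    and h1: "hw_vector sc1 A1 lam u1" and h2: "hw_vector sc2 A2 lam u2"
    and z: "(sc1 d1 u1, sc2 d2 u2)
      \<in> cspan (prod_sc sc1 sc2) {word_act (prod_act A1 A2) w (u1, u2) | w. graded_word w \<and> lowering_word w}"
  shows "d1 = d2"
proof -
  interpret M1: noncritical_module sc1 A1 k by unfold_locales (simp_all add: a1 noncritical)
  interpret M2: noncritical_module sc2 A2 k by unfold_locales (simp_all add: a2 noncritical)
  have vs: "cvs (prod_sc sc1 sc2)" using aff_module_prod[OF a1 a2] by (simp add: aff_module_def)
  obtain l where l: "\<forall>cz\<in>set l. graded_word (snd cz) \<and> lowering_word (snd cz)"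
    "(sc1 d1 u1, sc2 d2 u2) = sum_list (map (\<lambda>cz. prod_sc sc1 sc2 (fst cz) (word_act (prod_act A1 A2) (snd cz) (u1, u2))) l)"
    using cspan_sum_list[where f="\<lambda>w. word_act (prod_act A1 A2) w (u1, u2)" and P="\<lambda>w. graded_word w \<and> lowering_word w", OF z vs]
    by blast
  have "sum_list (map (\<lambda>cz. sc1 (fst cz) (word_act A1 (snd cz) u1)) l) = sc1 d1 u1"
    using arg_cong[OF l(2), of fst] by (simp add: fst_sum_list word_act_prod)
  hence "d1 = sum_list (map fst (filter (\<lambda>cw. snd cw = []) l))" by (rule M1.hw_coefficient[OF h1 l(1)])
  moreover have "sum_list (map (\<lambda>cz. sc2 (fst cz) (word_act A2 (snd cz) u2)) l) = sc2 d2 u2"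
    using arg_cong[OF l(2), of snd] by (simp add: snd_sum_list word_act_prod)
  hence "d2 = sum_list (map fst (filter (\<lambda>cw. snd cw = []) l))" by (rule M2.hw_coefficient[OF h2 l(1)])
  ultimately show ?thesis by simp
qed

lemma irreducible_hw_iso:
  fixes sc1 :: "complex \<Rightarrow> 'm::ab_group_add \<Rightarrow> 'm" and sc2 :: "complex \<Rightarrow> 'n::ab_group_add \<Rightarrow> 'n"
  assumes noncritical: "k \<noteq> -6"
    and L1: "is_L sc1 A1 k lam" and L2: "is_L sc2 A2 k lam"
  shows "\<exists>f. mod_iso sc1 A1 sc2 A2 f"
proof -
  obtain u1 u2 where h1: "hw_vector sc1 A1 lam u1" and h2: "hw_vector sc2 A2 lam u2"
    using L1 L2 by (auto simp: is_L_def)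
  have a1: "aff_module sc1 A1 k" and i1: "irreducible_mod sc1 A1"
    and a2: "aff_module sc2 A2 k" and i2: "irreducible_mod sc2 A2"
    using L1 L2 by (auto simp: is_L_def)
  interpret M1: noncritical_module sc1 A1 k by unfold_locales (simp_all add: a1 noncritical)
  interpret M2: noncritical_module sc2 A2 k by unfold_locales (simp_all add: a2 noncritical)
  interpret P: affine_module "prod_sc sc1 sc2" "prod_act A1 A2" k by unfold_locales (rule aff_module_prod[OF a1 a2])
  define N where "N = P.generated {(u1, u2)}"
  have U: "P.hw_set {(u1, u2)}"
    unfolding P.hw_set_def
  proof (intro conjI ballI allI impI)
    fix u X and n h :: int assume u: "u \<in> {(u1, u2)}" and X: "has_height h X" and r: "0 < n \<or> (n = 0 \<and> 0 < h)"
    thus "prod_act A1 A2 X n u = 0"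
      using h1 h2 has_height_so8[OF X] has_height_pos_nplus[OF X] by (auto simp: hw_vector_def zero_prod_def)
  next
    fix u H assume u: "u \<in> {(u1, u2)}" and H: "has_height 0 H"
    hence "prod_act A1 A2 H 0 u = prod_sc sc1 sc2 (nform lam H) u"
      using h1 h2 has_height_zero_cartan_sub[OF H] by (auto simp: hw_vector_def)
    moreover have "prod_sc sc1 sc2 (nform lam H) (u1, u2) \<in> cspan (prod_sc sc1 sc2) {(u1, u2)}"
      by (intro cspan_sc cspan_base) simp
    ultimately show "prod_act A1 A2 H 0 u \<in> cspan (prod_sc sc1 sc2) {(u1, u2)}" using u by simp
  qed
  have coefficients: "d1 = d2" if "(sc1 d1 u1, sc2 d2 u2) \<in> N" for d1 d2
    using P.generated_lowering[OF U] that unfolding N_def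
    by (intro hw_pair_coefficients[OF noncritical a1 a2 h1 h2]) auto
  have "(u1, u2) \<in> N" unfolding N_def P.generated_def by (rule cspan_base) (force intro: exI[of _ "[]"])
  moreover have "(u1, 0) \<notin> N" "(0, u2) \<notin> N" using coefficients[of 1 0] coefficients[of 0 1] by auto
  moreover have "u1 \<noteq> 0" "u2 \<noteq> 0" using h1 h2 by (auto simp: hw_vector_def)
  ultimately show ?thesis
    by (intro irreducible_graph_mod_iso[OF a1 a2 i1 i2 P.submodule_generated[of "{(u1, u2)}", folded N_def]])
qed

theorem mainTheorem6:
  fixes sc1 :: "complex \<Rightarrow> 'm::ab_group_add \<Rightarrow> 'm" and act1 :: "mat \<Rightarrow> int \<Rightarrow> 'm \<Rightarrow> 'm"
    and sc2 :: "complex \<Rightarrow> 'n::ab_group_add \<Rightarrow> 'n" and act2 :: "mat \<Rightarrow> int \<Rightarrow> 'n \<Rightarrow> 'n"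
    and i :: nat
  assumes "i \<in> {1, 3, 4}"
    and "is_L sc1 act1 (-2) (\<lambda>a b. 0)"
    and "is_L sc2 act2 (-2) (\<lambda>a b. -2 * fw i a b)"
  shows "\<exists>f. mod_iso sc1 (sflow (fw i) (-2) sc1 act1) sc2 act2 f"
proof -
  have "is_L sc1 (sflow (fw i) (-2) sc1 act1) (-2) (\<lambda>a b. -2 * fw i a b)"
    by (rule is_L_sflow_fw[OF _ assms(1,2)]) simp
  thus ?thesis using irreducible_hw_iso[OF _ _ assms(3)] by simp
qed

end
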